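(* For every $(a,b)\in\mathcal E$ there exists a direction $\theta$ in which the unfolded wind-tree surface $X_\infty=X_\infty(a,b)$ admits a strip decomposition.
   Context: $\mathcal E=\{(a,b)\in(0,1)^2:\ \frac1{1-a}=x+y\sqrt D,\ \frac1{1-b}=(1-x)+y\sqrt D,\ x,y\in\mathbb Q,\ D\in\mathbb Z_{>0}\}$. For the wind-tree table $T(a,b)$ ($\mathbb R^2$ minus the $\mathbb Z^2$-translates of $[0,a]\times[0,b]$), $X_\infty$ is the (infinite, $\mathbb Z^2$-periodic) translation surface obtained by unfolding: four copies of $T(a,b)$, indexed by the group generated by the horizontal and vertical reflections, glued along the sides of the obstacles so that billiard trajectories become straight-line flow; equivalently $X_\infty$ is the $\mathbb Z^2$-cover of the compact surface $X_{a,b}$ given by horizontal and vertical displacement. A strip is an isometrically embedded copy of $I\times\mathbb R$ ($I$ an open interval) in $X_\infty$; a strip decomposition in direction $\theta$ is a collection of pairwise disjoint strips whose lines $\{t\}\times\mathbb R$ are in direction $\theta$ and whose closures cover $X_\infty$. *)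

theory Defs
  imports "HOL-Analysis.Analysis"
begin

definition in_obst_int :: "real \<Rightarrow> real \<Rightarrow> real \<times> real \<Rightarrow> bool" where
  "in_obst_int a b p \<longleftrightarrow> (\<exists>m n::int. of_int m < fst p \<and> fst p < of_int m + a \<and>
                                      of_int n < snd p \<and> snd p < of_int n + b)"

definition table_cl :: "real \<Rightarrow> real \<Rightarrow> (real \<times> real) set" where
  "table_cl a b = {p. \<not> in_obst_int a b p}"

definition on_vside :: "real \<Rightarrow> real \<Rightarrow> real \<times> real \<Rightarrow> bool" where
  "on_vside a b p \<longleftrightarrow> (\<exists>m n::int. (fst p = of_int m \<or> fst p = of_int m + a) \<and>
                                   of_int n < snd p \<and> snd p < of_int n + b)"

definition on_hside :: "real \<Rightarrow> real \<Rightarrow> real \<times> real \<Rightarrow> bool" where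
  "on_hside a b p \<longleftrightarrow> (\<exists>m n::int. of_int m < fst p \<and> fst p < of_int m + a \<and>
                                   (snd p = of_int n \<or> snd p = of_int n + b))"

definition is_corner :: "real \<Rightarrow> real \<Rightarrow> real \<times> real \<Rightarrow> bool" where
  "is_corner a b p \<longleftrightarrow> (\<exists>m n::int. (fst p = of_int m \<or> fst p = of_int m + a) \<and>
                                    (snd p = of_int n \<or> snd p = of_int n + b))"

text \<open>Representatives of points of X_infinity: a copy index g (an element of the
  Klein four group generated by the horizontal and vertical reflections; fst g = True
  means the x-coordinate is reflected, snd g = True means the y-coordinate is reflected)
  together with a point of the closed table.\<close>
type_synonym wtrep = "(bool \<times> bool) \<times> (real \<times> real)"

definition XR :: "real \<Rightarrow> real \<Rightarrow> wtrep set" where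
  "XR a b = {z. snd z \<in> table_cl a b}"

text \<open>Gluing: a point on a vertical side in copy g is the same as that point in copy
  (reflection in x) g; similarly for horizontal sides; all four copies of an obstacle
  corner are glued to a single (cone) point.\<close>
definition wt_eq :: "real \<Rightarrow> real \<Rightarrow> wtrep \<Rightarrow> wtrep \<Rightarrow> bool" where
  "wt_eq a b z z' \<longleftrightarrow> snd z = snd z' \<and> snd z \<in> table_cl a b \<and>
     (fst z = fst z'
      \<or> (on_vside a b (snd z) \<and> fst z' = (\<not> fst (fst z), snd (fst z)))
      \<or> (on_hside a b (snd z) \<and> fst z' = (fst (fst z), \<not> snd (fst z)))
      \<or> is_corner a b (snd z))"

definition wt_class :: "real \<Rightarrow> real \<Rightarrow> wtrep \<Rightarrow> wtrep set" where
  "wt_class a b z = {z' \<in> XR a b. wt_eq a b z z'}"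

definition Xinf :: "real \<Rightarrow> real \<Rightarrow> wtrep set set" where
  "Xinf a b = wt_class a b ` XR a b"

definition Xtop :: "real \<Rightarrow> real \<Rightarrow> wtrep set topology" where
  "Xtop a b = topology (\<lambda>U. U \<subseteq> Xinf a b \<and>
      (\<forall>g. openin (top_of_set (table_cl a b)) {p \<in> table_cl a b. wt_class a b (g, p) \<in> U}))"

text \<open>Action of the copy index on displacement vectors: the translation chart of copy g
  is p \<mapsto> g p, so a developed displacement v corresponds to g v in table coordinates.\<close>
definition gmul :: "bool \<times> bool \<Rightarrow> real \<times> real \<Rightarrow> real \<times> real" where
  "gmul g v = ((if fst g then -1 else 1) * fst v, (if snd g then -1 else 1) * snd v)"

definition dirv :: "real \<Rightarrow> real \<times> real" where
  "dirv \<theta> = (cos \<theta>, sin \<theta>)"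

definition nrmv :: "real \<Rightarrow> real \<times> real" where
  "nrmv \<theta> = (- sin \<theta>, cos \<theta>)"

text \<open>A strip in direction theta: the image of an injective map Phi : I x R \<rightarrow> X_infinity
  (I a nonempty open interval) which is locally a Euclidean isometry in the translation
  charts of X_infinity, with linear part (t,s) \<mapsto> s1 t n + s2 s u (s1, s2 = +-1,
  u = (cos theta, sin theta), n = u rotated by pi/2), so that the lines {t} x R go
  in direction theta. Near a point on an obstacle side, the chart continues across the
  side into the reflected copy.\<close>
definition wt_strip :: "real \<Rightarrow> real \<Rightarrow> real \<Rightarrow> wtrep set set \<Rightarrow> bool" where
  "wt_strip a b \<theta> S \<longleftrightarrow>
    (\<exists>(I :: real set) (\<Phi> :: real \<times> real \<Rightarrow> wtrep set) (\<sigma>1 :: real) (\<sigma>2 :: real).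
       is_interval I \<and> open I \<and> I \<noteq> {} \<and> \<sigma>1 \<in> {-1, 1} \<and> \<sigma>2 \<in> {-1, 1} \<and>
       inj_on \<Phi> (I \<times> UNIV) \<and> \<Phi> ` (I \<times> UNIV) \<subseteq> Xinf a b \<and> S = \<Phi> ` (I \<times> UNIV) \<and>
       (\<forall>x0 \<in> I \<times> UNIV. \<exists>\<epsilon>>0. \<exists>g p0. \<Phi> x0 = wt_class a b (g, p0) \<and>
          (\<forall>x \<in> I \<times> UNIV. dist x x0 < \<epsilon> \<longrightarrow>
             (let q = p0 + gmul g ((\<sigma>1 * (fst x - fst x0)) *\<^sub>R nrmv \<theta>
                                   + (\<sigma>2 * (snd x - snd x0)) *\<^sub>R dirv \<theta>)
              in (q \<in> table_cl a b \<and> \<Phi> x = wt_class a b (g, q))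
               \<or> (on_vside a b p0 \<and> in_obst_int a b q \<and>
                  \<Phi> x = wt_class a b ((\<not> fst g, snd g), (2 * fst p0 - fst q, snd q)))
               \<or> (on_hside a b p0 \<and> in_obst_int a b q \<and>
                  \<Phi> x = wt_class a b ((fst g, \<not> snd g), (fst q, 2 * snd p0 - snd q)))))))"

definition wt_strip_decomp :: "real \<Rightarrow> real \<Rightarrow> real \<Rightarrow> wtrep set set set \<Rightarrow> bool" where
  "wt_strip_decomp a b \<theta> \<S> \<longleftrightarrow>
     (\<forall>S \<in> \<S>. wt_strip a b \<theta> S) \<and> pairwise disjnt \<S> \<and>
     (\<forall>z \<in> Xinf a b. \<exists>S \<in> \<S>. z \<in> Xtop a b closure_of S)"

definition wt_E :: "(real \<times> real) set" where
  "wt_E = {(a, b). 0 < a \<and> a < 1 \<and> 0 < b \<and> b < 1 \<and>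
     (\<exists>x y :: real. \<exists>D :: int. x \<in> \<rat> \<and> y \<in> \<rat> \<and> D > 0 \<and>
        1 / (1 - a) = x + y * sqrt (of_int D) \<and>
        1 / (1 - b) = (1 - x) + y * sqrt (of_int D))}"

end

theory Submission
  imports Defs
begin

text \<open>For \<open>(a, b) \<in> wt_E\<close> the number \<open>a / ((1 - a) (1 - b)) = y\<^sup>2 D - (x - 1)\<^sup>2\<close> is rational,
  so there is a slope \<open>s = tan \<theta>\<close> with \<open>s (1 - a) = p\<close> and \<open>s a = q (1 - b)\<close> for integers
  \<open>p \<ge> 1\<close> and \<open>q > 0\<close> even. In direction \<open>\<theta>\<close> the column \<open>a \<le> x \<le> 1\<close> between two obstacles
  carries strips of width \<open>b cos \<theta>\<close>: crossing the column raises a trajectory by the integer \<open>p\<close>,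
  so it always meets the vertical sides inside obstacle sides and bounces back and forth forever.
  The corridor \<open>b \<le> y \<le> 1\<close> carries strips of width \<open>(1 - b) cos \<theta>\<close>: under an obstacle the
  trajectory bounces between horizontal sides, and crossing the obstacle raises it by \<open>q\<close>
  corridor heights, an even number, so it leaves the obstacle as if it had never been reflected.
  The images of these two strips under the symmetries of the table are pairwise disjoint, since an
  explicit label computed from a point off the corners identifies its strip, and every point of
  the surface is the limit of a short ray, transversal to the strips, inside one of them.\<close>

section \<open>Slots of the lattice\<close>

definition in_slot :: "real \<Rightarrow> real \<Rightarrow> bool" where
  "in_slot A x \<longleftrightarrow> (\<exists>M::int. of_int M < x \<and> x < of_int M + A)"

definition slot_end :: "real \<Rightarrow> real \<Rightarrow> bool" where
  "slot_end A x \<longleftrightarrow> (\<exists>M::int. x = of_int M \<or> x = of_int M + A)"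

lemma in_obst_iff: "in_obst_int a b p \<longleftrightarrow> in_slot a (fst p) \<and> in_slot b (snd p)"
  unfolding in_obst_int_def in_slot_def by blast

lemma on_vside_iff: "on_vside a b p \<longleftrightarrow> slot_end a (fst p) \<and> in_slot b (snd p)"
  unfolding on_vside_def in_slot_def slot_end_def by blast

lemma on_hside_iff: "on_hside a b p \<longleftrightarrow> in_slot a (fst p) \<and> slot_end b (snd p)"
  unfolding on_hside_def in_slot_def slot_end_def by blast

lemma is_corner_iff: "is_corner a b p \<longleftrightarrow> slot_end a (fst p) \<and> slot_end b (snd p)"
  unfolding is_corner_def slot_end_def by blast

lemma in_slot_shift: "in_slot A (x + of_int m) \<longleftrightarrow> in_slot A x"
proof
  assume "in_slot A (x + of_int m)"
  then obtain M :: int where "of_int M < x + of_int m" "x + of_int m < of_int M + A"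
    by (auto simp: in_slot_def)
  then show "in_slot A x" unfolding in_slot_def by (intro exI[of _ "M - m"]) auto
next
  assume "in_slot A x"
  then obtain M :: int where "of_int M < x" "x < of_int M + A" by (auto simp: in_slot_def)
  then show "in_slot A (x + of_int m)" unfolding in_slot_def by (intro exI[of _ "M + m"]) auto
qed

lemma in_slot_refl: "in_slot A (A - x) \<longleftrightarrow> in_slot A x"
proof -
  have "in_slot A (A - x)" if "in_slot A x" for x
  proof -
    from that obtain M :: int where "of_int M < x" "x < of_int M + A" by (auto simp: in_slot_def)
    then show ?thesis unfolding in_slot_def by (intro exI[of _ "- M"]) auto
  qed
  from this[of x] this[of "A - x"] show ?thesis by auto
qed

lemma slot_end_shift: "slot_end A (x + of_int m) \<longleftrightarrow> slot_end A x"
proof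
  assume "slot_end A (x + of_int m)"
  then obtain M :: int where "x + of_int m = of_int M \<or> x + of_int m = of_int M + A"
    by (auto simp: slot_end_def)
  then show "slot_end A x" unfolding slot_end_def by (intro exI[of _ "M - m"]) auto
next
  assume "slot_end A x"
  then obtain M :: int where "x = of_int M \<or> x = of_int M + A" by (auto simp: slot_end_def)
  then show "slot_end A (x + of_int m)" unfolding slot_end_def by (intro exI[of _ "M + m"]) auto
qed

lemma slot_end_refl: "slot_end A (A - x) \<longleftrightarrow> slot_end A x"
proof -
  have "slot_end A (A - x)" if "slot_end A x" for x
  proof -
    from that obtain M :: int where "x = of_int M \<or> x = of_int M + A" by (auto simp: slot_end_def)
    then show ?thesis unfolding slot_end_def by (intro exI[of _ "- M"]) auto
  qed
  from this[of x] this[of "A - x"] show ?thesis by auto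
qed

lemma in_slot_not_slot_end: "0 < A \<Longrightarrow> A < 1 \<Longrightarrow> in_slot A y \<Longrightarrow> \<not> slot_end A y"
  unfolding in_slot_def slot_end_def
proof clarify
  fix M N :: int
  assume h: "0 < A" "A < 1" "of_int M < y" "y < of_int M + A" "y = of_int N \<or> y = of_int N + A"
  show False
  proof (cases "y = of_int N")
    case True
    then have "M < N" "N < M + 1" using h by linarith+
    then show False by linarith
  next
    case False
    then have "M - 1 < N" "N < M" using h by linarith+
    then show False by linarith
  qed
qed

lemma slot_end_in_gap:
  assumes "0 < A" "A < 1" "of_int N + A \<le> y" "y \<le> of_int N + 1" "slot_end A y"
  shows "y = of_int N + A \<or> y = of_int N + 1"
proof -
  obtain M :: int where M: "y = of_int M \<or> y = of_int M + A"
    using assms(5) unfolding slot_end_def by blast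
  show ?thesis
  proof (cases "y = of_int M")
    case True
    then have "M = N + 1" using assms by linarith
    then show ?thesis using True by simp
  next
    case False
    then have y: "y = of_int M + A" using M by simp
    then have "M = N" using assms by linarith
    then show ?thesis using y by simp
  qed
qed

lemma not_slot_end_gap:
  "0 < A \<Longrightarrow> A < 1 \<Longrightarrow> of_int N + A < y \<Longrightarrow> y < of_int N + 1 \<Longrightarrow> \<not> slot_end A y"
  using slot_end_in_gap[of A N y] by auto

lemma not_in_slot_gap: "of_int N + A \<le> y \<Longrightarrow> y \<le> of_int N + 1 \<Longrightarrow> \<not> in_slot A y"
  unfolding in_slot_def
proof clarify
  fix M :: int assume "of_int N + A \<le> y" "y \<le> of_int N + 1" "of_int M < y" "y < of_int M + A"
  then have "M < N + 1" "N < M" by linarith+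
  then show False by linarith
qed

lemma table_cl_column: "of_int m + a \<le> x \<Longrightarrow> x \<le> of_int m + 1 \<Longrightarrow> (x, y) \<in> table_cl a b"
  by (simp add: table_cl_def in_obst_iff not_in_slot_gap)

lemma table_cl_corridor: "of_int n + b \<le> y \<Longrightarrow> y \<le> of_int n + 1 \<Longrightarrow> (x, y) \<in> table_cl a b"
  by (simp add: table_cl_def in_obst_iff not_in_slot_gap)

section \<open>Symmetries of the table\<close>

definition refl_if :: "real \<Rightarrow> bool \<Rightarrow> real \<Rightarrow> real" where
  "refl_if A e x = (if e then A - x else x)"

lemma in_slot_refl_shift: "in_slot A (refl_if A e x + of_int m) \<longleftrightarrow> in_slot A x"
  by (simp add: refl_if_def in_slot_shift in_slot_refl)

lemma slot_end_refl_shift: "slot_end A (refl_if A e x + of_int m) \<longleftrightarrow> slot_end A x"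
  by (simp add: refl_if_def slot_end_shift slot_end_refl)

type_synonym table_sym = "(bool \<times> bool) \<times> (int \<times> int)"

definition sym_pt :: "real \<Rightarrow> real \<Rightarrow> table_sym \<Rightarrow> real \<times> real \<Rightarrow> real \<times> real" where
  "sym_pt a b \<tau> p = (refl_if a (fst (fst \<tau>)) (fst p) + of_int (fst (snd \<tau>)),
                     refl_if b (snd (fst \<tau>)) (snd p) + of_int (snd (snd \<tau>)))"

definition klein_mult :: "bool \<times> bool \<Rightarrow> bool \<times> bool \<Rightarrow> bool \<times> bool" where
  "klein_mult g e = (fst g \<noteq> fst e, snd g \<noteq> snd e)"

definition sym_rep :: "real \<Rightarrow> real \<Rightarrow> table_sym \<Rightarrow> wtrep \<Rightarrow> wtrep" where
  "sym_rep a b \<tau> z = (klein_mult (fst z) (fst \<tau>), sym_pt a b \<tau> (snd z))"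

definition sym_inv :: "table_sym \<Rightarrow> table_sym" where
  "sym_inv \<tau> = (fst \<tau>, ((if fst (fst \<tau>) then fst (snd \<tau>) else - fst (snd \<tau>)),
                         (if snd (fst \<tau>) then snd (snd \<tau>) else - snd (snd \<tau>))))"

definition sym_class :: "real \<Rightarrow> real \<Rightarrow> table_sym \<Rightarrow> wtrep set \<Rightarrow> wtrep set" where
  "sym_class a b \<tau> C = sym_rep a b \<tau> ` C"

lemma sym_inv_sym_pt [simp]: "sym_pt a b (sym_inv \<tau>) (sym_pt a b \<tau> p) = p"
  by (cases p) (auto simp: sym_pt_def sym_inv_def refl_if_def)

lemma sym_pt_sym_inv [simp]: "sym_pt a b \<tau> (sym_pt a b (sym_inv \<tau>) p) = p"
  by (cases p) (auto simp: sym_pt_def sym_inv_def refl_if_def)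

lemma klein_mult_cancel [simp]: "klein_mult (klein_mult g e) e = g"
  by (cases g; cases e) (auto simp: klein_mult_def)

lemma fst_sym_inv [simp]: "fst (sym_inv \<tau>) = fst \<tau>"
  by (simp add: sym_inv_def)

lemma sym_inv_sym_rep [simp]: "sym_rep a b (sym_inv \<tau>) (sym_rep a b \<tau> z) = z"
  by (cases z) (simp add: sym_rep_def)

lemma sym_rep_sym_inv [simp]: "sym_rep a b \<tau> (sym_rep a b (sym_inv \<tau>) z) = z"
  by (cases z) (simp add: sym_rep_def)

lemma in_obst_int_sym_pt [simp]: "in_obst_int a b (sym_pt a b \<tau> p) \<longleftrightarrow> in_obst_int a b p"
  by (simp add: in_obst_iff sym_pt_def in_slot_refl_shift)

lemma on_vside_sym_pt [simp]: "on_vside a b (sym_pt a b \<tau> p) \<longleftrightarrow> on_vside a b p"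
  by (simp add: on_vside_iff sym_pt_def in_slot_refl_shift slot_end_refl_shift)

lemma on_hside_sym_pt [simp]: "on_hside a b (sym_pt a b \<tau> p) \<longleftrightarrow> on_hside a b p"
  by (simp add: on_hside_iff sym_pt_def in_slot_refl_shift slot_end_refl_shift)

lemma is_corner_sym_pt [simp]: "is_corner a b (sym_pt a b \<tau> p) \<longleftrightarrow> is_corner a b p"
  by (simp add: is_corner_iff sym_pt_def slot_end_refl_shift)

lemma table_cl_sym_pt [simp]: "sym_pt a b \<tau> p \<in> table_cl a b \<longleftrightarrow> p \<in> table_cl a b"
  by (simp add: table_cl_def)

lemma sym_pt_eq_iff [simp]: "sym_pt a b \<tau> p = sym_pt a b \<tau> p' \<longleftrightarrow> p = p'"
  by (metis sym_inv_sym_pt)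

lemma sym_rep_eq_iff [simp]: "sym_rep a b \<tau> z = sym_rep a b \<tau> z' \<longleftrightarrow> z = z'"
  by (metis sym_inv_sym_rep)

lemma klein_mult_eq_iff [simp]: "klein_mult g e = klein_mult g' e \<longleftrightarrow> g = g'"
  by (metis klein_mult_cancel)

lemma klein_mult_flip_x: "klein_mult (\<not> fst g, snd g) e = (\<not> fst (klein_mult g e), snd (klein_mult g e))"
  by (simp add: klein_mult_def)

lemma klein_mult_flip_y: "klein_mult (fst g, \<not> snd g) e = (fst (klein_mult g e), \<not> snd (klein_mult g e))"
  by (simp add: klein_mult_def)

lemma wt_eq_sym_rep [simp]: "wt_eq a b (sym_rep a b \<tau> z) (sym_rep a b \<tau> z') \<longleftrightarrow> wt_eq a b z z'"
  unfolding wt_eq_def sym_rep_def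
  by (simp only: fst_conv snd_conv sym_pt_eq_iff table_cl_sym_pt on_vside_sym_pt on_hside_sym_pt
      is_corner_sym_pt klein_mult_eq_iff flip: klein_mult_flip_x klein_mult_flip_y)

lemma XR_sym_rep [simp]: "sym_rep a b \<tau> z \<in> XR a b \<longleftrightarrow> z \<in> XR a b"
  by (simp add: XR_def sym_rep_def)

lemma wt_class_sym_rep: "wt_class a b (sym_rep a b \<tau> z) = sym_rep a b \<tau> ` wt_class a b z"
proof (rule set_eqI, rule iffI)
  fix w assume "w \<in> wt_class a b (sym_rep a b \<tau> z)"
  then have "sym_rep a b (sym_inv \<tau>) w \<in> wt_class a b z"
    unfolding wt_class_def using wt_eq_sym_rep[of a b \<tau> z "sym_rep a b (sym_inv \<tau>) w"] by auto
  then show "w \<in> sym_rep a b \<tau> ` wt_class a b z" by (rule image_eqI[rotated]) simp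
qed (auto simp: wt_class_def)

lemma sym_class_wt_class: "sym_class a b \<tau> (wt_class a b z) = wt_class a b (sym_rep a b \<tau> z)"
  by (simp add: sym_class_def wt_class_sym_rep)

lemma wt_class_via_sym: "wt_class a b z = sym_class a b \<tau> (wt_class a b (sym_rep a b (sym_inv \<tau>) z))"
  by (simp add: sym_class_wt_class)

lemma sym_class_inj: "sym_class a b \<tau> C = sym_class a b \<tau> C' \<Longrightarrow> C = C'"
  unfolding sym_class_def by (metis inj_image_eq_iff inj_on_def sym_rep_eq_iff)

lemma sym_class_Xinf: "C \<in> Xinf a b \<Longrightarrow> sym_class a b \<tau> C \<in> Xinf a b"
  unfolding Xinf_def by (auto simp: sym_class_wt_class)

lemma sym_pt_add_gmul: "sym_pt a b \<tau> (p + gmul g v) = sym_pt a b \<tau> p + gmul (klein_mult g (fst \<tau>)) v"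
  by (cases p; cases v; cases g; cases \<tau>)
     (simp add: sym_pt_def gmul_def klein_mult_def refl_if_def algebra_simps)

lemma sym_pt_refl_x: "sym_pt a b \<tau> (2 * fst p0 - fst q, snd q) =
   (2 * fst (sym_pt a b \<tau> p0) - fst (sym_pt a b \<tau> q), snd (sym_pt a b \<tau> q))"
  by (simp add: sym_pt_def refl_if_def algebra_simps)

lemma sym_pt_refl_y: "sym_pt a b \<tau> (fst q, 2 * snd p0 - snd q) =
   (fst (sym_pt a b \<tau> q), 2 * snd (sym_pt a b \<tau> p0) - snd (sym_pt a b \<tau> q))"
  by (simp add: sym_pt_def refl_if_def algebra_simps)

section \<open>Strips\<close>

definition moves_to :: "real \<Rightarrow> real \<Rightarrow> bool \<times> bool \<Rightarrow> real \<times> real \<Rightarrow> real \<times> real \<Rightarrow> wtrep set \<Rightarrow> bool" where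
  "moves_to a b g p0 v C \<longleftrightarrow>
     (let q = p0 + gmul g v
      in (q \<in> table_cl a b \<and> C = wt_class a b (g, q))
       \<or> (on_vside a b p0 \<and> in_obst_int a b q \<and>
          C = wt_class a b ((\<not> fst g, snd g), (2 * fst p0 - fst q, snd q)))
       \<or> (on_hside a b p0 \<and> in_obst_int a b q \<and>
          C = wt_class a b ((fst g, \<not> snd g), (fst q, 2 * snd p0 - snd q))))"

definition chart_vec :: "real \<Rightarrow> real \<Rightarrow> real \<Rightarrow> real \<times> real \<Rightarrow> real \<times> real \<Rightarrow> real \<times> real" where
  "chart_vec \<theta> \<sigma>1 \<sigma>2 x x0 = (\<sigma>1 * (fst x - fst x0)) *\<^sub>R nrmv \<theta> + (\<sigma>2 * (snd x - snd x0)) *\<^sub>R dirv \<theta>"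

definition strip_chart ::
    "real \<Rightarrow> real \<Rightarrow> real \<Rightarrow> real \<Rightarrow> real \<Rightarrow> (real \<times> real \<Rightarrow> wtrep set) \<Rightarrow> (real \<times> real) set \<Rightarrow> real \<times> real \<Rightarrow> bool"
  where
  "strip_chart a b \<theta> \<sigma>1 \<sigma>2 \<Phi> J x0 \<longleftrightarrow> (\<exists>\<epsilon>>0. \<exists>g p0. \<Phi> x0 = wt_class a b (g, p0) \<and>
     (\<forall>x \<in> J. dist x x0 < \<epsilon> \<longrightarrow> moves_to a b g p0 (chart_vec \<theta> \<sigma>1 \<sigma>2 x x0) (\<Phi> x)))"

lemma wt_strip_iff: "wt_strip a b \<theta> S \<longleftrightarrow>
    (\<exists>I \<Phi> \<sigma>1 \<sigma>2. is_interval I \<and> open I \<and> I \<noteq> {} \<and> \<sigma>1 \<in> {-1, 1} \<and> \<sigma>2 \<in> {-1, 1} \<and>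
       inj_on \<Phi> (I \<times> UNIV) \<and> \<Phi> ` (I \<times> UNIV) \<subseteq> Xinf a b \<and> S = \<Phi> ` (I \<times> UNIV) \<and>
       (\<forall>x0 \<in> I \<times> UNIV. strip_chart a b \<theta> \<sigma>1 \<sigma>2 \<Phi> (I \<times> UNIV) x0))"
  unfolding wt_strip_def strip_chart_def moves_to_def chart_vec_def by (rule refl)

lemma moves_to_sym:
  assumes "moves_to a b g p0 v C"
  shows "moves_to a b (klein_mult g (fst \<tau>)) (sym_pt a b \<tau> p0) v (sym_class a b \<tau> C)"
proof -
  define q where "q = p0 + gmul g v"
  have q: "sym_pt a b \<tau> p0 + gmul (klein_mult g (fst \<tau>)) v = sym_pt a b \<tau> q"
    by (simp add: q_def sym_pt_add_gmul)
  have cls: "sym_class a b \<tau> (wt_class a b (h, p)) = wt_class a b (klein_mult h (fst \<tau>), sym_pt a b \<tau> p)"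
    for h p by (simp add: sym_class_wt_class sym_rep_def)
  from assms show ?thesis
    unfolding moves_to_def Let_def q_def[symmetric] q
    by (auto simp: cls sym_pt_refl_x sym_pt_refl_y klein_mult_flip_x klein_mult_flip_y)
qed

lemma wt_strip_of_charts:
  assumes "0 < w" and "inj_on \<Phi> ({0<..<w} \<times> UNIV)" and "\<Phi> ` ({0<..<w} \<times> UNIV) \<subseteq> Xinf a b"
    and "\<And>x0. x0 \<in> {0<..<w} \<times> UNIV \<Longrightarrow> strip_chart a b \<theta> 1 1 \<Phi> ({0<..<w} \<times> UNIV) x0"
  shows "wt_strip a b \<theta> (\<Phi> ` ({0<..<w} \<times> UNIV))"
  unfolding wt_strip_iff
  by (rule exI[of _ "{0<..<w}"], rule exI[of _ \<Phi>], rule exI[of _ 1], rule exI[of _ 1])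
    (use assms in \<open>auto simp: is_interval_oo\<close>)

lemma wt_strip_sym_class:
  assumes "wt_strip a b \<theta> S"
  shows "wt_strip a b \<theta> (sym_class a b \<tau> ` S)"
proof -
  obtain I \<Phi> \<sigma>1 \<sigma>2 where I: "is_interval I" "open I" "I \<noteq> {}" "\<sigma>1 \<in> {-1, 1}" "\<sigma>2 \<in> {-1, 1}"
    and inj: "inj_on \<Phi> (I \<times> UNIV)" and sub: "\<Phi> ` (I \<times> UNIV) \<subseteq> Xinf a b" and S: "S = \<Phi> ` (I \<times> UNIV)"
    and chart: "\<forall>x0 \<in> I \<times> UNIV. strip_chart a b \<theta> \<sigma>1 \<sigma>2 \<Phi> (I \<times> UNIV) x0"
    using assms unfolding wt_strip_iff by blast
  define \<Psi> where "\<Psi> = sym_class a b \<tau> \<circ> \<Phi>"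
  have inj\<Psi>: "inj_on \<Psi> (I \<times> UNIV)"
    using inj unfolding \<Psi>_def inj_on_def by (auto dest: sym_class_inj)
  have sub\<Psi>: "\<Psi> ` (I \<times> UNIV) \<subseteq> Xinf a b"
    using sub unfolding \<Psi>_def by (auto intro: sym_class_Xinf)
  have img\<Psi>: "sym_class a b \<tau> ` S = \<Psi> ` (I \<times> UNIV)"
    unfolding S \<Psi>_def by (simp add: image_comp)
  have chart\<Psi>: "strip_chart a b \<theta> \<sigma>1 \<sigma>2 \<Psi> (I \<times> UNIV) x0" if "x0 \<in> I \<times> UNIV" for x0
  proof -
    have "strip_chart a b \<theta> \<sigma>1 \<sigma>2 \<Phi> (I \<times> UNIV) x0"
      using chart that by blast
    then obtain \<epsilon> g p0 where "\<epsilon> > 0" and at: "\<Phi> x0 = wt_class a b (g, p0)"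
      and near: "\<forall>x \<in> I \<times> UNIV. dist x x0 < \<epsilon> \<longrightarrow> moves_to a b g p0 (chart_vec \<theta> \<sigma>1 \<sigma>2 x x0) (\<Phi> x)"
      unfolding strip_chart_def by blast
    have "\<Psi> x0 = wt_class a b (klein_mult g (fst \<tau>), sym_pt a b \<tau> p0)"
      using at by (simp add: \<Psi>_def sym_class_wt_class sym_rep_def)
    moreover have "\<forall>x \<in> I \<times> UNIV. dist x x0 < \<epsilon> \<longrightarrow>
        moves_to a b (klein_mult g (fst \<tau>)) (sym_pt a b \<tau> p0) (chart_vec \<theta> \<sigma>1 \<sigma>2 x x0) (\<Psi> x)"
      using near moves_to_sym unfolding \<Psi>_def comp_def by blast
    ultimately show ?thesis unfolding strip_chart_def using \<open>\<epsilon> > 0\<close> by blast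
  qed
  show ?thesis
    unfolding wt_strip_iff
    by (rule exI[of _ I], rule exI[of _ \<Psi>], rule exI[of _ \<sigma>1], rule exI[of _ \<sigma>2])
      (use I inj\<Psi> sub\<Psi> img\<Psi> chart\<Psi> in auto)
qed

section \<open>Folding the line onto an interval\<close>

text \<open>\<open>tri_wave L\<close> folds \<open>\<real>\<close> onto \<open>[0, L]\<close> by repeated reflection; \<open>tri_wave_odd L\<close> records
  whether an odd number of reflections was used, which decides the copy of the table.\<close>

definition tri_wave :: "real \<Rightarrow> real \<Rightarrow> real" where
  "tri_wave L v = (let j = \<lfloor>v / L\<rfloor> in if even j then v - of_int j * L else (of_int j + 1) * L - v)"

definition tri_wave_odd :: "real \<Rightarrow> real \<Rightarrow> bool" where
  "tri_wave_odd L v = odd \<lfloor>v / L\<rfloor>"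

lemma floor_div_eq:
  assumes "L > 0" "of_int j * L \<le> v" "v < (of_int j + 1) * L"
  shows "\<lfloor>v / L\<rfloor> = j"
proof -
  have "of_int j \<le> v / L" using assms by (simp add: pos_le_divide_eq)
  moreover have "v / L < of_int j + 1" using assms by (simp add: pos_divide_less_eq)
  ultimately show ?thesis by (simp add: floor_eq_iff)
qed

lemma tri_wave_piece:
  assumes "L > 0" "of_int j * L \<le> v" "v \<le> (of_int j + 1) * L"
  shows "tri_wave L v = (if even j then v - of_int j * L else (of_int j + 1) * L - v)"
proof (cases "v < (of_int j + 1) * L")
  case True
  then show ?thesis using floor_div_eq[OF assms(1,2) True] by (simp add: tri_wave_def)
next
  case False
  then have v: "v = (of_int (j+1)) * L" using assms by simp
  have "\<lfloor>v / L\<rfloor> = j + 1" using v assms(1) by simp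
  then show ?thesis using v by (auto simp: tri_wave_def algebra_simps)
qed

lemma tri_wave_odd_piece:
  assumes "L > 0" "of_int j * L \<le> v" "v < (of_int j + 1) * L"
  shows "tri_wave_odd L v = odd j"
  using floor_div_eq[OF assms] by (simp add: tri_wave_odd_def)

lemma tri_wave_range: "L > 0 \<Longrightarrow> 0 \<le> tri_wave L v \<and> tri_wave L v \<le> L"
proof -
  assume L: "L > 0"
  define j where "j = \<lfloor>v / L\<rfloor>"
  have "of_int j \<le> v / L" "v / L < of_int j + 1" unfolding j_def by linarith+
  then have "of_int j * L \<le> v" "v < (of_int j + 1) * L" using L
    by (simp_all add: pos_le_divide_eq pos_divide_less_eq)
  then show ?thesis using tri_wave_piece[OF L, of j v] L by (auto simp: algebra_simps)
qed

lemma tri_wave_fold: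
  assumes L: "L > 0"
  shows "\<exists>j::int. of_int j * L \<le> v \<and> v < (of_int j + 1) * L \<and> tri_wave L v = (if even j then v - of_int j * L else (of_int j + 1) * L - v) \<and> tri_wave_odd L v = odd j"
proof -
  define j where "j = \<lfloor>v / L\<rfloor>"
  have "of_int j \<le> v / L" "v / L < of_int j + 1" unfolding j_def by linarith+
  then have "of_int j * L \<le> v" "v < (of_int j + 1) * L" using L
    by (simp_all add: pos_le_divide_eq pos_divide_less_eq)
  then show ?thesis using tri_wave_piece[OF L, of j v] tri_wave_odd_piece[OF L, of j v] by (intro exI[of _ j]) auto
qed

lemma tri_wave_inj:
  assumes L: "L > 0" and e: "tri_wave L v = tri_wave L v'" and c: "tri_wave_odd L v = tri_wave_odd L v' \<or> tri_wave L v = 0 \<or> tri_wave L v = L"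
  shows "\<exists>k::int. v' = v + of_int k * L"
proof -
  obtain j where j: "of_int j * L \<le> v" "v < (of_int j + 1) * L" "tri_wave L v = (if even j then v - of_int j * L else (of_int j + 1) * L - v)" "tri_wave_odd L v = odd j"
    using tri_wave_fold[OF L] by blast
  obtain j' where j': "of_int j' * L \<le> v'" "v' < (of_int j' + 1) * L" "tri_wave L v' = (if even j' then v' - of_int j' * L else (of_int j' + 1) * L - v')" "tri_wave_odd L v' = odd j'"
    using tri_wave_fold[OF L] by blast
  show ?thesis
  proof (cases "tri_wave_odd L v = tri_wave_odd L v'")
    case True
    then have "even j = even j'" using j j' by simp
    then show ?thesis using e j j'
      by (cases "even j") (rule exI[of _ "j' - j"]; simp add: algebra_simps)+
  next
    case False
    then have z: "tri_wave L v = 0 \<or> tri_wave L v = L" using c by simp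
    have "\<exists>k::int. v = of_int k * L" using z j L
      by (cases "even j") (auto intro: exI[of _ j] exI[of _ "j+1"] simp: algebra_simps)
    then obtain k::int where k: "v = of_int k * L" by blast
    have "\<exists>k::int. v' = of_int k * L" using z j' L e
      by (cases "even j'") (auto intro: exI[of _ j'] exI[of _ "j'+1"] simp: algebra_simps)
    then obtain k'::int where k': "v' = of_int k' * L" by blast
    show ?thesis using k k' by (intro exI[of _ "k' - k"]) (simp add: algebra_simps)
  qed
qed

lemma tri_wave_periodic: "L > 0 \<Longrightarrow> tri_wave L (v - 2 * L * of_int N) = tri_wave L v \<and> tri_wave_odd L (v - 2 * L * of_int N) = tri_wave_odd L v"
proof -
  assume L: "L > 0"
  have h: "(v - 2 * L * of_int N) / L = v / L - of_int (2 * N)" using L by (simp add: field_simps)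
  have f: "\<lfloor>(v - 2 * L * of_int N) / L\<rfloor> = \<lfloor>v / L\<rfloor> - 2 * N" by (subst h) (rule floor_diff_of_int)
  have e: "even (\<lfloor>v / L\<rfloor> - 2 * N) = even \<lfloor>v / L\<rfloor>" by simp
  show ?thesis unfolding tri_wave_def tri_wave_odd_def Let_def f e by (simp add: algebra_simps)
qed

lemma mod_double_eq:
  assumes H: "H > 0" and R: "0 \<le> R" "R < 2 * H" and v: "v = R + 2 * H * of_int N"
  shows "v - 2 * H * of_int \<lfloor>v / (2 * H)\<rfloor> = R"
proof -
  have "v / (2 * H) = of_int N + R / (2 * H)" using H v by (simp add: field_simps)
  moreover have "0 \<le> R / (2 * H)" "R / (2 * H) < 1" using H R by (auto simp: divide_simps)
  ultimately have "\<lfloor>v / (2 * H)\<rfloor> = N" by (intro floor_unique) auto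
  then show ?thesis using v by simp
qed

lemma mod_double_shift: "H > 0 \<Longrightarrow> (v + 2 * H) - 2 * H * of_int \<lfloor>(v + 2 * H) / (2 * H)\<rfloor> = v - 2 * H * of_int \<lfloor>v / (2 * H)\<rfloor>"
proof -
  assume H: "H > 0"
  have "(v + 2 * H) / (2 * H) = v / (2 * H) + 1" using H by (simp add: field_simps)
  then have "\<lfloor>(v + 2 * H) / (2 * H)\<rfloor> = \<lfloor>v / (2 * H)\<rfloor> + 1" by simp
  then show ?thesis by (simp add: algebra_simps)
qed

lemma int_mult_abs_less_self: "\<bar>of_int k * H\<bar> < (H::real) \<Longrightarrow> k = 0"
proof (rule ccontr)
  assume h: "\<bar>of_int k * H\<bar> < H" "k \<noteq> 0"
  then have H: "H > 0" by (metis abs_ge_zero le_less_trans)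
  have "\<bar>of_int k::real\<bar> \<ge> 1" using h by linarith
  then have "\<bar>of_int k::real\<bar> * H \<ge> 1 * H" using H by (intro mult_right_mono) auto
  then show False using h(1) by (simp add: abs_mult abs_of_pos[OF H])
qed

definition sgn_of :: "bool \<Rightarrow> real" where "sgn_of e = (if e then -1 else 1)"

lemma sgn_of_sq: "sgn_of e * sgn_of e = 1" by (simp add: sgn_of_def)

lemma ceiling_minus_one_eq: "of_int i < x \<Longrightarrow> x \<le> of_int i + 1 \<Longrightarrow> \<lceil>x\<rceil> - 1 = i"
proof -
  assume "of_int i < x" "x \<le> of_int i + 1"
  then have "\<lceil>x\<rceil> = i + 1" by (intro ceiling_unique) auto
  then show ?thesis by simp
qed

section \<open>Rays entering a slot\<close>

lemma small_mult_bound: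
  fixes \<alpha> d :: real
  assumes "\<alpha> \<noteq> 0" "d > 0"
  shows "\<exists>\<delta>0>0. \<forall>\<delta>. 0 < \<delta> \<and> \<delta> < \<delta>0 \<longrightarrow> \<bar>\<alpha> * \<delta>\<bar> < d \<and> (\<alpha> > 0 \<longrightarrow> \<alpha> * \<delta> > 0) \<and> (\<alpha> < 0 \<longrightarrow> \<alpha> * \<delta> < 0)"
proof (intro exI[of _ "d / \<bar>\<alpha>\<bar>"] conjI)
  show "d / \<bar>\<alpha>\<bar> > 0" using assms by simp
  show "\<forall>\<delta>. 0 < \<delta> \<and> \<delta> < d / \<bar>\<alpha>\<bar> \<longrightarrow> \<bar>\<alpha> * \<delta>\<bar> < d \<and> (\<alpha> > 0 \<longrightarrow> \<alpha> * \<delta> > 0) \<and> (\<alpha> < 0 \<longrightarrow> \<alpha> * \<delta> < 0)"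
  proof (intro allI impI)
    fix \<delta> :: real assume h: "0 < \<delta> \<and> \<delta> < d / \<bar>\<alpha>\<bar>"
    then have "\<bar>\<alpha>\<bar> * \<delta> < d" using assms by (simp add: less_divide_eq mult.commute)
    then have "\<bar>\<alpha> * \<delta>\<bar> < d" using h by (simp add: abs_mult)
    then show "\<bar>\<alpha> * \<delta>\<bar> < d \<and> (\<alpha> > 0 \<longrightarrow> \<alpha> * \<delta> > 0) \<and> (\<alpha> < 0 \<longrightarrow> \<alpha> * \<delta> < 0)"
      using h by (simp add: mult_neg_pos)
  qed
qed

definition slot_lower_end :: "real \<Rightarrow> bool" where "slot_lower_end x \<longleftrightarrow> (\<exists>M::int. x = of_int M)"

definition slot_upper_end :: "real \<Rightarrow> real \<Rightarrow> bool" where "slot_upper_end A x \<longleftrightarrow> (\<exists>M::int. x = of_int M + A)"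

definition enters_slot :: "real \<Rightarrow> real \<Rightarrow> real \<Rightarrow> bool" where
  "enters_slot A x \<alpha> \<longleftrightarrow> in_slot A x \<or> (slot_lower_end x \<and> \<alpha> > 0) \<or> (slot_upper_end A x \<and> \<alpha> < 0)"

lemma slot_end_of_lower: "slot_lower_end x \<Longrightarrow> slot_end A x" by (auto simp: slot_lower_end_def slot_end_def)

lemma slot_end_of_upper: "slot_upper_end A x \<Longrightarrow> slot_end A x" by (auto simp: slot_upper_end_def slot_end_def)

lemma slot_lower_not_upper: "0 < A \<Longrightarrow> A < 1 \<Longrightarrow> slot_lower_end x \<Longrightarrow> \<not> slot_upper_end A x"
proof
  assume h: "0 < A" "A < 1" "slot_lower_end x" "slot_upper_end A x"
  from h(3) obtain M :: int where M: "x = of_int M" unfolding slot_lower_end_def by blast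
  from h(4) obtain N :: int where N: "x = of_int N + A" unfolding slot_upper_end_def by blast
  from M N have "(of_int N::real) < of_int M" "(of_int M::real) < of_int N + 1" using h by auto
  then have "N < M" "M < N + 1" by linarith+
  then show False by linarith
qed

lemma ray_slot:
  assumes A: "0 < A" "A < 1" and al: "\<alpha> \<noteq> 0"
  shows "\<exists>\<delta>0>0. \<exists>i::int.
     ((\<forall>\<delta>. 0 < \<delta> \<and> \<delta> < \<delta>0 \<longrightarrow> of_int i < x + \<alpha> * \<delta> \<and> x + \<alpha> * \<delta> < of_int i + A) \<and>
         (enters_slot A x \<alpha>))
   \<or> (\<forall>\<delta>. 0 < \<delta> \<and> \<delta> < \<delta>0 \<longrightarrow> of_int i + A < x + \<alpha> * \<delta> \<and> x + \<alpha> * \<delta> < of_int i + 1)"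
proof -
  define i0 where "i0 = \<lfloor>x\<rfloor>"
  define f where "f = x - of_int i0"
  have f: "0 \<le> f" "f < 1" unfolding f_def i0_def by linarith+
  have xf: "x = of_int i0 + f" by (simp add: f_def)
  consider "0 < f \<and> f < A" | "A < f" | "f = 0" | "f = A" using f by linarith
  then show ?thesis
  proof cases
    case 1
    obtain \<delta>0 where d: "\<delta>0 > 0" "\<forall>\<delta>. 0 < \<delta> \<and> \<delta> < \<delta>0 \<longrightarrow> \<bar>\<alpha> * \<delta>\<bar> < min f (A - f)"
      using small_mult_bound[OF al, of "min f (A - f)"] 1 by auto
    have "in_slot A x" unfolding in_slot_def using 1 by (intro exI[of _ i0]) (auto simp: xf)
    then show ?thesis using d 1 by (intro exI[of _ \<delta>0] conjI exI[of _ i0] disjI1) (auto simp: xf abs_less_iff enters_slot_def)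
  next
    case 2
    obtain \<delta>0 where d: "\<delta>0 > 0" "\<forall>\<delta>. 0 < \<delta> \<and> \<delta> < \<delta>0 \<longrightarrow> \<bar>\<alpha> * \<delta>\<bar> < min (f - A) (1 - f)"
      using small_mult_bound[OF al, of "min (f - A) (1 - f)"] 2 f by auto
    then show ?thesis using 2 by (intro exI[of _ \<delta>0] conjI exI[of _ i0] disjI2) (auto simp: xf abs_less_iff)
  next
    case 3
    have Z: "slot_lower_end x" unfolding slot_lower_end_def using 3 by (auto simp: xf)
    show ?thesis
    proof (cases "\<alpha> > 0")
      case True
      obtain \<delta>0 where d: "\<delta>0 > 0" "\<forall>\<delta>. 0 < \<delta> \<and> \<delta> < \<delta>0 \<longrightarrow> \<bar>\<alpha> * \<delta>\<bar> < A \<and> \<alpha> * \<delta> > 0"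
        using small_mult_bound[OF al A(1)] True by auto
      then have "\<forall>\<delta>. 0 < \<delta> \<and> \<delta> < \<delta>0 \<longrightarrow> of_int i0 < x + \<alpha> * \<delta> \<and> x + \<alpha> * \<delta> < of_int i0 + A"
        using 3 by (auto simp: xf abs_less_iff)
      then show ?thesis using d(1) Z True unfolding enters_slot_def by blast
    next
      case False
      then have an: "\<alpha> < 0" using al by simp
      obtain \<delta>0 where d: "\<delta>0 > 0" "\<forall>\<delta>. 0 < \<delta> \<and> \<delta> < \<delta>0 \<longrightarrow> \<bar>\<alpha> * \<delta>\<bar> < 1 - A \<and> \<alpha> * \<delta> < 0"
        using small_mult_bound[OF al, of "1 - A"] A an by auto
      then show ?thesis using 3 an by (intro exI[of _ \<delta>0] conjI exI[of _ "i0 - 1"] disjI2) (auto simp: xf abs_less_iff)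
    qed
  next
    case 4
    have Z: "slot_upper_end A x" unfolding slot_upper_end_def using 4 by (auto simp: xf)
    show ?thesis
    proof (cases "\<alpha> > 0")
      case True
      obtain \<delta>0 where d: "\<delta>0 > 0" "\<forall>\<delta>. 0 < \<delta> \<and> \<delta> < \<delta>0 \<longrightarrow> \<bar>\<alpha> * \<delta>\<bar> < 1 - A \<and> \<alpha> * \<delta> > 0"
        using small_mult_bound[OF al, of "1 - A"] True A by auto
      then show ?thesis using 4 True by (intro exI[of _ \<delta>0] conjI exI[of _ i0] disjI2) (auto simp: xf abs_less_iff)
    next
      case False
      then have an: "\<alpha> < 0" using al by simp
      obtain \<delta>0 where d: "\<delta>0 > 0" "\<forall>\<delta>. 0 < \<delta> \<and> \<delta> < \<delta>0 \<longrightarrow> \<bar>\<alpha> * \<delta>\<bar> < A \<and> \<alpha> * \<delta> < 0"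
        using small_mult_bound[OF al A(1)] an by auto
      then have "\<forall>\<delta>. 0 < \<delta> \<and> \<delta> < \<delta>0 \<longrightarrow> of_int i0 < x + \<alpha> * \<delta> \<and> x + \<alpha> * \<delta> < of_int i0 + A"
        using 4 by (auto simp: xf abs_less_iff)
      then show ?thesis using d(1) Z an unfolding enters_slot_def by blast
    qed
  qed
qed

section \<open>The topology of the surface\<close>

lemma wt_eq_of_class_eq:
  assumes "z' \<in> XR a b" "wt_class a b z = wt_class a b z'"
  shows "wt_eq a b z z'"
proof -
  have "z' \<in> wt_class a b z'" using assms(1) by (auto simp: wt_class_def wt_eq_def XR_def)
  then have "z' \<in> wt_class a b z" using assms(2) by simp
  then show ?thesis by (simp add: wt_class_def)
qed

lemma istopology_Xtop: "istopology (\<lambda>U. U \<subseteq> Xinf a b \<and>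
      (\<forall>g. openin (top_of_set (table_cl a b)) {p \<in> table_cl a b. wt_class a b (g, p) \<in> U}))"
  unfolding istopology_def
proof (intro conjI allI impI ballI)
  fix S T assume S: "S \<subseteq> Xinf a b \<and> (\<forall>g. openin (top_of_set (table_cl a b)) {p \<in> table_cl a b. wt_class a b (g, p) \<in> S})"
    and T: "T \<subseteq> Xinf a b \<and> (\<forall>g. openin (top_of_set (table_cl a b)) {p \<in> table_cl a b. wt_class a b (g, p) \<in> T})"
  show "S \<inter> T \<subseteq> Xinf a b" using S by auto
  fix g
  have eq: "{p \<in> table_cl a b. wt_class a b (g, p) \<in> S \<inter> T} =
        {p \<in> table_cl a b. wt_class a b (g, p) \<in> S} \<inter> {p \<in> table_cl a b. wt_class a b (g, p) \<in> T}" by auto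
  have S': "openin (top_of_set (table_cl a b)) {p \<in> table_cl a b. wt_class a b (g, p) \<in> S}" using S by blast
  have T': "openin (top_of_set (table_cl a b)) {p \<in> table_cl a b. wt_class a b (g, p) \<in> T}" using T by blast
  show "openin (top_of_set (table_cl a b)) {p \<in> table_cl a b. wt_class a b (g, p) \<in> S \<inter> T}"
    unfolding eq using openin_Int[OF S' T'] .
next
  fix K assume K: "\<forall>U\<in>K. U \<subseteq> Xinf a b \<and> (\<forall>g. openin (top_of_set (table_cl a b)) {p \<in> table_cl a b. wt_class a b (g, p) \<in> U})"
  show "\<Union>K \<subseteq> Xinf a b" using K by auto
  fix g
  have eq: "{p \<in> table_cl a b. wt_class a b (g, p) \<in> \<Union>K} = \<Union>((\<lambda>U. {p \<in> table_cl a b. wt_class a b (g, p) \<in> U}) ` K)" by auto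
  have "\<forall>V\<in>(\<lambda>U. {p \<in> table_cl a b. wt_class a b (g, p) \<in> U}) ` K. openin (top_of_set (table_cl a b)) V"
    using K by blast
  then show "openin (top_of_set (table_cl a b)) {p \<in> table_cl a b. wt_class a b (g, p) \<in> \<Union>K}"
    unfolding eq using openin_Union by blast
qed

lemma openin_Xtop: "openin (Xtop a b) U \<longleftrightarrow> U \<subseteq> Xinf a b \<and>
      (\<forall>g. openin (top_of_set (table_cl a b)) {p \<in> table_cl a b. wt_class a b (g, p) \<in> U})"
  unfolding Xtop_def using istopology_Xtop by simp

lemma Xinf_topspace: "z \<in> Xinf a b \<Longrightarrow> z \<in> topspace (Xtop a b)"
proof -
  assume z: "z \<in> Xinf a b"
  have "{p \<in> table_cl a b. wt_class a b (g, p) \<in> Xinf a b} = table_cl a b" for g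
    by (auto simp: Xinf_def XR_def)
  then have "openin (Xtop a b) (Xinf a b)" by (simp add: openin_Xtop)
  then show ?thesis using z openin_subset by blast
qed

section \<open>The strips in a rational direction\<close>

locale wind_tree_dir =
  fixes a b s c th :: real and pp qq :: int
  assumes a0: "0 < a" and a1: "a < 1" and b0: "0 < b" and b1: "b < 1"
    and pp1: "pp \<ge> 1" and qq_even: "even qq" and qq0: "qq > 0"
    and sp: "s * (1 - a) = of_int pp" and sq: "s * a = of_int qq * (1 - b)"
    and c0: "c > 0" and cs: "c * c * (1 + s * s) = 1"
    and cth: "cos th = c" and sth: "sin th = s * c"
begin

lemma slope_pos: "s > 0"
proof -
  have "s * (1 - a) > 0" using sp pp1 by simp
  then show ?thesis using a1 by (simp add: zero_less_mult_iff)
qed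

lemma nrmv_th: "nrmv th = (- (s * c), c)" by (simp add: nrmv_def cth sth)

lemma dirv_th: "dirv th = (c, s * c)" by (simp add: dirv_def cth sth)

definition kappa where "kappa = c * (1 + s * s)"

lemma kappa_pos: "kappa > 0" using c0 slope_pos by (simp add: kappa_def add_pos_nonneg)

lemma c_kappa: "c * kappa = 1" using cs by (simp add: kappa_def algebra_simps)

definition disp :: "real \<times> real \<Rightarrow> real \<times> real \<Rightarrow> real \<times> real" where
  "disp x x0 = chart_vec th 1 1 x x0"

lemma disp_eq: "disp x x0 = ((fst x - fst x0) * (- (s * c)) + (snd x - snd x0) * c,
                           (fst x - fst x0) * c + (snd x - snd x0) * (s * c))"
  by (simp add: disp_def chart_vec_def nrmv_th dirv_th)

lemma disp_bound: "\<bar>fst (disp x x0)\<bar> \<le> dist x x0 \<and> \<bar>snd (disp x x0)\<bar> \<le> dist x x0"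
proof -
  define dt where "dt = fst x - fst x0"
  define du where "du = snd x - snd x0"
  have d: "dist x x0 = sqrt (dt^2 + du^2)"
    by (simp add: dist_prod_def dist_real_def dt_def du_def power2_abs)
  have "(fst (disp x x0))^2 + (snd (disp x x0))^2 = (dt^2 + du^2) * (c * c * (1 + s * s))"
    by (simp add: disp_eq dt_def[symmetric] du_def[symmetric] power2_eq_square algebra_simps)
  then have e: "(fst (disp x x0))^2 + (snd (disp x x0))^2 = dt^2 + du^2" using cs by simp
  have "\<bar>fst (disp x x0)\<bar> = sqrt ((fst (disp x x0))^2)" by simp
  also have "\<dots> \<le> sqrt (dt^2 + du^2)" by (subst e[symmetric]) (rule real_sqrt_le_mono, simp)
  finally have 1: "\<bar>fst (disp x x0)\<bar> \<le> dist x x0" using d by simp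
  have "\<bar>snd (disp x x0)\<bar> = sqrt ((snd (disp x x0))^2)" by simp
  also have "\<dots> \<le> sqrt (dt^2 + du^2)" by (subst e[symmetric]) (rule real_sqrt_le_mono, simp)
  finally have 2: "\<bar>snd (disp x x0)\<bar> \<le> dist x x0" using d by simp
  show ?thesis using 1 2 by simp
qed

lemma strip_chartI:
  assumes "e > 0" "\<Phi> x0 = wt_class a b (g, pt)"
    and "\<And>x. x \<in> J \<Longrightarrow> \<bar>fst (disp x x0)\<bar> < e \<Longrightarrow> \<bar>snd (disp x x0)\<bar> < e \<Longrightarrow>
      moves_to a b g pt (disp x x0) (\<Phi> x)"
  shows "strip_chart a b th 1 1 \<Phi> J x0"
  unfolding strip_chart_def disp_def[symmetric]
proof (intro exI[of _ e] exI[of _ g] exI[of _ pt] conjI ballI impI)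
  fix x assume "x \<in> J" "dist x x0 < e"
  then show "moves_to a b g pt (disp x x0) (\<Phi> x)"
    using assms(3) disp_bound[of x x0] by fastforce
qed (use assms in auto)

text \<open>The column strip: \<open>col_pos\<close> develops the strip coordinates \<open>(t, u)\<close> (distance across,
  distance along) into the plane, starting from the lower obstacle corner \<open>(a, 0)\<close>; \<open>col_pt\<close>
  folds the developed point back into the column \<open>a \<le> x \<le> 1\<close> and \<open>col_copy\<close> records the copy.\<close>

definition col_pos :: "real \<times> real \<Rightarrow> real \<times> real" where
  "col_pos x = (a - fst x * (s * c) + snd x * c, fst x * c + snd x * (s * c))"

definition col_pt :: "real \<times> real \<Rightarrow> real \<times> real" where
  "col_pt P = (a + tri_wave (1 - a) (fst P - a), snd P)"

definition col_copy :: "real \<times> real \<Rightarrow> bool \<times> bool" where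
  "col_copy P = (tri_wave_odd (1 - a) (fst P - a), False)"

definition col_map :: "real \<times> real \<Rightarrow> wtrep set" where
  "col_map x = wt_class a b (col_copy (col_pos x), col_pt (col_pos x))"

definition col_width :: "real set" where "col_width = {0<..<b * c}"

lemma col_pos_disp: "fst (col_pos x) = fst (col_pos x0) + fst (disp x x0)" "snd (col_pos x) = snd (col_pos x0) + snd (disp x x0)"
  by (simp_all add: col_pos_def disp_eq algebra_simps)

lemma col_pos_level: "snd (col_pos x) - s * (fst (col_pos x) - a) = fst x * kappa"
  by (simp add: col_pos_def kappa_def algebra_simps)

lemma col_width_level: "fst x \<in> col_width \<Longrightarrow> 0 < fst x * kappa \<and> fst x * kappa < b"
proof -
  assume "fst x \<in> col_width"
  then have "0 < fst x" "fst x < b * c" by (auto simp: col_width_def)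
  then have "fst x * kappa < b * c * kappa" using kappa_pos by simp
  then show ?thesis using \<open>0 < fst x\<close> kappa_pos c_kappa by (simp add: mult.assoc)
qed

lemma col_gap_pos: "1 - a > 0"
  using a1 by simp

lemma slot_end_column: "a \<le> x \<Longrightarrow> x \<le> 1 \<Longrightarrow> slot_end a x \<Longrightarrow> x = a \<or> x = 1"
  using slot_end_in_gap[OF a0 a1, of 0] by simp

lemma col_pt_table: "col_pt P \<in> table_cl a b"
  using tri_wave_range[OF col_gap_pos, of "fst P - a"] by (cases P) (auto simp: col_pt_def intro!: table_cl_column[of 0])

lemma slope_mult_period: "s * (of_int j * (1 - a)) = of_int j * of_int pp"
proof -
  have "s * (of_int j * (1 - a)) = of_int j * (s * (1 - a))" by (simp add: algebra_simps)
  then show ?thesis using sp by simp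
qed

lemma col_map_chart_inner:
  assumes x0: "x0 \<in> col_width \<times> UNIV"
    and regime: "of_int j * (1 - a) < fst (col_pos x0) - a" "fst (col_pos x0) - a < (of_int j + 1) * (1 - a)"
  shows "strip_chart a b th 1 1 col_map (col_width \<times> UNIV) x0"
proof -
  define L where "L = 1 - a"
  have L: "L > 0" using col_gap_pos L_def by simp
  define X0 where "X0 = fst (col_pos x0)"
  define Y0 where "Y0 = snd (col_pos x0)"
  have j: "of_int j * L \<le> X0 - a" "X0 - a < (of_int j + 1) * L"
    "tri_wave L (X0 - a) = (if even j then X0 - a - of_int j * L else (of_int j + 1) * L - (X0 - a))"
    "tri_wave_odd L (X0 - a) = odd j"
    using regime L tri_wave_piece[OF L, of j "X0 - a"] tri_wave_odd_piece[OF L, of j "X0 - a"]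
    by (auto simp: X0_def L_def)
  have lam0: "0 < Y0 - s * (X0 - a)" "Y0 - s * (X0 - a) < b"
    using col_width_level[of x0] x0 col_pos_level[of x0] by (auto simp: X0_def Y0_def)
  have Gc0: "col_copy (col_pos x0) = (odd j, False)" using j by (simp add: col_copy_def X0_def L_def)
  have Fc0: "col_pt (col_pos x0) = (a + (if even j then X0 - a - of_int j * L else (of_int j + 1) * L - (X0 - a)), Y0)"
    using j by (simp add: col_pt_def X0_def Y0_def L_def)
  have inner: "of_int j * L < X0 - a" using regime by (simp add: X0_def L_def)
  define e where "e = min (X0 - a - of_int j * L) ((of_int j + 1) * L - (X0 - a))"
  have e: "e > 0" using inner j by (simp add: e_def)
  show ?thesis
  proof (rule strip_chartI[OF e, where g = "(odd j, False)" and pt = "col_pt (col_pos x0)"])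
    show "col_map x0 = wt_class a b ((odd j, False), col_pt (col_pos x0))" using Gc0 by (simp add: col_map_def)
    fix x assume x: "x \<in> col_width \<times> UNIV" "\<bar>fst (disp x x0)\<bar> < e" "\<bar>snd (disp x x0)\<bar> < e"
    define dx where "dx = fst (disp x x0)"
    define dy where "dy = snd (disp x x0)"
    have X: "fst (col_pos x) = X0 + dx" "snd (col_pos x) = Y0 + dy"
      using col_pos_disp[of x x0] by (simp_all add: X0_def Y0_def dx_def dy_def)
    have r: "of_int j * L \<le> X0 + dx - a" "X0 + dx - a < (of_int j + 1) * L"
      using x(2) by (auto simp: e_def dx_def)
    have FcX: "col_pt (col_pos x) = (a + (if even j then X0 + dx - a - of_int j * L else (of_int j + 1) * L - (X0 + dx - a)), Y0 + dy)"
      using tri_wave_piece[OF L r(1) less_imp_le[OF r(2)]] X by (simp add: col_pt_def L_def)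
    have GcX: "col_copy (col_pos x) = (odd j, False)"
      using tri_wave_odd_piece[OF L r] X by (simp add: col_copy_def L_def)
    have q: "col_pt (col_pos x0) + gmul (odd j, False) (disp x x0) = col_pt (col_pos x)"
      using FcX Fc0 by (simp add: gmul_def dx_def[symmetric] dy_def[symmetric])
    show "moves_to a b (odd j, False) (col_pt (col_pos x0)) (disp x x0) (col_map x)"
      unfolding moves_to_def Let_def q using col_pt_table GcX by (simp add: col_map_def)
  qed
qed

lemma col_map_chart_side:
  assumes x0: "x0 \<in> col_width \<times> UNIV" and regime: "fst (col_pos x0) - a = of_int j * (1 - a)"
  shows "strip_chart a b th 1 1 col_map (col_width \<times> UNIV) x0"
proof -
  define L where "L = 1 - a"
  have L: "L > 0" using col_gap_pos L_def by simp
  define X0 where "X0 = fst (col_pos x0)"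
  define Y0 where "Y0 = snd (col_pos x0)"
  have j: "of_int j * L \<le> X0 - a" "X0 - a < (of_int j + 1) * L"
    "tri_wave L (X0 - a) = (if even j then X0 - a - of_int j * L else (of_int j + 1) * L - (X0 - a))"
    "tri_wave_odd L (X0 - a) = odd j"
    using regime L tri_wave_piece[OF L, of j "X0 - a"] tri_wave_odd_piece[OF L, of j "X0 - a"]
    by (auto simp: X0_def L_def)
  have lam0: "0 < Y0 - s * (X0 - a)" "Y0 - s * (X0 - a) < b"
    using col_width_level[of x0] x0 col_pos_level[of x0] by (auto simp: X0_def Y0_def)
  have Gc0: "col_copy (col_pos x0) = (odd j, False)" using j by (simp add: col_copy_def X0_def L_def)
  have Fc0: "col_pt (col_pos x0) = (a + (if even j then X0 - a - of_int j * L else (of_int j + 1) * L - (X0 - a)), Y0)"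
    using j by (simp add: col_pt_def X0_def Y0_def L_def)
  have jx: "X0 - a = of_int j * L" using regime by (simp add: X0_def L_def)
  have Y0r: "0 < Y0 - of_int j * of_int pp" "Y0 - of_int j * of_int pp < b"
    using lam0 jx slope_mult_period by (auto simp: L_def)
  define e where "e = min (min a L) (min (Y0 - of_int j * of_int pp) (of_int j * of_int pp + b - Y0))"
  have e: "e > 0" using Y0r a0 L by (simp add: e_def)
  define x0' where "x0' = (if even j then a else 1)"
  have Fc0': "col_pt (col_pos x0) = (x0', Y0)" using Fc0 jx by (simp add: x0'_def L_def algebra_simps)
  have "slot_end a x0'" unfolding slot_end_def x0'_def by (cases "even j") (auto intro: exI[of _ 0] exI[of _ 1])
  moreover have "in_slot b Y0" unfolding in_slot_def using Y0r by (intro exI[of _ "j * pp"]) auto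
  ultimately have vs: "on_vside a b (x0', Y0)" by (simp add: on_vside_iff)
  show ?thesis
  proof (rule strip_chartI[OF e, where g = "(odd j, False)" and pt = "(x0', Y0)"])
    show "col_map x0 = wt_class a b ((odd j, False), (x0', Y0))" using Gc0 Fc0' by (simp add: col_map_def)
    fix x assume x: "x \<in> col_width \<times> UNIV" "\<bar>fst (disp x x0)\<bar> < e" "\<bar>snd (disp x x0)\<bar> < e"
    define dx where "dx = fst (disp x x0)"
    define dy where "dy = snd (disp x x0)"
    have X: "fst (col_pos x) = X0 + dx" "snd (col_pos x) = Y0 + dy"
      using col_pos_disp[of x x0] by (simp_all add: X0_def Y0_def dx_def dy_def)
    have dxe: "\<bar>dx\<bar> < e" "\<bar>dy\<bar> < e" using x by (auto simp: dx_def dy_def)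
    show "moves_to a b (odd j, False) (x0', Y0) (disp x x0) (col_map x)"
    proof (cases "dx \<ge> 0")
      case True
      have r: "of_int j * L \<le> X0 + dx - a" "X0 + dx - a < (of_int j + 1) * L"
        using True dxe jx by (auto simp: e_def algebra_simps)
      have FcX: "col_pt (col_pos x) = (a + (if even j then X0 + dx - a - of_int j * L else (of_int j + 1) * L - (X0 + dx - a)), Y0 + dy)"
        using tri_wave_piece[OF L r(1) less_imp_le[OF r(2)]] X by (simp add: col_pt_def L_def)
      have GcX: "col_copy (col_pos x) = (odd j, False)"
        using tri_wave_odd_piece[OF L r] X by (simp add: col_copy_def L_def)
      have q: "(x0', Y0) + gmul (odd j, False) (disp x x0) = col_pt (col_pos x)"
        using FcX jx by (simp add: gmul_def dx_def[symmetric] dy_def[symmetric] x0'_def L_def algebra_simps)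
      show ?thesis unfolding moves_to_def Let_def q using col_pt_table GcX by (simp add: col_map_def)
    next
      case False
      have r: "of_int (j - 1) * L \<le> X0 + dx - a" "X0 + dx - a < (of_int (j - 1) + 1) * L"
        using False dxe jx by (auto simp: e_def algebra_simps)
      have FcX: "col_pt (col_pos x) = (a + (if even (j - 1) then X0 + dx - a - of_int (j - 1) * L else (of_int (j - 1) + 1) * L - (X0 + dx - a)), Y0 + dy)"
        using tri_wave_piece[OF L r(1) less_imp_le[OF r(2)]] X by (simp add: col_pt_def L_def)
      have GcX: "col_copy (col_pos x) = (odd (j - 1), False)"
        using tri_wave_odd_piece[OF L r] X by (simp add: col_copy_def L_def)
      define q where "q = (x0', Y0) + gmul (odd j, False) (disp x x0)"
      have qe: "q = (if even j then a + dx else 1 - dx, Y0 + dy)"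
        by (simp add: q_def gmul_def dx_def[symmetric] dy_def[symmetric] x0'_def)
      have "in_slot a (if even j then a + dx else 1 - dx)" unfolding in_slot_def
        using False dxe by (cases "even j") (auto simp: e_def intro: exI[of _ 0] exI[of _ 1])
      moreover have "in_slot b (Y0 + dy)" unfolding in_slot_def
        using dxe by (intro exI[of _ "j * pp"]) (auto simp: e_def)
      ultimately have obs: "in_obst_int a b q" by (simp add: in_obst_iff qe)
      have "col_pt (col_pos x) = (2 * fst (x0', Y0) - fst q, snd q)"
        using FcX jx by (simp add: qe x0'_def L_def algebra_simps)
      moreover have "col_copy (col_pos x) = (\<not> fst (odd j, False), snd (odd j, False))" using GcX by simp
      ultimately show ?thesis using vs obs unfolding moves_to_def Let_def q_def[symmetric] by (simp add: col_map_def)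
    qed
  qed
qed

lemma col_map_chart:
  assumes x0: "x0 \<in> col_width \<times> UNIV"
  shows "strip_chart a b th 1 1 col_map (col_width \<times> UNIV) x0"
proof -
  obtain j where "of_int j * (1 - a) \<le> fst (col_pos x0) - a" "fst (col_pos x0) - a < (of_int j + 1) * (1 - a)"
    using tri_wave_fold[OF col_gap_pos] by blast
  then show ?thesis
    using col_map_chart_inner[OF x0, of j] col_map_chart_side[OF x0, of j] by fastforce
qed

lemma col_pos_inj: "col_pos x = col_pos x' \<Longrightarrow> x = x'"
proof -
  assume h: "col_pos x = col_pos x'"
  have "fst x * kappa = fst x' * kappa" using col_pos_level[of x] col_pos_level[of x'] h by metis
  then have t: "fst x = fst x'" using kappa_pos by (metis less_irrefl mult_right_cancel)
  have "fst (col_pos x) = fst (col_pos x')" using h by simp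
  then have "snd x * c = snd x' * c" using t by (simp add: col_pos_def)
  then have "snd x = snd x'" using c0 by simp
  then show ?thesis using t by (simp add: prod_eq_iff)
qed

lemma col_map_inj: "inj_on col_map (col_width \<times> UNIV)"
proof (rule inj_onI)
  fix x x' assume x: "x \<in> col_width \<times> UNIV" and x': "x' \<in> col_width \<times> UNIV" and e: "col_map x = col_map x'"
  define P where "P = col_pos x"
  define P' where "P' = col_pos x'"
  define L where "L = 1 - a"
  have L: "L > 0" using col_gap_pos by (simp add: L_def)
  have "wt_eq a b (col_copy P, col_pt P) (col_copy P', col_pt P')"
    using e col_pt_table[of P'] unfolding col_map_def P_def P'_def by (intro wt_eq_of_class_eq) (auto simp: XR_def)
  then have F: "col_pt P = col_pt P'" and G: "col_copy P = col_copy P' \<or> on_vside a b (col_pt P) \<or> on_hside a b (col_pt P) \<or> is_corner a b (col_pt P)"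
    unfolding wt_eq_def by auto
  have rng: "a \<le> fst (col_pt P)" "fst (col_pt P) \<le> 1" using tri_wave_range[OF col_gap_pos, of "fst P - a"] by (auto simp: col_pt_def)
  have G': "tri_wave_odd L (fst P - a) = tri_wave_odd L (fst P' - a) \<or> tri_wave L (fst P - a) = 0 \<or> tri_wave L (fst P - a) = L"
  proof (cases "col_copy P = col_copy P'")
    case True then show ?thesis by (simp add: col_copy_def L_def)
  next
    case False
    then have "slot_end a (fst (col_pt P))" using G not_in_slot_gap[of 0 a, simplified, OF rng]
      by (auto simp: on_vside_iff on_hside_iff is_corner_iff)
    then have "fst (col_pt P) = a \<or> fst (col_pt P) = 1" using slot_end_column rng by blast
    then show ?thesis by (auto simp: col_pt_def L_def)
  qed
  obtain k :: int where k: "fst P' - a = fst P - a + of_int k * L"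
    using tri_wave_inj[OF L _ G'] F by (auto simp: col_pt_def L_def)
  have Y: "snd P = snd P'" using F by (simp add: col_pt_def)
  have l1: "0 < snd P - s * (fst P - a)" "snd P - s * (fst P - a) < b"
    using col_width_level[of x] x col_pos_level[of x] by (auto simp: P_def)
  have l2: "0 < snd P' - s * (fst P' - a)" "snd P' - s * (fst P' - a) < b"
    using col_width_level[of x'] x' col_pos_level[of x'] by (auto simp: P'_def)
  have e2: "s * (of_int k * L) = of_int k * of_int pp" using slope_mult_period[of k] by (simp only: L_def)
  have e1: "snd P' - s * (fst P' - a) = snd P - s * (fst P - a) - s * (of_int k * L)"
    using Y k by (simp add: algebra_simps)
  then have "snd P' - s * (fst P' - a) = snd P - s * (fst P - a) - of_int k * of_int pp"
    unfolding e2 .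
  then have "\<bar>of_int k * of_int pp\<bar> < (1::real)"
    using l1 l2 b1 by (simp add: abs_less_iff)
  then have "k = 0" using int_mult_abs_less_self[of k "of_int pp"] pp1 by simp
  then have "P = P'" using k Y by (simp add: prod_eq_iff)
  then show "x = x'" using col_pos_inj by (simp add: P_def P'_def)
qed

lemma col_map_Xinf: "col_map ` (col_width \<times> UNIV) \<subseteq> Xinf a b"
  unfolding col_map_def Xinf_def XR_def by (auto intro!: imageI simp: col_pt_table)

lemma col_strip: "wt_strip a b th (col_map ` (col_width \<times> UNIV))"
  unfolding col_width_def
  by (rule wt_strip_of_charts)
    (use col_map_inj col_map_Xinf col_map_chart mult_pos_pos[OF b0 c0] in \<open>auto simp: col_width_def\<close>)

definition hgap where "hgap = 1 - b"

lemma hgap_pos: "hgap > 0" using b1 by (simp add: hgap_def)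

text \<open>The corridor strip, developed from \<open>(0, b)\<close>: below the obstacle of the cell \<open>m \<le> x < m + 1\<close>
  the folded point stays in the corridor \<open>m p + b \<le> y \<le> m p + 1\<close>, reflected by \<open>tri_wave\<close>
  between its horizontal sides; across the column it rises freely by \<open>s (1 - a) = p\<close>.\<close>

definition cor_pos :: "real \<times> real \<Rightarrow> real \<times> real" where
  "cor_pos x = (- fst x * (s * c) + snd x * c, b + fst x * c + snd x * (s * c))"

definition cor_pt :: "real \<times> real \<Rightarrow> real \<times> real" where
  "cor_pt P = (let X = fst P; \<mu> = snd P - s * X; m = \<lfloor>X\<rfloor>; \<xi> = X - of_int m in
     if \<xi> < a then (X, of_int m * of_int pp + b + tri_wave hgap (\<mu> - b + s * \<xi>))
     else (X, of_int m * of_int pp + \<mu> + s * (\<xi> - a)))"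

definition cor_copy :: "real \<times> real \<Rightarrow> bool \<times> bool" where
  "cor_copy P = (False, fst P - of_int \<lfloor>fst P\<rfloor> < a \<and> tri_wave_odd hgap (snd P - s * fst P - b + s * (fst P - of_int \<lfloor>fst P\<rfloor>)))"

definition cor_map :: "real \<times> real \<Rightarrow> wtrep set" where
  "cor_map x = wt_class a b (cor_copy (cor_pos x), cor_pt (cor_pos x))"

definition cor_width :: "real set" where "cor_width = {0<..<hgap * c}"

lemma cor_pos_disp: "fst (cor_pos x) = fst (cor_pos x0) + fst (disp x x0)" "snd (cor_pos x) = snd (cor_pos x0) + snd (disp x x0)"
  by (simp_all add: cor_pos_def disp_eq algebra_simps)

lemma cor_pos_level: "snd (cor_pos x) - s * fst (cor_pos x) = b + fst x * kappa"
  by (simp add: cor_pos_def kappa_def algebra_simps)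

lemma cor_width_level: "fst x \<in> cor_width \<Longrightarrow> 0 < fst x * kappa \<and> fst x * kappa < hgap"
proof -
  assume "fst x \<in> cor_width"
  then have "0 < fst x" "fst x < hgap * c" by (auto simp: cor_width_def)
  then have "fst x * kappa < hgap * c * kappa" using kappa_pos by simp
  then show ?thesis using \<open>0 < fst x\<close> kappa_pos c_kappa by (simp add: mult.assoc)
qed

lemma cor_pt_under: "fst P - of_int \<lfloor>fst P\<rfloor> < a \<Longrightarrow>
   cor_pt P = (fst P, of_int \<lfloor>fst P\<rfloor> * of_int pp + b + tri_wave hgap (snd P - s * fst P - b + s * (fst P - of_int \<lfloor>fst P\<rfloor>)))"
  by (simp add: cor_pt_def Let_def)

lemma cor_pt_free: "\<not> fst P - of_int \<lfloor>fst P\<rfloor> < a \<Longrightarrow>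
   cor_pt P = (fst P, of_int \<lfloor>fst P\<rfloor> * of_int pp + (snd P - s * fst P) + s * (fst P - of_int \<lfloor>fst P\<rfloor> - a))"
  by (simp add: cor_pt_def Let_def)

lemma cor_pt_table: "cor_pt P \<in> table_cl a b"
proof (cases "fst P - of_int \<lfloor>fst P\<rfloor> < a")
  case True
  have "0 \<le> tri_wave hgap (snd P - s * fst P - b + s * (fst P - of_int \<lfloor>fst P\<rfloor>))"
       "tri_wave hgap (snd P - s * fst P - b + s * (fst P - of_int \<lfloor>fst P\<rfloor>)) \<le> hgap"
    using tri_wave_range[OF hgap_pos] by blast+
  then show ?thesis unfolding cor_pt_under[OF True]
    by (intro table_cl_corridor[of "\<lfloor>fst P\<rfloor> * pp"]) (auto simp: hgap_def)
next
  case False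
  then show ?thesis unfolding cor_pt_free[OF False]
    using False real_of_int_floor_add_one_ge[of "fst P"]
    by (intro table_cl_column[of "\<lfloor>fst P\<rfloor>"]) linarith+
qed

lemma slope_a: "s * a = of_int qq * hgap" using sq by (simp add: hgap_def)

lemma cor_pt_under_at: "of_int m \<le> fst P \<Longrightarrow> fst P < of_int m + a \<Longrightarrow>
   cor_pt P = (fst P, of_int m * of_int pp + b + tri_wave hgap (snd P - s * fst P - b + s * (fst P - of_int m)))
   \<and> cor_copy P = (False, tri_wave_odd hgap (snd P - s * fst P - b + s * (fst P - of_int m)))"
proof -
  assume h: "of_int m \<le> fst P" "fst P < of_int m + a"
  then have f: "\<lfloor>fst P\<rfloor> = m" using a1 by (intro floor_unique) auto
  show ?thesis using h by (simp add: cor_pt_def cor_copy_def Let_def f)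
qed

lemma cor_pt_free_at: "of_int m + a \<le> fst P \<Longrightarrow> fst P < of_int m + 1 \<Longrightarrow>
   cor_pt P = (fst P, of_int m * of_int pp + (snd P - s * fst P) + s * (fst P - of_int m - a))
   \<and> cor_copy P = (False, False)"
proof -
  assume h: "of_int m + a \<le> fst P" "fst P < of_int m + 1"
  then have f: "\<lfloor>fst P\<rfloor> = m" using a0 by (intro floor_unique) auto
  show ?thesis using h by (simp add: cor_pt_def cor_copy_def Let_def f algebra_simps)
qed

lemma cor_map_chart_free:
  assumes x0: "x0 \<in> cor_width \<times> UNIV" and regime: "a < fst (cor_pos x0) - of_int \<lfloor>fst (cor_pos x0)\<rfloor>"
  shows "strip_chart a b th 1 1 cor_map (cor_width \<times> UNIV) x0"
proof -
  define X0 where "X0 = fst (cor_pos x0)"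
  define Y0 where "Y0 = snd (cor_pos x0)"
  define m0 where "m0 = \<lfloor>X0\<rfloor>"
  define \<xi>0 where "\<xi>0 = X0 - of_int m0"
  define \<mu>0 where "\<mu>0 = Y0 - s * X0"
  have mu0: "b < \<mu>0" "\<mu>0 < 1" using cor_width_level[of x0] x0 cor_pos_level[of x0] by (auto simp: \<mu>0_def X0_def Y0_def hgap_def)
  have xi0: "0 \<le> \<xi>0" "\<xi>0 < 1" unfolding \<xi>0_def m0_def by linarith+
  have X0m: "X0 = of_int m0 + \<xi>0" by (simp add: \<xi>0_def)
  have PX: "\<And>x. fst (cor_pos x) = X0 + fst (disp x x0)" "\<And>x. snd (cor_pos x) = Y0 + snd (disp x x0)"
    using cor_pos_disp by (auto simp: X0_def Y0_def)
  have free: "a < \<xi>0" using regime by (simp add: \<xi>0_def m0_def X0_def)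
  define e where "e = min (\<xi>0 - a) (1 - \<xi>0)"
  have e: "e > 0" using free xi0 by (simp add: e_def)
  have F0: "cor_pt (cor_pos x0) = (X0, of_int m0 * of_int pp + \<mu>0 + s * (\<xi>0 - a))" "cor_copy (cor_pos x0) = (False, False)"
    using cor_pt_free_at[of m0 "cor_pos x0"] free xi0 by (auto simp: X0m X0_def[symmetric] Y0_def[symmetric] \<mu>0_def algebra_simps)
  show ?thesis
  proof (rule strip_chartI[OF e, where g = "(False, False)" and pt = "cor_pt (cor_pos x0)"])
    show "cor_map x0 = wt_class a b ((False, False), cor_pt (cor_pos x0))" using F0 by (simp add: cor_map_def)
    fix x assume x: "x \<in> cor_width \<times> UNIV" "\<bar>fst (disp x x0)\<bar> < e" "\<bar>snd (disp x x0)\<bar> < e"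
    define dx where "dx = fst (disp x x0)"
    define dy where "dy = snd (disp x x0)"
    have d: "\<bar>dx\<bar> < e" "\<bar>dy\<bar> < e" using x by (auto simp: dx_def dy_def)
    have F: "cor_pt (cor_pos x) = (X0 + dx, of_int m0 * of_int pp + (Y0 + dy - s * (X0 + dx)) + s * (X0 + dx - of_int m0 - a))"
            "cor_copy (cor_pos x) = (False, False)"
      using cor_pt_free_at[of m0 "cor_pos x"] d by (auto simp: PX dx_def[symmetric] dy_def[symmetric] X0m e_def)
    have q: "cor_pt (cor_pos x0) + gmul (False, False) (disp x x0) = cor_pt (cor_pos x)"
      using F F0 by (simp add: gmul_def dx_def[symmetric] dy_def[symmetric] \<mu>0_def X0m algebra_simps)
    show "moves_to a b (False, False) (cor_pt (cor_pos x0)) (disp x x0) (cor_map x)"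
      unfolding moves_to_def Let_def q using cor_pt_table[of "cor_pos x"] F(2) by (intro disjI1) (simp add: cor_map_def)
  qed
qed

lemma cor_map_chart_column_edge:
  assumes x0: "x0 \<in> cor_width \<times> UNIV" and regime: "fst (cor_pos x0) - of_int \<lfloor>fst (cor_pos x0)\<rfloor> = a"
  shows "strip_chart a b th 1 1 cor_map (cor_width \<times> UNIV) x0"
proof -
  define X0 where "X0 = fst (cor_pos x0)"
  define Y0 where "Y0 = snd (cor_pos x0)"
  define m0 where "m0 = \<lfloor>X0\<rfloor>"
  define \<xi>0 where "\<xi>0 = X0 - of_int m0"
  define \<mu>0 where "\<mu>0 = Y0 - s * X0"
  have mu0: "b < \<mu>0" "\<mu>0 < 1" using cor_width_level[of x0] x0 cor_pos_level[of x0] by (auto simp: \<mu>0_def X0_def Y0_def hgap_def)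
  have xi0: "0 \<le> \<xi>0" "\<xi>0 < 1" unfolding \<xi>0_def m0_def by linarith+
  have X0m: "X0 = of_int m0 + \<xi>0" by (simp add: \<xi>0_def)
  have PX: "\<And>x. fst (cor_pos x) = X0 + fst (disp x x0)" "\<And>x. snd (cor_pos x) = Y0 + snd (disp x x0)"
    using cor_pos_disp by (auto simp: X0_def Y0_def)
  have col_edge: "\<xi>0 = a" using regime by (simp add: \<xi>0_def m0_def X0_def)
  define e where "e = min (min a (1 - a)) (min (\<mu>0 - b) (1 - \<mu>0))"
  have e: "e > 0" using mu0 a0 a1 by (simp add: e_def)
  have F0: "cor_pt (cor_pos x0) = (X0, of_int m0 * of_int pp + \<mu>0)" "cor_copy (cor_pos x0) = (False, False)"
    using cor_pt_free_at[of m0 "cor_pos x0"] col_edge a1 by (auto simp: X0m X0_def[symmetric] Y0_def[symmetric] \<mu>0_def algebra_simps)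
  show ?thesis
  proof (rule strip_chartI[OF e, where g = "(False, False)" and pt = "cor_pt (cor_pos x0)"])
    show "cor_map x0 = wt_class a b ((False, False), cor_pt (cor_pos x0))" using F0 by (simp add: cor_map_def)
    fix x assume x: "x \<in> cor_width \<times> UNIV" "\<bar>fst (disp x x0)\<bar> < e" "\<bar>snd (disp x x0)\<bar> < e"
    define dx where "dx = fst (disp x x0)"
    define dy where "dy = snd (disp x x0)"
    have d: "\<bar>dx\<bar> < e" "\<bar>dy\<bar> < e" using x by (auto simp: dx_def dy_def)
    have FG: "cor_pt (cor_pos x) = (X0 + dx, of_int m0 * of_int pp + \<mu>0 + dy) \<and> cor_copy (cor_pos x) = (False, False)"
    proof (cases "dx \<ge> 0")
      case True
      have "cor_pt (cor_pos x) = (X0 + dx, of_int m0 * of_int pp + (Y0 + dy - s * (X0 + dx)) + s * (X0 + dx - of_int m0 - a))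
            \<and> cor_copy (cor_pos x) = (False, False)"
        using cor_pt_free_at[of m0 "cor_pos x"] d True col_edge by (auto simp: PX dx_def[symmetric] dy_def[symmetric] X0m e_def)
      then show ?thesis using col_edge by (simp add: X0m \<mu>0_def algebra_simps)
    next
      case False
      define \<phi> where "\<phi> = (Y0 + dy - s * (X0 + dx) - b + s * (X0 + dx - of_int m0))"
      have FG1: "cor_pt (cor_pos x) = (X0 + dx, of_int m0 * of_int pp + b + tri_wave hgap \<phi>) \<and> cor_copy (cor_pos x) = (False, tri_wave_odd hgap \<phi>)"
        using cor_pt_under_at[of m0 "cor_pos x"] d False col_edge by (auto simp: PX dx_def[symmetric] dy_def[symmetric] X0m e_def \<phi>_def)
      have ph: "\<phi> = \<mu>0 - b + dy + of_int qq * hgap"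
        using col_edge slope_a by (simp add: \<phi>_def \<mu>0_def X0m algebra_simps)
      have r: "of_int qq * hgap \<le> \<phi>" "\<phi> < (of_int qq + 1) * hgap"
        using ph d mu0 by (auto simp: e_def hgap_def algebra_simps)
      have "tri_wave hgap \<phi> = \<phi> - of_int qq * hgap" "tri_wave_odd hgap \<phi> = False"
        using tri_wave_piece[OF hgap_pos r(1) less_imp_le[OF r(2)]] tri_wave_odd_piece[OF hgap_pos r] qq_even by auto
      then show ?thesis using FG1 ph by simp
    qed
    have q: "cor_pt (cor_pos x0) + gmul (False, False) (disp x x0) = cor_pt (cor_pos x)"
      using FG F0 by (simp add: gmul_def dx_def[symmetric] dy_def[symmetric])
    show "moves_to a b (False, False) (cor_pt (cor_pos x0)) (disp x x0) (cor_map x)"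
      unfolding moves_to_def Let_def q using cor_pt_table[of "cor_pos x"] FG by (intro disjI1) (simp add: cor_map_def)
  qed
qed

lemma cor_map_chart_obstacle_edge:
  assumes x0: "x0 \<in> cor_width \<times> UNIV" and regime: "fst (cor_pos x0) - of_int \<lfloor>fst (cor_pos x0)\<rfloor> = 0"
  shows "strip_chart a b th 1 1 cor_map (cor_width \<times> UNIV) x0"
proof -
  define X0 where "X0 = fst (cor_pos x0)"
  define Y0 where "Y0 = snd (cor_pos x0)"
  define m0 where "m0 = \<lfloor>X0\<rfloor>"
  define \<xi>0 where "\<xi>0 = X0 - of_int m0"
  define \<mu>0 where "\<mu>0 = Y0 - s * X0"
  have mu0: "b < \<mu>0" "\<mu>0 < 1" using cor_width_level[of x0] x0 cor_pos_level[of x0] by (auto simp: \<mu>0_def X0_def Y0_def hgap_def)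
  have xi0: "0 \<le> \<xi>0" "\<xi>0 < 1" unfolding \<xi>0_def m0_def by linarith+
  have X0m: "X0 = of_int m0 + \<xi>0" by (simp add: \<xi>0_def)
  have PX: "\<And>x. fst (cor_pos x) = X0 + fst (disp x x0)" "\<And>x. snd (cor_pos x) = Y0 + snd (disp x x0)"
    using cor_pos_disp by (auto simp: X0_def Y0_def)
  have obst_edge: "\<xi>0 = 0" using regime by (simp add: \<xi>0_def m0_def X0_def)
  define e where "e = min (min a (1 - a)) (min (\<mu>0 - b) (1 - \<mu>0))"
  have e: "e > 0" using mu0 a0 a1 by (simp add: e_def)
  have r0: "of_int 0 * hgap \<le> \<mu>0 - b" "\<mu>0 - b < (of_int 0 + 1) * hgap" using mu0 by (auto simp: hgap_def)
  have F0: "cor_pt (cor_pos x0) = (X0, of_int m0 * of_int pp + \<mu>0)" "cor_copy (cor_pos x0) = (False, False)"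
    using cor_pt_under_at[of m0 "cor_pos x0"] obst_edge a0 tri_wave_piece[OF hgap_pos r0(1) less_imp_le[OF r0(2)]] tri_wave_odd_piece[OF hgap_pos r0]
    by (auto simp: X0m X0_def[symmetric] Y0_def[symmetric] \<mu>0_def algebra_simps)
  show ?thesis
  proof (rule strip_chartI[OF e, where g = "(False, False)" and pt = "cor_pt (cor_pos x0)"])
    show "cor_map x0 = wt_class a b ((False, False), cor_pt (cor_pos x0))" using F0 by (simp add: cor_map_def)
    fix x assume x: "x \<in> cor_width \<times> UNIV" "\<bar>fst (disp x x0)\<bar> < e" "\<bar>snd (disp x x0)\<bar> < e"
    define dx where "dx = fst (disp x x0)"
    define dy where "dy = snd (disp x x0)"
    have d: "\<bar>dx\<bar> < e" "\<bar>dy\<bar> < e" using x by (auto simp: dx_def dy_def)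
    have FG: "cor_pt (cor_pos x) = (X0 + dx, of_int m0 * of_int pp + \<mu>0 + dy) \<and> cor_copy (cor_pos x) = (False, False)"
    proof (cases "dx \<ge> 0")
      case True
      define \<phi> where "\<phi> = (Y0 + dy - s * (X0 + dx) - b + s * (X0 + dx - of_int m0))"
      have FG1: "cor_pt (cor_pos x) = (X0 + dx, of_int m0 * of_int pp + b + tri_wave hgap \<phi>) \<and> cor_copy (cor_pos x) = (False, tri_wave_odd hgap \<phi>)"
        using cor_pt_under_at[of m0 "cor_pos x"] d True obst_edge by (auto simp: PX dx_def[symmetric] dy_def[symmetric] X0m e_def \<phi>_def)
      have ph: "\<phi> = \<mu>0 - b + dy"
        using obst_edge by (simp add: \<phi>_def \<mu>0_def X0m algebra_simps)
      have r: "of_int 0 * hgap \<le> \<phi>" "\<phi> < (of_int 0 + 1) * hgap"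
        using ph d mu0 by (auto simp: e_def hgap_def algebra_simps)
      have "tri_wave hgap \<phi> = \<phi>" "tri_wave_odd hgap \<phi> = False"
        using tri_wave_piece[OF hgap_pos r(1) less_imp_le[OF r(2)]] tri_wave_odd_piece[OF hgap_pos r] by auto
      then show ?thesis using FG1 ph by simp
    next
      case False
      have "cor_pt (cor_pos x) = (X0 + dx, of_int (m0 - 1) * of_int pp + (Y0 + dy - s * (X0 + dx)) + s * (X0 + dx - of_int (m0 - 1) - a))
            \<and> cor_copy (cor_pos x) = (False, False)"
        using cor_pt_free_at[of "m0 - 1" "cor_pos x"] d False obst_edge by (auto simp: PX dx_def[symmetric] dy_def[symmetric] X0m e_def)
      moreover have "s * (X0 + dx - of_int (m0 - 1) - a) = of_int pp + s * dx"
        using obst_edge sp by (simp add: X0m algebra_simps)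
      ultimately show ?thesis using obst_edge by (simp add: X0m \<mu>0_def algebra_simps)
    qed
    have q: "cor_pt (cor_pos x0) + gmul (False, False) (disp x x0) = cor_pt (cor_pos x)"
      using FG F0 by (simp add: gmul_def dx_def[symmetric] dy_def[symmetric])
    show "moves_to a b (False, False) (cor_pt (cor_pos x0)) (disp x x0) (cor_map x)"
      unfolding moves_to_def Let_def q using cor_pt_table[of "cor_pos x"] FG by (intro disjI1) (simp add: cor_map_def)
  qed
qed

lemma cor_map_chart_under:
  assumes x0: "x0 \<in> cor_width \<times> UNIV" and regime: "0 < fst (cor_pos x0) - of_int \<lfloor>fst (cor_pos x0)\<rfloor> \<and> fst (cor_pos x0) - of_int \<lfloor>fst (cor_pos x0)\<rfloor> < a"
  shows "strip_chart a b th 1 1 cor_map (cor_width \<times> UNIV) x0"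
proof -
  define X0 where "X0 = fst (cor_pos x0)"
  define Y0 where "Y0 = snd (cor_pos x0)"
  define m0 where "m0 = \<lfloor>X0\<rfloor>"
  define \<xi>0 where "\<xi>0 = X0 - of_int m0"
  define \<mu>0 where "\<mu>0 = Y0 - s * X0"
  have mu0: "b < \<mu>0" "\<mu>0 < 1" using cor_width_level[of x0] x0 cor_pos_level[of x0] by (auto simp: \<mu>0_def X0_def Y0_def hgap_def)
  have xi0: "0 \<le> \<xi>0" "\<xi>0 < 1" unfolding \<xi>0_def m0_def by linarith+
  have X0m: "X0 = of_int m0 + \<xi>0" by (simp add: \<xi>0_def)
  have PX: "\<And>x. fst (cor_pos x) = X0 + fst (disp x x0)" "\<And>x. snd (cor_pos x) = Y0 + snd (disp x x0)"
    using cor_pos_disp by (auto simp: X0_def Y0_def)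
  have under: "0 < \<xi>0 \<and> \<xi>0 < a" using regime by (simp add: \<xi>0_def m0_def X0_def)
  define \<phi>0 where "\<phi>0 = \<mu>0 - b + s * \<xi>0"
  obtain j where j: "of_int j * hgap \<le> \<phi>0" "\<phi>0 < (of_int j + 1) * hgap"
    "tri_wave hgap \<phi>0 = (if even j then \<phi>0 - of_int j * hgap else (of_int j + 1) * hgap - \<phi>0)"
    "tri_wave_odd hgap \<phi>0 = odd j" using tri_wave_fold[OF hgap_pos] by blast
  define y0 where "y0 = of_int m0 * of_int pp + b + tri_wave hgap \<phi>0"
  have F0: "cor_pt (cor_pos x0) = (X0, y0)" "cor_copy (cor_pos x0) = (False, odd j)"
    using cor_pt_under_at[of m0 "cor_pos x0"] under j(4)
    by (auto simp: X0m X0_def[symmetric] Y0_def[symmetric] \<mu>0_def \<phi>0_def y0_def algebra_simps)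
  have Fx: "cor_pt (cor_pos x) = (X0 + fst (disp x x0), of_int m0 * of_int pp + b + tri_wave hgap (\<phi>0 + snd (disp x x0)))
      \<and> cor_copy (cor_pos x) = (False, tri_wave_odd hgap (\<phi>0 + snd (disp x x0)))"
    if "\<bar>fst (disp x x0)\<bar> < min \<xi>0 (a - \<xi>0)" for x
  proof -
    have "cor_pt (cor_pos x) = (X0 + fst (disp x x0), of_int m0 * of_int pp + b + tri_wave hgap (Y0 + snd (disp x x0) - s * (X0 + fst (disp x x0)) - b + s * (X0 + fst (disp x x0) - of_int m0)))
      \<and> cor_copy (cor_pos x) = (False, tri_wave_odd hgap (Y0 + snd (disp x x0) - s * (X0 + fst (disp x x0)) - b + s * (X0 + fst (disp x x0) - of_int m0)))"
      using cor_pt_under_at[of m0 "cor_pos x"] that by (auto simp: PX X0m)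
    moreover have "Y0 + snd (disp x x0) - s * (X0 + fst (disp x x0)) - b + s * (X0 + fst (disp x x0) - of_int m0) = \<phi>0 + snd (disp x x0)"
      by (simp add: \<phi>0_def \<mu>0_def X0m algebra_simps)
    ultimately show ?thesis by simp
  qed
  show ?thesis
  proof (cases "of_int j * hgap < \<phi>0")
    case True
    define e where "e = min (min \<xi>0 (a - \<xi>0)) (min (\<phi>0 - of_int j * hgap) ((of_int j + 1) * hgap - \<phi>0))"
    have e: "e > 0" using True j under by (simp add: e_def)
    show ?thesis
    proof (rule strip_chartI[OF e, where g = "(False, odd j)" and pt = "cor_pt (cor_pos x0)"])
      show "cor_map x0 = wt_class a b ((False, odd j), cor_pt (cor_pos x0))" using F0 by (simp add: cor_map_def)
      fix x assume x: "x \<in> cor_width \<times> UNIV" "\<bar>fst (disp x x0)\<bar> < e" "\<bar>snd (disp x x0)\<bar> < e"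
      define dx where "dx = fst (disp x x0)"
      define dy where "dy = snd (disp x x0)"
      have d: "\<bar>dx\<bar> < e" "\<bar>dy\<bar> < e" using x by (auto simp: dx_def dy_def)
      have F1: "cor_pt (cor_pos x) = (X0 + dx, of_int m0 * of_int pp + b + tri_wave hgap (\<phi>0 + dy))
         \<and> cor_copy (cor_pos x) = (False, tri_wave_odd hgap (\<phi>0 + dy))"
        using Fx[of x] d by (simp add: e_def dx_def dy_def)
      have r: "of_int j * hgap \<le> \<phi>0 + dy" "\<phi>0 + dy < (of_int j + 1) * hgap" using d by (auto simp: e_def)
      have T: "tri_wave hgap (\<phi>0 + dy) = (if even j then \<phi>0 + dy - of_int j * hgap else (of_int j + 1) * hgap - (\<phi>0 + dy))"
           "tri_wave_odd hgap (\<phi>0 + dy) = odd j"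
        using tri_wave_piece[OF hgap_pos r(1) less_imp_le[OF r(2)]] tri_wave_odd_piece[OF hgap_pos r] by auto
      have q: "cor_pt (cor_pos x0) + gmul (False, odd j) (disp x x0) = cor_pt (cor_pos x)"
        using F1 F0 T j(3) by (simp add: gmul_def dx_def[symmetric] dy_def[symmetric] y0_def algebra_simps)
      show "moves_to a b (False, odd j) (cor_pt (cor_pos x0)) (disp x x0) (cor_map x)"
        unfolding moves_to_def Let_def q using cor_pt_table[of "cor_pos x"] F1 T by (intro disjI1) (simp add: cor_map_def)
    qed
  next
    case False
    then have pj: "\<phi>0 = of_int j * hgap" using j by simp
    define e where "e = min (min \<xi>0 (a - \<xi>0)) (min hgap b)"
    have e: "e > 0" using hgap_pos b0 under by (simp add: e_def)
    have y0e: "y0 = of_int m0 * of_int pp + b + (if even j then 0 else hgap)"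
      using j(3) pj by (simp add: y0_def algebra_simps)
    have "in_slot a X0" unfolding in_slot_def using under by (intro exI[of _ m0]) (simp add: X0m)
    moreover have "slot_end b y0" unfolding slot_end_def y0e
      by (cases "even j") (auto simp: hgap_def intro: exI[of _ "m0 * pp"] exI[of _ "m0 * pp + 1"])
    ultimately have hs: "on_hside a b (X0, y0)" by (simp add: on_hside_iff)
    show ?thesis
    proof (rule strip_chartI[OF e, where g = "(False, odd j)" and pt = "cor_pt (cor_pos x0)"])
      show "cor_map x0 = wt_class a b ((False, odd j), cor_pt (cor_pos x0))" using F0 by (simp add: cor_map_def)
      fix x assume x: "x \<in> cor_width \<times> UNIV" "\<bar>fst (disp x x0)\<bar> < e" "\<bar>snd (disp x x0)\<bar> < e"
      define dx where "dx = fst (disp x x0)"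
      define dy where "dy = snd (disp x x0)"
      have d: "\<bar>dx\<bar> < e" "\<bar>dy\<bar> < e" using x by (auto simp: dx_def dy_def)
      have F1: "cor_pt (cor_pos x) = (X0 + dx, of_int m0 * of_int pp + b + tri_wave hgap (\<phi>0 + dy))
         \<and> cor_copy (cor_pos x) = (False, tri_wave_odd hgap (\<phi>0 + dy))"
        using Fx[of x] d by (simp add: e_def dx_def dy_def)
      show "moves_to a b (False, odd j) (cor_pt (cor_pos x0)) (disp x x0) (cor_map x)"
      proof (cases "dy \<ge> 0")
        case True
        have r: "of_int j * hgap \<le> \<phi>0 + dy" "\<phi>0 + dy < (of_int j + 1) * hgap" using d True pj by (auto simp: e_def algebra_simps)
        have T: "tri_wave hgap (\<phi>0 + dy) = (if even j then \<phi>0 + dy - of_int j * hgap else (of_int j + 1) * hgap - (\<phi>0 + dy))"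
             "tri_wave_odd hgap (\<phi>0 + dy) = odd j"
          using tri_wave_piece[OF hgap_pos r(1) less_imp_le[OF r(2)]] tri_wave_odd_piece[OF hgap_pos r] by auto
        have q: "cor_pt (cor_pos x0) + gmul (False, odd j) (disp x x0) = cor_pt (cor_pos x)"
          using F1 F0 T j(3) by (simp add: gmul_def dx_def[symmetric] dy_def[symmetric] y0_def algebra_simps)
        show ?thesis unfolding moves_to_def Let_def q using cor_pt_table[of "cor_pos x"] F1 T by (intro disjI1) (simp add: cor_map_def)
      next
        case False
        have r: "of_int (j - 1) * hgap \<le> \<phi>0 + dy" "\<phi>0 + dy < (of_int (j - 1) + 1) * hgap" using d False pj by (auto simp: e_def algebra_simps)
        have T: "tri_wave hgap (\<phi>0 + dy) = (if even (j - 1) then \<phi>0 + dy - of_int (j - 1) * hgap else (of_int (j - 1) + 1) * hgap - (\<phi>0 + dy))"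
             "tri_wave_odd hgap (\<phi>0 + dy) = odd (j - 1)"
          using tri_wave_piece[OF hgap_pos r(1) less_imp_le[OF r(2)]] tri_wave_odd_piece[OF hgap_pos r] by auto
        define q where "q = cor_pt (cor_pos x0) + gmul (False, odd j) (disp x x0)"
        have qe: "q = (X0 + dx, y0 + (if odd j then - dy else dy))"
          using F0 by (simp add: q_def gmul_def dx_def[symmetric] dy_def[symmetric])
        have "in_slot a (X0 + dx)" unfolding in_slot_def using d under by (intro exI[of _ m0]) (auto simp: X0m e_def)
        moreover have "in_slot b (y0 + (if odd j then - dy else dy))" unfolding in_slot_def y0e
          using d False by (cases "even j") (auto simp: hgap_def e_def intro: exI[of _ "m0 * pp"] exI[of _ "m0 * pp + 1"])
        ultimately have obs: "in_obst_int a b q" by (simp add: in_obst_iff qe)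
        have "cor_pt (cor_pos x) = (fst q, 2 * snd (cor_pt (cor_pos x0)) - snd q)"
          using F1 F0 T qe pj by (auto simp: y0e hgap_def algebra_simps)
        moreover have "cor_copy (cor_pos x) = (fst (False, odd j), \<not> snd (False, odd j))" using F1 T by simp
        ultimately show ?thesis using hs obs F0 unfolding moves_to_def Let_def q_def[symmetric] by (simp add: cor_map_def)
      qed
    qed
  qed
qed

lemma cor_map_chart:
  assumes x0: "x0 \<in> cor_width \<times> UNIV"
  shows "strip_chart a b th 1 1 cor_map (cor_width \<times> UNIV) x0"
proof -
  define \<xi>0 where "\<xi>0 = fst (cor_pos x0) - of_int \<lfloor>fst (cor_pos x0)\<rfloor>"
  have "0 \<le> \<xi>0" "\<xi>0 < 1" unfolding \<xi>0_def by linarith+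
  then consider "a < \<xi>0" | "\<xi>0 = a" | "\<xi>0 = 0" | "0 < \<xi>0 \<and> \<xi>0 < a" by linarith
  then show ?thesis
    using cor_map_chart_free[OF x0] cor_map_chart_column_edge[OF x0] cor_map_chart_obstacle_edge[OF x0]
      cor_map_chart_under[OF x0]
    unfolding \<xi>0_def by cases blast+
qed

lemma cor_pos_inj: "cor_pos x = cor_pos x' \<Longrightarrow> x = x'"
proof -
  assume h: "cor_pos x = cor_pos x'"
  have e1: "snd (cor_pos x) - s * fst (cor_pos x) = snd (cor_pos x') - s * fst (cor_pos x')" using h by simp
  have "fst x * kappa = fst x' * kappa" using e1 cor_pos_level[of x] cor_pos_level[of x'] by linarith
  then have t: "fst x = fst x'" using kappa_pos by (metis less_irrefl mult_right_cancel)
  have "fst (cor_pos x) = fst (cor_pos x')" using h by simp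
  then have "snd x * c = snd x' * c" using t by (simp add: cor_pos_def)
  then have "snd x = snd x'" using c0 by simp
  then show ?thesis using t by (simp add: prod_eq_iff)
qed

lemma cor_map_inj: "inj_on cor_map (cor_width \<times> UNIV)"
proof (rule inj_onI)
  fix x x' assume x: "x \<in> cor_width \<times> UNIV" and x': "x' \<in> cor_width \<times> UNIV" and e: "cor_map x = cor_map x'"
  define P where "P = cor_pos x"
  define P' where "P' = cor_pos x'"
  have "wt_eq a b (cor_copy P, cor_pt P) (cor_copy P', cor_pt P')"
    using e cor_pt_table[of P'] unfolding cor_map_def P_def P'_def by (intro wt_eq_of_class_eq) (auto simp: XR_def)
  then have F: "cor_pt P = cor_pt P'" and G: "cor_copy P = cor_copy P' \<or> on_vside a b (cor_pt P) \<or> on_hside a b (cor_pt P) \<or> is_corner a b (cor_pt P)"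
    unfolding wt_eq_def by auto
  have fst_FR: "\<And>P. fst (cor_pt P) = fst P" by (simp add: cor_pt_def Let_def)
  have X: "fst P = fst P'" using F fst_FR by metis
  define m where "m = \<lfloor>fst P\<rfloor>"
  define \<xi> where "\<xi> = fst P - of_int m"
  define \<mu> where "\<mu> = snd P - s * fst P"
  define \<mu>' where "\<mu>' = snd P' - s * fst P'"
  have mu: "b < \<mu>" "\<mu> < 1" using cor_width_level[of x] x cor_pos_level[of x] by (auto simp: \<mu>_def P_def hgap_def)
  have mu': "b < \<mu>'" "\<mu>' < 1" using cor_width_level[of x'] x' cor_pos_level[of x'] by (auto simp: \<mu>'_def P'_def hgap_def)
  have m': "\<lfloor>fst P'\<rfloor> = m" using X by (simp add: m_def)
  have "\<mu> = \<mu>'"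
  proof (cases "\<xi> < a")
    case False
    then show ?thesis using F cor_pt_free[of P] cor_pt_free[of P'] X by (simp add: m'[symmetric] m_def \<xi>_def \<mu>_def \<mu>'_def)
  next
    case True
    define \<phi> where "\<phi> = \<mu> - b + s * \<xi>"
    define \<phi>' where "\<phi>' = \<mu>' - b + s * \<xi>"
    have FP: "cor_pt P = (fst P, of_int m * of_int pp + b + tri_wave hgap \<phi>)" "cor_copy P = (False, tri_wave_odd hgap \<phi>)"
      using cor_pt_under[of P] True by (simp_all add: cor_copy_def m_def \<xi>_def \<mu>_def \<phi>_def)
    have FP': "cor_pt P' = (fst P', of_int m * of_int pp + b + tri_wave hgap \<phi>')" "cor_copy P' = (False, tri_wave_odd hgap \<phi>')"
      using cor_pt_under[of P'] True X by (simp_all add: cor_copy_def m'[symmetric] m_def \<xi>_def \<mu>'_def \<phi>'_def)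
    have tr: "tri_wave hgap \<phi> = tri_wave hgap \<phi>'" using F FP FP' by simp
    have yr: "of_int (m * pp) + b \<le> snd (cor_pt P)" "snd (cor_pt P) \<le> of_int (m * pp) + 1"
      using tri_wave_range[OF hgap_pos, of \<phi>] FP by (auto simp: hgap_def)
    have cnd: "tri_wave_odd hgap \<phi> = tri_wave_odd hgap \<phi>' \<or> tri_wave hgap \<phi> = 0 \<or> tri_wave hgap \<phi> = hgap"
    proof (cases "cor_copy P = cor_copy P'")
      case True then show ?thesis using FP FP' by simp
    next
      case False
      have "\<not> in_slot b (snd (cor_pt P))" using not_in_slot_gap[OF yr] .
      then have "slot_end b (snd (cor_pt P))" using G False by (auto simp: on_vside_iff on_hside_iff is_corner_iff)
      then have "snd (cor_pt P) = of_int (m * pp) + b \<or> snd (cor_pt P) = of_int (m * pp) + 1"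
        using slot_end_in_gap[OF b0 b1 yr] by blast
      then show ?thesis using FP by (auto simp: hgap_def)
    qed
    obtain k :: int where k: "\<phi>' = \<phi> + of_int k * hgap" using tri_wave_inj[OF hgap_pos tr cnd] by blast
    then have kk: "\<mu>' - \<mu> = of_int k * hgap" by (simp add: \<phi>_def \<phi>'_def)
    have "\<bar>\<mu>' - \<mu>\<bar> < hgap" using mu mu' unfolding hgap_def abs_less_iff by linarith
    then have "\<bar>of_int k * hgap\<bar> < hgap" using kk by simp
    then have "k = 0" by (rule int_mult_abs_less_self)
    then show ?thesis using k by (simp add: \<phi>_def \<phi>'_def)
  qed
  then have "snd P = snd P'" using X by (simp add: \<mu>_def \<mu>'_def)
  then have "P = P'" using X by (simp add: prod_eq_iff)
  then show "x = x'" using cor_pos_inj by (simp add: P_def P'_def)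
qed

lemma cor_map_Xinf: "cor_map ` (cor_width \<times> UNIV) \<subseteq> Xinf a b"
  unfolding cor_map_def Xinf_def XR_def by (auto intro!: imageI simp: cor_pt_table)

lemma cor_strip: "wt_strip a b th (cor_map ` (cor_width \<times> UNIV))"
  unfolding cor_width_def
  by (rule wt_strip_of_charts)
    (use cor_map_inj cor_map_Xinf cor_map_chart mult_pos_pos[OF hgap_pos c0] in \<open>auto simp: cor_width_def\<close>)

text \<open>The label of a point off the corners: whether it lies in a column or a corridor strip,
  and the symmetry of the table that carries the basic strip onto the strip through it.\<close>

definition label_free :: "bool \<times> bool \<Rightarrow> int \<Rightarrow> real \<Rightarrow> real \<Rightarrow> bool \<times> (bool \<times> bool) \<times> int \<times> int" where
  "label_free g i \<xi> y = (let \<Lambda> = y - sgn_of (fst g) * sgn_of (snd g) * s * (\<xi> - a); n = \<lfloor>\<Lambda>\<rfloor> in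
     if \<Lambda> - of_int n < b then (False, (False, snd g), i, n mod (2 * pp))
     else (True, g, 0, n + (if snd g then 1 else 0) - (if fst g = snd g then 1 else -1) * i * pp))"

definition label_under :: "bool \<times> bool \<Rightarrow> int \<Rightarrow> real \<Rightarrow> real \<Rightarrow> bool \<times> (bool \<times> bool) \<times> int \<times> int" where
  "label_under g i \<xi> y = (let r = \<lceil>y\<rceil> - 1; \<tau> = y - of_int r - b; \<psi> = (if snd g then 2 * hgap - \<tau> else \<tau>);
     \<xi>' = (if fst g then a - \<xi> else \<xi>); v = \<psi> - s * \<xi>'; \<rho> = v - 2 * hgap * of_int \<lfloor>v / (2 * hgap)\<rfloor>;
     e2 = (hgap < \<rho>); M = (if fst g then - i else i) in
     (True, (fst g, e2), 0, if e2 then r + 1 + M * pp else r - M * pp))"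

definition strip_label :: "wtrep \<Rightarrow> bool \<times> (bool \<times> bool) \<times> int \<times> int" where
  "strip_label z = (let x = fst (snd z); y = snd (snd z); i = \<lceil>x\<rceil> - 1; \<xi> = x - of_int i in
     if a \<le> \<xi> then label_free (fst z) i \<xi> y else label_under (fst z) i \<xi> y)"

lemma strip_label_free: "of_int i + a \<le> x \<Longrightarrow> x \<le> of_int i + 1 \<Longrightarrow> strip_label (g, (x, y)) = label_free g i (x - of_int i) y"
proof -
  assume h: "of_int i + a \<le> x" "x \<le> of_int i + 1"
  then have "\<lceil>x\<rceil> - 1 = i" using a0 by (intro ceiling_minus_one_eq) auto
  then show ?thesis using h by (simp add: strip_label_def Let_def)
qed

lemma strip_label_under: "of_int i < x \<Longrightarrow> x < of_int i + a \<Longrightarrow> strip_label (g, (x, y)) = label_under g i (x - of_int i) y"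
proof -
  assume h: "of_int i < x" "x < of_int i + a"
  then have "\<lceil>x\<rceil> - 1 = i" using a1 by (intro ceiling_minus_one_eq) auto
  then show ?thesis using h by (simp add: strip_label_def Let_def)
qed

lemma col_map_shape:
  assumes "x \<in> col_width \<times> UNIV"
  shows "snd (col_copy (col_pos x)) = False \<and> a \<le> fst (col_pt (col_pos x)) \<and> fst (col_pt (col_pos x)) \<le> 1 \<and>
    (\<exists>j::int. 2 * of_int pp * of_int j < snd (col_pt (col_pos x)) - sgn_of (fst (col_copy (col_pos x))) * s * (fst (col_pt (col_pos x)) - a)
       \<and> snd (col_pt (col_pos x)) - sgn_of (fst (col_copy (col_pos x))) * s * (fst (col_pt (col_pos x)) - a) < 2 * of_int pp * of_int j + b)"
proof -
  define L where "L = 1 - a"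
  have L: "L > 0" using col_gap_pos by (simp add: L_def)
  define X where "X = fst (col_pos x)"
  define Y where "Y = snd (col_pos x)"
  have lam: "0 < Y - s * (X - a)" "Y - s * (X - a) < b"
    using col_width_level[of x] assms col_pos_level[of x] by (auto simp: X_def Y_def)
  obtain J where J: "of_int J * L \<le> X - a" "X - a < (of_int J + 1) * L"
    "tri_wave L (X - a) = (if even J then X - a - of_int J * L else (of_int J + 1) * L - (X - a))"
    "tri_wave_odd L (X - a) = odd J" using tri_wave_fold[OF L] by blast
  have rng: "a \<le> fst (col_pt (col_pos x))" "fst (col_pt (col_pos x)) \<le> 1"
    using tri_wave_range[OF col_gap_pos, of "X - a"] by (auto simp: col_pt_def X_def)
  have ex: "\<exists>j::int. 2 * of_int pp * of_int j < snd (col_pt (col_pos x)) - sgn_of (fst (col_copy (col_pos x))) * s * (fst (col_pt (col_pos x)) - a)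
       \<and> snd (col_pt (col_pos x)) - sgn_of (fst (col_copy (col_pos x))) * s * (fst (col_pt (col_pos x)) - a) < 2 * of_int pp * of_int j + b"
  proof (cases "even J")
    case True
    then obtain j where j: "J = 2 * j" by (rule evenE)
    have tw: "tri_wave L (X - a) = X - a - of_int J * L" using J True by simp
    have F1: "fst (col_pt (col_pos x)) = a + (X - a - of_int J * L)" using tw by (simp add: col_pt_def X_def L_def)
    have F2: "snd (col_pt (col_pos x)) = Y" by (simp add: col_pt_def Y_def)
    have G1: "fst (col_copy (col_pos x)) = False" using J True by (simp add: col_copy_def X_def L_def)
    have "snd (col_pt (col_pos x)) - sgn_of (fst (col_copy (col_pos x))) * s * (fst (col_pt (col_pos x)) - a) = Y - s * (X - a) + s * (of_int J * L)"
      unfolding F1 F2 G1 by (simp add: sgn_of_def algebra_simps)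
    also have "s * (of_int J * L) = 2 * of_int pp * of_int j" using slope_mult_period[of J] j by (simp add: L_def)
    finally show ?thesis using lam by (intro exI[of _ j]) simp
  next
    case False
    then have "even (J + 1)" by simp
    then obtain j where j: "J + 1 = 2 * j" by (rule evenE)
    have tw: "tri_wave L (X - a) = (of_int J + 1) * L - (X - a)" using J False by simp
    have F1: "fst (col_pt (col_pos x)) = a + ((of_int J + 1) * L - (X - a))" using tw by (simp add: col_pt_def X_def L_def)
    have F2: "snd (col_pt (col_pos x)) = Y" by (simp add: col_pt_def Y_def)
    have G1: "fst (col_copy (col_pos x)) = True" using J False by (simp add: col_copy_def X_def L_def)
    have "snd (col_pt (col_pos x)) - sgn_of (fst (col_copy (col_pos x))) * s * (fst (col_pt (col_pos x)) - a) = Y - s * (X - a) + s * ((of_int J + 1) * L)"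
      unfolding F1 F2 G1 by (simp add: sgn_of_def algebra_simps)
    also have "s * ((of_int J + 1) * L) = (of_int J + 1) * (s * (1 - a))" by (simp add: L_def algebra_simps)
    also have "\<dots> = 2 * of_int pp * of_int j"
    proof -
      have jj: "(of_int J + 1::real) = 2 * of_int j" using j by (metis of_int_1 of_int_add of_int_mult of_int_numeral)
      show ?thesis unfolding jj sp by simp
    qed
    finally show ?thesis using lam by (intro exI[of _ j]) simp
  qed
  show ?thesis using rng ex by (simp add: col_copy_def)
qed

lemma strip_label_col:
  assumes "a \<le> x0" "x0 \<le> 1" "2 * of_int pp * of_int j < y0 - sgn_of f * s * (x0 - a)"
    "y0 - sgn_of f * s * (x0 - a) < 2 * of_int pp * of_int j + b" "0 \<le> k" "k < 2 * pp"
  shows "strip_label (sym_rep a b ((False, e2), (m, k)) ((f, False), (x0, y0))) = (False, (False, e2), m, k)"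
proof -
  have T: "sym_rep a b ((False, e2), (m, k)) ((f, False), (x0, y0)) = ((f, e2), (x0 + of_int m, refl_if b e2 y0 + of_int k))"
    by (simp add: sym_rep_def sym_pt_def klein_mult_def refl_if_def)
  have K: "strip_label ((f, e2), (x0 + of_int m, refl_if b e2 y0 + of_int k)) = label_free (f, e2) m x0 (refl_if b e2 y0 + of_int k)"
    using strip_label_free[of m "x0 + of_int m"] assms by simp
  define \<Lambda> where "\<Lambda> = refl_if b e2 y0 + of_int k - sgn_of f * sgn_of e2 * s * (x0 - a)"
  have L: "of_int (2 * pp * (if e2 then - j else j) + k) < \<Lambda> \<and> \<Lambda> < of_int (2 * pp * (if e2 then - j else j) + k) + b"
    using assms(3,4) by (cases e2) (auto simp: \<Lambda>_def refl_if_def sgn_of_def algebra_simps)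
  have fl: "\<lfloor>\<Lambda>\<rfloor> = 2 * pp * (if e2 then - j else j) + k" using L b1 by (intro floor_unique) auto
  have fr: "\<Lambda> - of_int \<lfloor>\<Lambda>\<rfloor> < b" using L fl by simp
  have md: "(2 * pp * (if e2 then - j else j) + k) mod (2 * pp) = k"
    using assms(5,6) by simp
  have K2: "label_free (f, e2) m x0 (refl_if b e2 y0 + of_int k) = (if \<Lambda> - of_int \<lfloor>\<Lambda>\<rfloor> < b then (False, (False, e2), m, \<lfloor>\<Lambda>\<rfloor> mod (2 * pp))
     else (True, (f, e2), 0, \<lfloor>\<Lambda>\<rfloor> + (if e2 then 1 else 0) - (if f = e2 then 1 else -1) * m * pp))"
    unfolding label_free_def Let_def \<Lambda>_def by simp
  show ?thesis unfolding T K K2 using fr fl md by simp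
qed

lemma cor_map_shape:
  assumes x: "x \<in> cor_width \<times> UNIV"
  defines "X \<equiv> fst (cor_pos x)" and "\<mu> \<equiv> snd (cor_pos x) - s * fst (cor_pos x)"
  shows "b < \<mu> \<and> \<mu> < 1 \<and>
    ((of_int \<lfloor>X\<rfloor> < X \<and> X < of_int \<lfloor>X\<rfloor> + a \<and>
       cor_pt (cor_pos x) = (X, of_int \<lfloor>X\<rfloor> * of_int pp + b + tri_wave hgap (\<mu> - b + s * (X - of_int \<lfloor>X\<rfloor>)))
     \<and> cor_copy (cor_pos x) = (False, tri_wave_odd hgap (\<mu> - b + s * (X - of_int \<lfloor>X\<rfloor>))))
   \<or> (\<exists>I::int. of_int I + a \<le> X \<and> X \<le> of_int I + 1 \<and> cor_copy (cor_pos x) = (False, False) \<and>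
        cor_pt (cor_pos x) = (X, of_int I * of_int pp + \<mu> + s * (X - of_int I - a))))"
proof -
  have mu: "b < \<mu>" "\<mu> < 1" using cor_width_level[of x] x cor_pos_level[of x] by (auto simp: \<mu>_def hgap_def)
  define m where "m = \<lfloor>X\<rfloor>"
  have mX: "of_int m \<le> X" "X < of_int m + 1" unfolding m_def by linarith+
  consider "X = of_int m" | "of_int m < X \<and> X < of_int m + a" | "of_int m + a \<le> X" using mX by linarith
  then show ?thesis
  proof cases
    case 1
    have r0: "of_int 0 * hgap \<le> \<mu> - b" "\<mu> - b < (of_int 0 + 1) * hgap" using mu by (auto simp: hgap_def)
    have T: "tri_wave hgap (\<mu> - b) = \<mu> - b" "tri_wave_odd hgap (\<mu> - b) = False"
      using tri_wave_piece[OF hgap_pos r0(1) less_imp_le[OF r0(2)]] tri_wave_odd_piece[OF hgap_pos r0] by auto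
    have F: "cor_pt (cor_pos x) = (X, of_int m * of_int pp + b + tri_wave hgap (\<mu> - b)) \<and> cor_copy (cor_pos x) = (False, tri_wave_odd hgap (\<mu> - b))"
      using cor_pt_under_at[of m "cor_pos x"] 1 a0 by (simp add: X_def \<mu>_def)
    have "s * (X - of_int (m - 1) - a) = of_int pp" using 1 sp by simp
    then have "cor_pt (cor_pos x) = (X, of_int (m - 1) * of_int pp + \<mu> + s * (X - of_int (m - 1) - a))"
      using F T by (simp add: algebra_simps)
    moreover have "of_int (m - 1) + a \<le> X" "X \<le> of_int (m - 1) + 1" using 1 a1 by auto
    ultimately show ?thesis using mu F T by (intro conjI disjI2 exI[of _ "m - 1"]) simp_all
  next
    case 2
    then show ?thesis using mu cor_pt_under_at[of m "cor_pos x"] by (simp add: X_def \<mu>_def m_def)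
  next
    case 3
    have "cor_pt (cor_pos x) = (X, of_int m * of_int pp + \<mu> + s * (X - of_int m - a)) \<and> cor_copy (cor_pos x) = (False, False)"
      using cor_pt_free_at[of m "cor_pos x"] 3 mX by (simp add: X_def \<mu>_def)
    then show ?thesis using mu 3 mX by (intro conjI disjI2 exI[of _ m]) auto
  qed
qed

lemma strip_label_cor_free:
  assumes x0: "of_int I + a \<le> x0" "x0 \<le> of_int I + 1" and mu: "b < \<mu>" "\<mu> < 1"
    and y0: "y0 = of_int I * of_int pp + \<mu> + s * (x0 - of_int I - a)"
  shows "strip_label (sym_rep a b (e, (0, k)) ((False, False), (x0, y0))) = (True, e, 0, k)"
proof -
  obtain e1 e2 where e: "e = (e1, e2)" by (cases e)
  define i where "i = (if e1 then - I - 1 else I)"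
  define x where "x = refl_if a e1 x0"
  define y where "y = refl_if b e2 y0 + of_int k"
  have T: "sym_rep a b (e, (0, k)) ((False, False), (x0, y0)) = (e, (x, y))"
    by (simp add: sym_rep_def sym_pt_def klein_mult_def e x_def y_def)
  have xi: "of_int i + a \<le> x" "x \<le> of_int i + 1" using x0 by (auto simp: i_def x_def refl_if_def)
  define \<Lambda> where "\<Lambda> = y - sgn_of e1 * sgn_of e2 * s * (x - of_int i - a)"
  define N where "N = (if e2 then k - (if e1 then I + 1 else I) * pp - 1 else (if e1 then I + 1 else I) * pp + k)"
  define \<beta> where "\<beta> = (if e2 then 1 + b - \<mu> else \<mu>)"
  have LN: "\<Lambda> = of_int N + \<beta>"
    using y0 sp by (cases e1; cases e2) (auto simp: \<Lambda>_def N_def \<beta>_def x_def y_def i_def refl_if_def sgn_of_def algebra_simps)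
  have be: "b < \<beta>" "\<beta> < 1" using mu by (auto simp: \<beta>_def)
  have fl: "\<lfloor>\<Lambda>\<rfloor> = N" using LN be b0 by (intro floor_unique) auto
  have nb: "\<not> \<Lambda> - of_int \<lfloor>\<Lambda>\<rfloor> < b" using fl LN be by simp
  have kk: "N + (if e2 then 1 else 0) - (if e1 = e2 then 1 else -1) * i * pp = k"
    by (cases e1; cases e2) (auto simp: N_def i_def algebra_simps)
  have "strip_label (e, (x, y)) = label_free e i (x - of_int i) y" using strip_label_free[OF xi] .
  also have "\<dots> = (True, e, 0, k)"
    unfolding label_free_def Let_def e fst_conv snd_conv
    using nb fl kk by (simp add: \<Lambda>_def[symmetric] e)
  finally show ?thesis using T by simp
qed

lemma strip_label_cor_under:
  assumes x0: "of_int M < x0" "x0 < of_int M + a" and mu: "b < \<mu>" "\<mu> < 1"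
    and ph: "\<phi> = \<mu> - b + s * (x0 - of_int M)"
    and y0: "y0 = of_int M * of_int pp + b + tri_wave hgap \<phi>"
  shows "strip_label (sym_rep a b (e, (0, k)) ((False, tri_wave_odd hgap \<phi>), (x0, y0))) = (True, e, 0, k)"
proof -
  obtain e1 e2 where e: "e = (e1, e2)" by (cases e)
  obtain j where j: "of_int j * hgap \<le> \<phi>" "\<phi> < (of_int j + 1) * hgap"
    "tri_wave hgap \<phi> = (if even j then \<phi> - of_int j * hgap else (of_int j + 1) * hgap - \<phi>)"
    "tri_wave_odd hgap \<phi> = odd j" using tri_wave_fold[OF hgap_pos] by blast
  define i where "i = (if e1 then - M else M)"
  define x where "x = refl_if a e1 x0"
  define y where "y = refl_if b e2 y0 + of_int k"
  define g where "g = (e1, odd j \<noteq> e2)"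
  have T: "sym_rep a b (e, (0, k)) ((False, tri_wave_odd hgap \<phi>), (x0, y0)) = (g, (x, y))"
    using j(4) by (simp add: sym_rep_def sym_pt_def klein_mult_def e x_def y_def g_def)
  have xi: "of_int i < x" "x < of_int i + a" using x0 by (auto simp: i_def x_def refl_if_def)
  have xi': "(if fst g then a - (x - of_int i) else x - of_int i) = x0 - of_int M"
    by (simp add: g_def x_def i_def refl_if_def)
  have tr: "0 \<le> tri_wave hgap \<phi>" "tri_wave hgap \<phi> \<le> hgap" using tri_wave_range[OF hgap_pos] by auto
  define r where "r = (if e2 then k - M * pp - 1 else M * pp + k)"
  have ry: "of_int r < y" "y \<le> of_int r + 1" using tr b0 b1 y0
    by (cases e2; auto simp: r_def y_def refl_if_def hgap_def algebra_simps)+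
  have rr: "\<lceil>y\<rceil> - 1 = r" using ceiling_minus_one_eq[OF ry] .
  define \<tau> where "\<tau> = y - of_int r - b"
  have tau_eq: "\<tau> = (if e2 then hgap - tri_wave hgap \<phi> else tri_wave hgap \<phi>)"
    using y0 by (cases e2) (auto simp: \<tau>_def r_def y_def refl_if_def hgap_def algebra_simps)
  define \<psi> where "\<psi> = (if snd g then 2 * hgap - \<tau> else \<tau>)"
  define v where "v = \<psi> - s * (x0 - of_int M)"
  define R where "R = (if e2 then \<mu> - b + hgap else \<mu> - b)"
  have Rr: "0 \<le> R" "R < 2 * hgap" "hgap < R \<longleftrightarrow> e2" using mu by (auto simp: R_def hgap_def)
  have vR: "\<exists>N::int. v = R + 2 * hgap * of_int N"
  proof (cases "even j")
    case True
    then obtain j2 where j2: "j = 2 * j2" by (rule evenE)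
    show ?thesis
    proof (cases e2)
      case True
      then have "v = R + 2 * hgap * of_int (- j2)"
        using j(3) \<open>even j\<close> j2 by (simp add: v_def \<psi>_def g_def tau_eq R_def ph algebra_simps)
      then show ?thesis by blast
    next
      case False
      then have "v = R + 2 * hgap * of_int (- j2)"
        using j(3) \<open>even j\<close> j2 by (simp add: v_def \<psi>_def g_def tau_eq R_def ph algebra_simps)
      then show ?thesis by blast
    qed
  next
    case False
    then have "even (j + 1)" by simp
    then obtain j2 where j2: "j + 1 = 2 * j2" by (rule evenE)
    have jj: "of_int j = 2 * of_int j2 - (1::real)" using j2 by (metis add_diff_cancel_right' of_int_1 of_int_add of_int_mult of_int_numeral)
    show ?thesis
    proof (cases e2)
      case True
      then have "v = R + 2 * hgap * of_int (- j2)"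
        using j(3) False jj by (simp add: v_def \<psi>_def g_def tau_eq R_def ph algebra_simps)
      then show ?thesis by blast
    next
      case False
      then have "v = R + 2 * hgap * of_int (- j2 + 1)"
        using j(3) \<open>odd j\<close> jj by (simp add: v_def \<psi>_def g_def tau_eq R_def ph algebra_simps)
      then show ?thesis by blast
    qed
  qed
  then obtain N where N: "v = R + 2 * hgap * of_int N" by blast
  have rho: "v - 2 * hgap * of_int \<lfloor>v / (2 * hgap)\<rfloor> = R" using mod_double_eq[OF hgap_pos Rr(1,2) N] .
  have "strip_label (g, (x, y)) = label_under g i (x - of_int i) y" using strip_label_under[OF xi] .
  also have "\<dots> = (True, (e1, e2), 0, k)"
  proof -
    have "label_under g i (x - of_int i) y = (True, (fst g, hgap < R), 0,
        if hgap < R then r + 1 + (if fst g then - i else i) * pp else r - (if fst g then - i else i) * pp)"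
      unfolding label_under_def Let_def rr \<tau>_def[symmetric] \<psi>_def[symmetric] xi' v_def[symmetric] rho ..
    also have "\<dots> = (True, (e1, e2), 0, k)"
      using Rr(3) by (cases e1; cases e2) (auto simp: g_def i_def r_def)
    finally show ?thesis .
  qed
  finally show ?thesis using T e by simp
qed

definition col_image where "col_image = col_map ` (col_width \<times> UNIV)"

definition cor_image where "cor_image = cor_map ` (cor_width \<times> UNIV)"

definition strip_of :: "bool \<times> (bool \<times> bool) \<times> int \<times> int \<Rightarrow> wtrep set set" where
  "strip_of l = (if fst l then sym_class a b (fst (snd l), (0, snd (snd (snd l)))) ` cor_image
           else sym_class a b (fst (snd l), (fst (snd (snd l)), snd (snd (snd l)))) ` col_image)"

definition labels :: "(bool \<times> (bool \<times> bool) \<times> int \<times> int) set" where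
  "labels = {l. (fst l \<and> fst (snd (snd l)) = 0) \<or>
     (\<not> fst l \<and> fst (fst (snd l)) = False \<and> 0 \<le> snd (snd (snd l)) \<and> snd (snd (snd l)) < 2 * pp)}"

lemma wt_strip_strip_of: "wt_strip a b th (strip_of l)"
  unfolding strip_of_def col_image_def cor_image_def using wt_strip_sym_class col_strip cor_strip by simp

lemma col_not_corner:
  assumes "a \<le> x0" "x0 \<le> 1" "2 * of_int pp * of_int j < y0 - sgn_of f * s * (x0 - a)"
    "y0 - sgn_of f * s * (x0 - a) < 2 * of_int pp * of_int j + b"
  shows "\<not> is_corner a b (x0, y0)"
proof
  assume "is_corner a b (x0, y0)"
  then have E: "slot_end a x0" "slot_end b y0" by (auto simp: is_corner_iff)
  have "x0 = a \<or> x0 = 1" using slot_end_column[OF assms(1,2) E(1)] .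
  then have "\<exists>N::int. of_int N < y0 \<and> y0 < of_int N + b"
  proof
    assume "x0 = a" then show ?thesis using assms(3,4) by (intro exI[of _ "2 * pp * j"]) auto
  next
    assume x1: "x0 = 1"
    have "s * (x0 - a) = of_int pp" using x1 sp by simp
    show ?thesis
    proof (cases f)
      case True
      then show ?thesis using assms(3,4) \<open>s * (x0 - a) = of_int pp\<close>
        by (intro exI[of _ "2 * pp * j - pp"]) (auto simp: sgn_of_def)
    next
      case False
      then show ?thesis using assms(3,4) \<open>s * (x0 - a) = of_int pp\<close>
        by (intro exI[of _ "2 * pp * j + pp"]) (auto simp: sgn_of_def)
    qed
  qed
  then have "in_slot b y0" by (simp add: in_slot_def)
  then show False using in_slot_not_slot_end[OF b0 b1] E(2) by blast
qed

lemma mem_strip_of_col: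
  assumes C: "C \<in> strip_of l" and l: "l \<in> labels" and col: "\<not> fst l"
  shows "\<exists>z. C = wt_class a b z \<and> z \<in> XR a b \<and> strip_label z = l \<and> \<not> is_corner a b (snd z)"
proof -
  obtain e m k where lE: "l = (False, e, m, k)" using col by (cases l) auto
  have e1: "fst e = False" "0 \<le> k" "k < 2 * pp" using l lE by (auto simp: labels_def)
  obtain e2 where e: "e = (False, e2)" using e1 by (cases e) auto
  obtain x where x: "x \<in> col_width \<times> UNIV" and Cx: "C = sym_class a b (e, (m, k)) (col_map x)"
    using C lE by (auto simp: strip_of_def col_image_def)
  define z0 where "z0 = (col_copy (col_pos x), col_pt (col_pos x))"
  obtain j where D: "snd (col_copy (col_pos x)) = False" "a \<le> fst (col_pt (col_pos x))" "fst (col_pt (col_pos x)) \<le> 1"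
    "2 * of_int pp * of_int j < snd (col_pt (col_pos x)) - sgn_of (fst (col_copy (col_pos x))) * s * (fst (col_pt (col_pos x)) - a)"
    "snd (col_pt (col_pos x)) - sgn_of (fst (col_copy (col_pos x))) * s * (fst (col_pt (col_pos x)) - a) < 2 * of_int pp * of_int j + b"
    using col_map_shape[OF x] by blast
  have z0: "z0 = ((fst (col_copy (col_pos x)), False), (fst (col_pt (col_pos x)), snd (col_pt (col_pos x))))"
    using D(1) by (simp add: z0_def prod_eq_iff)
  show ?thesis
  proof (intro exI conjI)
    show "C = wt_class a b (sym_rep a b (e, (m, k)) z0)" using Cx by (simp add: col_map_def sym_class_wt_class z0_def)
    show "sym_rep a b (e, m, k) z0 \<in> XR a b" using col_pt_table[of "col_pos x"] by (simp add: z0_def XR_def sym_rep_def)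
    show "strip_label (sym_rep a b (e, m, k) z0) = l" unfolding z0 e lE
      by (rule strip_label_col[OF D(2,3,4,5) e1(2,3)])
    show "\<not> is_corner a b (snd (sym_rep a b (e, m, k) z0))"
      using col_not_corner[OF D(2,3,4,5)] by (simp add: z0 sym_rep_def)
  qed
qed

lemma mem_strip_of_cor:
  assumes C: "C \<in> strip_of l" and l: "l \<in> labels" and cor: "fst l"
  shows "\<exists>z. C = wt_class a b z \<and> z \<in> XR a b \<and> strip_label z = l \<and> \<not> is_corner a b (snd z)"
proof -
  obtain e m k where lE: "l = (True, e, m, k)" using cor by (cases l) auto
  have m0: "m = 0" using l lE by (auto simp: labels_def)
  obtain x where x: "x \<in> cor_width \<times> UNIV" and Cx: "C = sym_class a b (e, (0, k)) (cor_map x)"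
    using C lE by (auto simp: strip_of_def cor_image_def)
  define X where "X = fst (cor_pos x)"
  define \<mu> where "\<mu> = snd (cor_pos x) - s * fst (cor_pos x)"
  have D: "b < \<mu> \<and> \<mu> < 1 \<and>
    ((of_int \<lfloor>X\<rfloor> < X \<and> X < of_int \<lfloor>X\<rfloor> + a \<and>
       cor_pt (cor_pos x) = (X, of_int \<lfloor>X\<rfloor> * of_int pp + b + tri_wave hgap (\<mu> - b + s * (X - of_int \<lfloor>X\<rfloor>)))
     \<and> cor_copy (cor_pos x) = (False, tri_wave_odd hgap (\<mu> - b + s * (X - of_int \<lfloor>X\<rfloor>))))
   \<or> (\<exists>I::int. of_int I + a \<le> X \<and> X \<le> of_int I + 1 \<and> cor_copy (cor_pos x) = (False, False) \<and>
        cor_pt (cor_pos x) = (X, of_int I * of_int pp + \<mu> + s * (X - of_int I - a))))"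
    unfolding X_def \<mu>_def by (rule cor_map_shape[OF x])
  define z0 where "z0 = (cor_copy (cor_pos x), cor_pt (cor_pos x))"
  have C0: "C = wt_class a b (sym_rep a b (e, (0, k)) z0)" using Cx by (simp add: cor_map_def sym_class_wt_class z0_def)
  have X0: "sym_rep a b (e, 0, k) z0 \<in> XR a b" using cor_pt_table[of "cor_pos x"] by (simp add: z0_def XR_def sym_rep_def)
  show ?thesis
  proof (cases "of_int \<lfloor>X\<rfloor> < X \<and> X < of_int \<lfloor>X\<rfloor> + a")
    case True
    define \<phi> where "\<phi> = \<mu> - b + s * (X - of_int \<lfloor>X\<rfloor>)"
    have nf: "\<not> (of_int I + a \<le> X \<and> X \<le> of_int I + 1)" for I :: int
    proof
      assume h: "of_int I + a \<le> X \<and> X \<le> of_int I + 1"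
      then have "(of_int I::real) < of_int \<lfloor>X\<rfloor>" "(of_int \<lfloor>X\<rfloor>::real) < of_int I + 1" using True by linarith+
      then have "I < \<lfloor>X\<rfloor>" "\<lfloor>X\<rfloor> < I + 1" by linarith+
      then show False by linarith
    qed
    have F: "z0 = ((False, tri_wave_odd hgap \<phi>), (X, of_int \<lfloor>X\<rfloor> * of_int pp + b + tri_wave hgap \<phi>))"
      using D True nf by (auto simp: z0_def \<phi>_def)
    have "\<not> slot_end a X" using in_slot_not_slot_end[OF a0 a1] True by (auto simp: in_slot_def)
    then have "\<not> is_corner a b (X, of_int \<lfloor>X\<rfloor> * of_int pp + b + tri_wave hgap \<phi>)" by (simp add: is_corner_iff)
    then have nc: "\<not> is_corner a b (snd (sym_rep a b (e, 0, k) z0))" by (simp add: sym_rep_def F)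
    show ?thesis using strip_label_cor_under[OF conjunct1[OF True] conjunct2[OF True] conjunct1[OF D] conjunct1[OF conjunct2[OF D]] \<phi>_def refl, of e k]
      C0 X0 nc unfolding F lE m0 by blast
  next
    case False
    then obtain I where I: "of_int I + a \<le> X" "X \<le> of_int I + 1" and F: "z0 = ((False, False), (X, of_int I * of_int pp + \<mu> + s * (X - of_int I - a)))"
      using D by (auto simp: z0_def)
    have nc0: "\<not> is_corner a b (X, of_int I * of_int pp + \<mu> + s * (X - of_int I - a))"
    proof
      assume "is_corner a b (X, of_int I * of_int pp + \<mu> + s * (X - of_int I - a))"
      then have E: "slot_end a X" "slot_end b (of_int I * of_int pp + \<mu> + s * (X - of_int I - a))" by (auto simp: is_corner_iff)
      have "X = of_int I + a \<or> X = of_int I + 1" using slot_end_in_gap[OF a0 a1 I E(1)] .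
      then have "\<exists>N::int. of_int N + b < of_int I * of_int pp + \<mu> + s * (X - of_int I - a) \<and>
                      of_int I * of_int pp + \<mu> + s * (X - of_int I - a) < of_int N + 1"
      proof
        assume "X = of_int I + a" then show ?thesis using D by (intro exI[of _ "I * pp"]) auto
      next
        assume "X = of_int I + 1"
        then have "s * (X - of_int I - a) = of_int pp" using sp by simp
        then show ?thesis using D by (intro exI[of _ "I * pp + pp"]) auto
      qed
      then show False using not_slot_end_gap[OF b0 b1] E(2) by blast
    qed
    then have nc: "\<not> is_corner a b (snd (sym_rep a b (e, 0, k) z0))" by (simp add: sym_rep_def F)
    show ?thesis using strip_label_cor_free[OF I conjunct1[OF D] conjunct1[OF conjunct2[OF D]] refl, of e k]
      C0 X0 nc unfolding F lE m0 by blast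
  qed
qed

lemma mem_strip_of:
  assumes "C \<in> strip_of l" and "l \<in> labels"
  shows "\<exists>z. C = wt_class a b z \<and> z \<in> XR a b \<and> strip_label z = l \<and> \<not> is_corner a b (snd z)"
  using mem_strip_of_col[OF assms] mem_strip_of_cor[OF assms] by blast

lemma strip_label_flip_x:
  assumes "on_vside a b (x, y)" and "g' = (\<not> fst g, snd g)"
  shows "strip_label (g, (x, y)) = strip_label (g', (x, y))"
proof -
  from assms(1) have E: "slot_end a x" and Iy: "in_slot b y" by (auto simp: on_vside_iff)
  obtain N :: int where N: "of_int N < y" "y < of_int N + b" using Iy by (auto simp: in_slot_def)
  obtain M :: int where M: "x = of_int M \<or> x = of_int M + a" using E by (auto simp: slot_end_def)
  show ?thesis
  proof (cases "x = of_int M + a")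
    case True
    have fl: "\<lfloor>y\<rfloor> = N" using N b1 by (intro floor_unique) auto
    have "strip_label (g, (x, y)) = label_free g M a y" "strip_label (g', (x, y)) = label_free g' M a y"
      using strip_label_free[of M x] True a1 by auto
    moreover have "label_free g M a y = label_free g' M a y"
      unfolding label_free_def Let_def using fl N assms(2) by simp
    ultimately show ?thesis by simp
  next
    case False
    then have xM: "x = of_int (M - 1) + 1" using M by simp
    have K: "strip_label (g, (x, y)) = label_free g (M - 1) 1 y" "strip_label (g', (x, y)) = label_free g' (M - 1) 1 y"
      using strip_label_free[of "M - 1" x] xM a1 by auto
    define \<sigma> where "\<sigma> = sgn_of (fst g) * sgn_of (snd g)"
    have \<sigma>: "\<sigma> = 1 \<or> \<sigma> = -1" by (auto simp: \<sigma>_def sgn_of_def)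
    have lvl1: "y - sgn_of (fst g) * sgn_of (snd g) * s * (1 - a) = y - \<sigma> * of_int pp" using sp by (simp add: \<sigma>_def)
    have L2: "y - sgn_of (fst g') * sgn_of (snd g') * s * (1 - a) = y + \<sigma> * of_int pp" using sp assms(2) by (simp add: \<sigma>_def sgn_of_def)
    have "\<exists>d::int. \<sigma> * of_int pp = of_int d"
      using \<sigma> by (metis mult_1 mult_minus_left of_int_minus)
    then obtain d :: int where d: "\<sigma> * of_int pp = of_int d" by blast
    have f1: "\<lfloor>y - of_int d\<rfloor> = N - d" using N b1 by (intro floor_unique) auto
    have f2: "\<lfloor>y + of_int d\<rfloor> = N + d" using N b1 by (intro floor_unique) auto
    have dd: "(N + d) mod (2 * pp) = (N - d) mod (2 * pp)"
    proof -
      have "d = pp \<or> d = - pp" using d \<sigma> by auto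
      then have "N + d = (N - d) + 2 * pp * (if d = pp then 1 else -1)" by auto
      then show ?thesis by (metis mod_mult_self2 mult.commute)
    qed
    show ?thesis unfolding K label_free_def Let_def lvl1 L2 d f1 f2 using N dd assms(2) by simp
  qed
qed

lemma strip_label_flip_y:
  assumes "on_hside a b (x, y)" and "g' = (fst g, \<not> snd g)"
  shows "strip_label (g, (x, y)) = strip_label (g', (x, y))"
proof -
  from assms(1) have Ix: "in_slot a x" and E: "slot_end b y" by (auto simp: on_hside_iff)
  obtain M :: int where M: "of_int M < x" "x < of_int M + a" using Ix by (auto simp: in_slot_def)
  obtain N :: int where N: "y = of_int N \<or> y = of_int N + b" using E by (auto simp: slot_end_def)
  have K: "strip_label (g, (x, y)) = label_under g M (x - of_int M) y" "strip_label (g', (x, y)) = label_under g' M (x - of_int M) y"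
    using strip_label_under[OF M] by auto
  define r where "r = \<lceil>y\<rceil> - 1"
  define \<tau> where "\<tau> = y - of_int r - b"
  have tau_cases: "\<tau> = 0 \<or> \<tau> = hgap"
  proof (cases "y = of_int N")
    case True
    then have "r = N - 1" by (simp add: r_def)
    then show ?thesis using True by (simp add: \<tau>_def hgap_def)
  next
    case False
    then have yN: "y = of_int N + b" using N by simp
    then have "r = N" using b0 b1 by (simp add: r_def ceiling_minus_one_eq)
    then show ?thesis using yN by (simp add: \<tau>_def)
  qed
  define \<xi>' where "\<xi>' = (if fst g then a - (x - of_int M) else x - of_int M)"
  define \<rho> where "\<rho> = (\<lambda>v. v - 2 * hgap * of_int \<lfloor>v / (2 * hgap)\<rfloor>)"
  have R: "\<rho> ((if snd g then 2 * hgap - \<tau> else \<tau>) - s * \<xi>') = \<rho> ((if snd g' then 2 * hgap - \<tau> else \<tau>) - s * \<xi>')"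
  proof (cases "\<tau> = 0")
    case True
    then show ?thesis using mod_double_shift[OF hgap_pos, of "- s * \<xi>'"] assms(2) by (auto simp: \<rho>_def)
  next
    case False
    then have "\<tau> = hgap" using tau_cases by simp
    then show ?thesis using assms(2) by (auto simp: \<rho>_def)
  qed
  have "label_under g M (x - of_int M) y = label_under g' M (x - of_int M) y"
    using R assms(2) unfolding label_under_def Let_def r_def[symmetric] \<tau>_def[symmetric] \<rho>_def
    by (simp add: \<xi>'_def)
  then show ?thesis using K by simp
qed

lemma strip_label_wt_eq:
  assumes w: "wt_eq a b z z'" and nc: "\<not> is_corner a b (snd z)"
  shows "strip_label z = strip_label z'"
proof -
  obtain g x y where z: "z = (g, (x, y))" by (cases z) auto
  obtain g' where z': "z' = (g', (x, y))" using w z by (cases z') (auto simp: wt_eq_def)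
  have "g = g' \<or> (on_vside a b (x, y) \<and> g' = (\<not> fst g, snd g)) \<or> (on_hside a b (x, y) \<and> g' = (fst g, \<not> snd g))"
    using w nc by (auto simp: wt_eq_def z z')
  then show ?thesis
    using strip_label_flip_x[of x y g' g] strip_label_flip_y[of x y g' g] by (auto simp: z z')
qed

lemma strip_of_disjoint:
  assumes l: "l \<in> labels" "l' \<in> labels" and C: "C \<in> strip_of l" "C \<in> strip_of l'"
  shows "l = l'"
proof -
  obtain z where z: "C = wt_class a b z" "z \<in> XR a b" "strip_label z = l" "\<not> is_corner a b (snd z)"
    using mem_strip_of[OF C(1) l(1)] by blast
  obtain z' where z': "C = wt_class a b z'" "z' \<in> XR a b" "strip_label z' = l'" "\<not> is_corner a b (snd z')"
    using mem_strip_of[OF C(2) l(2)] by blast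
  have "wt_eq a b z z'" using wt_eq_of_class_eq[OF z'(2)] z(1) z'(1) by simp
  then show ?thesis using strip_label_wt_eq z(3,4) z'(3) by metis
qed

lemma col_pos_onto: "\<exists>x. col_pos x = (X, Y) \<and> fst x * kappa = Y - s * (X - a)"
proof -
  define t where "t = c * (Y - s * (X - a))"
  define u where "u = (X - a) / c + t * s"
  have tk: "t * kappa = Y - s * (X - a)" using c_kappa by (simp add: t_def)
  have "col_pos (t, u) = (X, Y)"
  proof -
    have 1: "a - t * (s * c) + u * c = X" using c0 by (simp add: u_def field_simps)
    have "t * c + u * (s * c) = t * (c * (1 + s * s)) + s * (X - a)" using c0 by (simp add: u_def field_simps)
    then have 2: "t * c + u * (s * c) = Y" using tk by (simp add: kappa_def)
    show ?thesis using 1 2 by (simp add: col_pos_def)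
  qed
  then show ?thesis using tk by (intro exI[of _ "(t, u)"]) simp
qed

lemma cor_pos_onto: "\<exists>x. cor_pos x = (X, Y) \<and> fst x * kappa = Y - s * X - b"
proof -
  define t where "t = c * (Y - s * X - b)"
  define u where "u = X / c + t * s"
  have tk: "t * kappa = Y - s * X - b" using c_kappa by (simp add: t_def)
  have "cor_pos (t, u) = (X, Y)"
  proof -
    have 1: "- t * (s * c) + u * c = X" using c0 by (simp add: u_def field_simps)
    have "b + t * c + u * (s * c) = b + t * (c * (1 + s * s)) + s * X" using c0 by (simp add: u_def field_simps)
    then have 2: "b + t * c + u * (s * c) = Y" using tk by (simp add: kappa_def)
    show ?thesis using 1 2 by (simp add: cor_pos_def)
  qed
  then show ?thesis using tk by (intro exI[of _ "(t, u)"]) simp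
qed

lemma kappa_width: "0 < t * kappa \<Longrightarrow> t * kappa < B \<Longrightarrow> 0 < t \<and> t < B * c"
proof -
  assume h: "0 < t * kappa" "t * kappa < B"
  have E: "t * kappa * c = t" using c_kappa by (metis mult.assoc mult.commute mult_1_right)
  have "0 < t * kappa * c" "t * kappa * c < B * c" using h c0 by auto
  then show ?thesis unfolding E by simp
qed

lemma col_map_onto:
  assumes x0: "a < x0" "x0 < 1" and j: "2 * of_int pp * of_int j < y0 - sgn_of f * s * (x0 - a)"
    "y0 - sgn_of f * s * (x0 - a) < 2 * of_int pp * of_int j + b"
  shows "\<exists>x \<in> col_width \<times> UNIV. col_map x = wt_class a b ((f, False), (x0, y0))"
proof -
  define L where "L = 1 - a"
  have L: "L > 0" using col_gap_pos by (simp add: L_def)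
  define X where "X = (if f then a + 2 * of_int j * L - (x0 - a) else x0 + 2 * of_int j * L)"
  have "s * (2 * of_int j * L) = 2 * of_int j * (s * (1 - a))" by (simp add: L_def algebra_simps)
  then have sL: "s * (2 * of_int j * L) = 2 * of_int pp * of_int j" using sp by simp
  have lam: "y0 - s * (X - a) = y0 - sgn_of f * s * (x0 - a) - 2 * of_int pp * of_int j"
    using sL by (cases f) (auto simp: X_def sgn_of_def algebra_simps)
  obtain x where x: "col_pos x = (X, y0)" "fst x * kappa = y0 - s * (X - a)" using col_pos_onto by blast
  have "0 < fst x \<and> fst x < b * c" using kappa_width[of "fst x" b] x(2) lam j by simp
  then have xI: "x \<in> col_width \<times> UNIV" by (cases x) (auto simp: col_width_def)
  have FG: "col_pt (X, y0) = (x0, y0) \<and> col_copy (X, y0) = (f, False)"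
  proof (cases f)
    case True
    have r: "of_int (2 * j - 1) * L \<le> X - a" "X - a < (of_int (2 * j - 1) + 1) * L"
      using x0 True by (auto simp: X_def L_def algebra_simps)
    show ?thesis using tri_wave_piece[OF L r(1) less_imp_le[OF r(2)]] tri_wave_odd_piece[OF L r] True
      by (simp add: col_pt_def col_copy_def L_def[symmetric] X_def algebra_simps)
  next
    case False
    have r: "of_int (2 * j) * L \<le> X - a" "X - a < (of_int (2 * j) + 1) * L"
      using x0 False by (auto simp: X_def L_def algebra_simps)
    show ?thesis using tri_wave_piece[OF L r(1) less_imp_le[OF r(2)]] tri_wave_odd_piece[OF L r] False
      by (simp add: col_pt_def col_copy_def L_def[symmetric] X_def algebra_simps)
  qed
  show ?thesis using xI x(1) FG by (intro bexI[of _ x]) (simp_all add: col_map_def)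
qed

lemma cor_map_onto_free:
  assumes x0: "of_int I + a < x0" "x0 < of_int I + 1" and mu: "b < y0 - of_int I * of_int pp - s * (x0 - of_int I - a)"
    "y0 - of_int I * of_int pp - s * (x0 - of_int I - a) < 1"
  shows "\<exists>x \<in> cor_width \<times> UNIV. cor_map x = wt_class a b ((False, False), (x0, y0))"
proof -
  define \<mu> where "\<mu> = y0 - of_int I * of_int pp - s * (x0 - of_int I - a)"
  obtain x where x: "cor_pos x = (x0, \<mu> + s * x0)" "fst x * kappa = \<mu> + s * x0 - s * x0 - b" using cor_pos_onto by blast
  have "0 < fst x \<and> fst x < hgap * c" using kappa_width[of "fst x" hgap] x(2) mu by (simp add: \<mu>_def hgap_def)
  then have xI: "x \<in> cor_width \<times> UNIV" by (cases x) (auto simp: cor_width_def)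
  have "cor_pt (x0, \<mu> + s * x0) = (x0, y0) \<and> cor_copy (x0, \<mu> + s * x0) = (False, False)"
    using cor_pt_free_at[of I "(x0, \<mu> + s * x0)"] x0 by (simp add: \<mu>_def algebra_simps)
  then show ?thesis using xI x(1) by (intro bexI[of _ x]) (simp_all add: cor_map_def)
qed

lemma cor_map_onto_under:
  assumes x0: "of_int M < x0" "x0 < of_int M + a" and y0: "of_int M * of_int pp + b < y0" "y0 < of_int M * of_int pp + 1"
    and R: "0 < R" "R < hgap"
    and Rd: "R = v - 2 * hgap * of_int \<lfloor>v / (2 * hgap)\<rfloor>"
    and vd: "v = (if \<omega> then 2 * hgap - (y0 - of_int M * of_int pp - b) else y0 - of_int M * of_int pp - b) - s * (x0 - of_int M)"
  shows "\<exists>x \<in> cor_width \<times> UNIV. cor_map x = wt_class a b ((False, \<omega>), (x0, y0))"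
proof -
  define \<mu> where "\<mu> = b + R"
  define \<tau> where "\<tau> = y0 - of_int M * of_int pp - b"
  have tau_bounds: "0 < \<tau>" "\<tau> < hgap" using y0 by (auto simp: \<tau>_def hgap_def)
  define \<psi> where "\<psi> = (if \<omega> then 2 * hgap - \<tau> else \<tau>)"
  obtain x where x: "cor_pos x = (x0, \<mu> + s * x0)" "fst x * kappa = \<mu> + s * x0 - s * x0 - b" using cor_pos_onto by blast
  have "0 < fst x \<and> fst x < hgap * c" using kappa_width[of "fst x" hgap] x(2) R by (simp add: \<mu>_def)
  then have xI: "x \<in> cor_width \<times> UNIV" by (cases x) (auto simp: cor_width_def)
  define \<phi> where "\<phi> = \<mu> - b + s * (x0 - of_int M)"
  define F where "F = \<lfloor>v / (2 * hgap)\<rfloor>"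
  have v': "v = \<psi> - s * (x0 - of_int M)" using vd by (simp add: \<psi>_def \<tau>_def)
  have R': "R = v - 2 * hgap * of_int F" using Rd by (simp only: F_def)
  have ph0: "\<phi> = \<psi> - 2 * hgap * of_int F"
    unfolding \<phi>_def \<mu>_def R' v' by (simp add: algebra_simps)
  have ph: "\<phi> = \<psi> - 2 * hgap * of_int \<lfloor>v / (2 * hgap)\<rfloor>" using ph0 unfolding F_def .
  have TT: "tri_wave hgap \<phi> = \<tau> \<and> tri_wave_odd hgap \<phi> = \<omega>"
  proof -
    have P: "tri_wave hgap \<phi> = tri_wave hgap \<psi> \<and> tri_wave_odd hgap \<phi> = tri_wave_odd hgap \<psi>" unfolding ph by (rule tri_wave_periodic[OF hgap_pos])
    show ?thesis
    proof (cases \<omega>)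
      case True
      have r: "of_int 1 * hgap \<le> \<psi>" "\<psi> < (of_int 1 + 1) * hgap" using tau_bounds True by (auto simp: \<psi>_def)
      show ?thesis using P tri_wave_piece[OF hgap_pos r(1) less_imp_le[OF r(2)]] tri_wave_odd_piece[OF hgap_pos r] True by (simp add: \<psi>_def)
    next
      case False
      have r: "of_int 0 * hgap \<le> \<psi>" "\<psi> < (of_int 0 + 1) * hgap" using tau_bounds False by (auto simp: \<psi>_def)
      show ?thesis using P tri_wave_piece[OF hgap_pos r(1) less_imp_le[OF r(2)]] tri_wave_odd_piece[OF hgap_pos r] False by (simp add: \<psi>_def)
    qed
  qed
  have "cor_pt (x0, \<mu> + s * x0) = (x0, y0) \<and> cor_copy (x0, \<mu> + s * x0) = (False, \<omega>)"
    using cor_pt_under_at[of M "(x0, \<mu> + s * x0)"] x0 TT by (simp add: \<phi>_def \<tau>_def)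
  then show ?thesis using xI x(1) by (intro bexI[of _ x]) (simp_all add: cor_map_def)
qed

definition col_level :: "bool \<times> bool \<Rightarrow> int \<Rightarrow> real \<Rightarrow> real \<Rightarrow> real" where
  "col_level g i x y = y - sgn_of (fst g) * sgn_of (snd g) * s * (x - of_int i - a)"

definition under_phase :: "bool \<times> bool \<Rightarrow> int \<Rightarrow> int \<Rightarrow> real \<Rightarrow> real \<Rightarrow> real" where
  "under_phase g i r x y = (if snd g then 2 * hgap - (y - of_int r - b) else y - of_int r - b)
                  - s * (if fst g then a - (x - of_int i) else x - of_int i)"

definition phase_mod :: "real \<Rightarrow> real" where
  "phase_mod v = v - 2 * hgap * of_int \<lfloor>v / (2 * hgap)\<rfloor>"

definition generic_free :: "int \<Rightarrow> wtrep \<Rightarrow> bool" where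
  "generic_free i z \<longleftrightarrow> of_int i + a < fst (snd z) \<and> fst (snd z) < of_int i + 1 \<and>
     col_level (fst z) i (fst (snd z)) (snd (snd z)) \<noteq> of_int \<lfloor>col_level (fst z) i (fst (snd z)) (snd (snd z))\<rfloor> \<and>
     col_level (fst z) i (fst (snd z)) (snd (snd z)) \<noteq> of_int \<lfloor>col_level (fst z) i (fst (snd z)) (snd (snd z))\<rfloor> + b"

definition generic_under :: "int \<Rightarrow> int \<Rightarrow> wtrep \<Rightarrow> bool" where
  "generic_under i r z \<longleftrightarrow> of_int i < fst (snd z) \<and> fst (snd z) < of_int i + a \<and>
     of_int r + b < snd (snd z) \<and> snd (snd z) < of_int r + 1 \<and>
     phase_mod (under_phase (fst z) i r (fst (snd z)) (snd (snd z))) \<noteq> 0 \<and>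
     phase_mod (under_phase (fst z) i r (fst (snd z)) (snd (snd z))) \<noteq> hgap"

lemma wt_class_via_sym: "wt_class a b z = sym_class a b \<tau> (wt_class a b (sym_rep a b (sym_inv \<tau>) z))"
  by (simp add: sym_class_wt_class)

lemma generic_free_mem_col_strip:
  assumes G: "generic_free i (g, (x, y))"
    and regime: "col_level g i x y - of_int \<lfloor>col_level g i x y\<rfloor> < b"
  shows "strip_label (g, (x, y)) \<in> labels \<and> wt_class a b (g, (x, y)) \<in> strip_of (strip_label (g, (x, y)))"
proof -
  have xi: "of_int i + a < x" "x < of_int i + 1" using G by (auto simp: generic_free_def)
  define \<Lambda> where "\<Lambda> = col_level g i x y"
  define n where "n = \<lfloor>\<Lambda>\<rfloor>"
  define f where "f = \<Lambda> - of_int n"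
  have f01: "0 < f" "f < 1" "f \<noteq> b"
  proof -
    have "of_int n \<le> \<Lambda>" "\<Lambda> < of_int n + 1" unfolding n_def by linarith+
    moreover have "\<Lambda> \<noteq> of_int n" "\<Lambda> \<noteq> of_int n + b" using G by (auto simp: generic_free_def \<Lambda>_def n_def)
    ultimately show "0 < f" "f < 1" "f \<noteq> b" by (auto simp: f_def)
  qed
  have K: "strip_label (g, (x, y)) = label_free g i (x - of_int i) y" using strip_label_free[of i x] xi by simp
  have Lam: "y - sgn_of (fst g) * sgn_of (snd g) * s * (x - of_int i - a) = \<Lambda>" by (simp add: \<Lambda>_def col_level_def)
  have fb: "f < b" using regime by (simp add: f_def n_def \<Lambda>_def)
  define k where "k = n mod (2 * pp)"
  have kr: "0 \<le> k" "k < 2 * pp" using pp1 by (auto simp: k_def)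
  have nk: "n = 2 * pp * (n div (2 * pp)) + k" by (simp add: k_def)
  have Kv: "strip_label (g, (x, y)) = (False, (False, snd g), i, k)"
    unfolding K label_free_def Let_def Lam using fb by (simp add: n_def[symmetric] f_def[symmetric] k_def)
  define \<tau> where "\<tau> = ((False, snd g), (i, k))"
  have z0: "sym_rep a b (sym_inv \<tau>) (g, (x, y)) = ((fst g, False), (x - of_int i, if snd g then b - y + of_int k else y - of_int k))"
    by (cases g) (auto simp: sym_rep_def sym_pt_def sym_inv_def \<tau>_def klein_mult_def refl_if_def)
  define j where "j = (if snd g then - (n div (2 * pp)) else n div (2 * pp))"
  have nk': "of_int n = 2 * of_int pp * of_int (n div (2 * pp)) + (of_int k::real)"
    using nk by (metis of_int_add of_int_mult of_int_numeral mult.assoc)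
  have jj: "2 * of_int pp * of_int j < (if snd g then b - y + of_int k else y - of_int k) - sgn_of (fst g) * s * (x - of_int i - a) \<and>
       (if snd g then b - y + of_int k else y - of_int k) - sgn_of (fst g) * s * (x - of_int i - a) < 2 * of_int pp * of_int j + b"
  proof (cases "snd g")
    case True
    have "(b - y + of_int k) - sgn_of (fst g) * s * (x - of_int i - a) = b + of_int k - \<Lambda>"
      using Lam True by (simp add: sgn_of_def algebra_simps)
    then show ?thesis using True f01 \<open>f < b\<close> nk' by (simp add: j_def f_def algebra_simps)
  next
    case False
    have "(y - of_int k) - sgn_of (fst g) * s * (x - of_int i - a) = \<Lambda> - of_int k"
      using Lam False by (simp add: sgn_of_def algebra_simps)
    then show ?thesis using False f01 \<open>f < b\<close> nk' by (simp add: j_def f_def algebra_simps)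
  qed
  obtain xx where xx: "xx \<in> col_width \<times> UNIV" "col_map xx = wt_class a b (sym_rep a b (sym_inv \<tau>) (g, (x, y)))"
    using col_map_onto[of "x - of_int i" j "if snd g then b - y + of_int k else y - of_int k" "fst g"] xi jj z0
    by (auto simp: algebra_simps)
  have "wt_class a b (g, (x, y)) \<in> strip_of (strip_label (g, (x, y)))"
    unfolding Kv strip_of_def col_image_def using xx wt_class_via_sym[of "(g, (x, y))" \<tau>]
    by (auto simp: \<tau>_def intro!: image_eqI[of _ _ "col_map xx"])
  then show ?thesis using Kv kr by (simp add: labels_def)
qed

lemma generic_free_mem_cor_strip:
  assumes G: "generic_free i (g, (x, y))"
    and regime: "\<not> col_level g i x y - of_int \<lfloor>col_level g i x y\<rfloor> < b"
  shows "strip_label (g, (x, y)) \<in> labels \<and> wt_class a b (g, (x, y)) \<in> strip_of (strip_label (g, (x, y)))"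
proof -
  have xi: "of_int i + a < x" "x < of_int i + 1" using G by (auto simp: generic_free_def)
  define \<Lambda> where "\<Lambda> = col_level g i x y"
  define n where "n = \<lfloor>\<Lambda>\<rfloor>"
  define f where "f = \<Lambda> - of_int n"
  have f01: "0 < f" "f < 1" "f \<noteq> b"
  proof -
    have "of_int n \<le> \<Lambda>" "\<Lambda> < of_int n + 1" unfolding n_def by linarith+
    moreover have "\<Lambda> \<noteq> of_int n" "\<Lambda> \<noteq> of_int n + b" using G by (auto simp: generic_free_def \<Lambda>_def n_def)
    ultimately show "0 < f" "f < 1" "f \<noteq> b" by (auto simp: f_def)
  qed
  have K: "strip_label (g, (x, y)) = label_free g i (x - of_int i) y" using strip_label_free[of i x] xi by simp
  have Lam: "y - sgn_of (fst g) * sgn_of (snd g) * s * (x - of_int i - a) = \<Lambda>" by (simp add: \<Lambda>_def col_level_def)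
  have nfb: "\<not> f < b" using regime by (simp add: f_def n_def \<Lambda>_def)
  then have fb: "b < f" using f01 by simp
  define k where "k = n + (if snd g then 1 else 0) - (if fst g = snd g then 1 else -1) * i * pp"
  have Kv: "strip_label (g, (x, y)) = (True, g, 0, k)"
    unfolding K label_free_def Let_def Lam using nfb by (simp add: n_def[symmetric] f_def[symmetric] k_def)
  define \<tau> where "\<tau> = (g, (0::int, k))"
  define I where "I = (if fst g then - i - 1 else i)"
  define x0 where "x0 = refl_if a (fst g) x"
  define y0 where "y0 = refl_if b (snd g) y + (if snd g then of_int k else - of_int k)"
  have z0: "sym_rep a b (sym_inv \<tau>) (g, (x, y)) = ((False, False), (x0, y0))"
    by (cases g) (auto simp: sym_rep_def sym_pt_def sym_inv_def \<tau>_def klein_mult_def x0_def y0_def refl_if_def)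
  have x0r: "of_int I + a < x0" "x0 < of_int I + 1" using xi by (auto simp: I_def x0_def refl_if_def)
  have mu: "y0 - of_int I * of_int pp - s * (x0 - of_int I - a) = (if snd g then 1 + b - f else f)"
  proof -
    have fe: "f = \<Lambda> - of_int n" by (simp add: f_def)
    show ?thesis
      using Lam sp unfolding fe
      by (cases "fst g"; cases "snd g") (auto simp: y0_def x0_def I_def k_def refl_if_def sgn_of_def algebra_simps)
  qed
  have mu': "b < y0 - of_int I * of_int pp - s * (x0 - of_int I - a)" "y0 - of_int I * of_int pp - s * (x0 - of_int I - a) < 1"
    using mu fb f01 by (cases "snd g"; simp)+
  obtain xx where xx: "xx \<in> cor_width \<times> UNIV" "cor_map xx = wt_class a b ((False, False), (x0, y0))"
    using cor_map_onto_free[OF x0r mu'] by blast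
  then have xx: "xx \<in> cor_width \<times> UNIV" "cor_map xx = wt_class a b (sym_rep a b (sym_inv \<tau>) (g, (x, y)))" using z0 by simp_all
  have "wt_class a b (g, (x, y)) \<in> strip_of (strip_label (g, (x, y)))"
    unfolding Kv strip_of_def cor_image_def using xx wt_class_via_sym[of "(g, (x, y))" \<tau>]
    by (auto simp: \<tau>_def intro!: image_eqI[of _ _ "cor_map xx"])
  then show ?thesis using Kv by (simp add: labels_def)
qed

lemma generic_free_mem_strip:
  assumes "generic_free i (g, (x, y))"
  shows "strip_label (g, (x, y)) \<in> labels \<and> wt_class a b (g, (x, y)) \<in> strip_of (strip_label (g, (x, y)))"
  using generic_free_mem_col_strip[OF assms] generic_free_mem_cor_strip[OF assms] by blast

lemma generic_under_mem_strip:
  assumes G: "generic_under i r (g, (x, y))"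
  shows "strip_label (g, (x, y)) \<in> labels \<and> wt_class a b (g, (x, y)) \<in> strip_of (strip_label (g, (x, y)))"
proof -
  have xi: "of_int i < x" "x < of_int i + a" and yr: "of_int r + b < y" "y < of_int r + 1"
    using G by (auto simp: generic_under_def)
  have rr: "\<lceil>y\<rceil> - 1 = r" using yr b0 by (intro ceiling_minus_one_eq) auto
  define v where "v = under_phase g i r x y"
  define \<rho> where "\<rho> = phase_mod v"
  have rho: "0 < \<rho>" "\<rho> < 2 * hgap" "\<rho> \<noteq> hgap"
  proof -
    have h2: "2 * hgap > 0" using hgap_pos by simp
    have "2 * hgap * of_int \<lfloor>v / (2 * hgap)\<rfloor> \<le> v" "v < 2 * hgap * (of_int \<lfloor>v / (2 * hgap)\<rfloor> + 1)"
      using floor_divide_lower[OF h2, of v] floor_divide_upper[OF h2, of v] by (simp_all add: algebra_simps)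
    moreover have "\<rho> \<noteq> 0" "\<rho> \<noteq> hgap" using G by (auto simp: generic_under_def \<rho>_def v_def)
    ultimately show "0 < \<rho>" "\<rho> < 2 * hgap" "\<rho> \<noteq> hgap" by (auto simp: \<rho>_def phase_mod_def algebra_simps)
  qed
  define e2 where "e2 = (hgap < \<rho>)"
  define M where "M = (if fst g then - i else i)"
  define k where "k = (if e2 then r + 1 + M * pp else r - M * pp)"
  have K: "strip_label (g, (x, y)) = label_under g i (x - of_int i) y" using strip_label_under[OF xi] .
  have Kv: "strip_label (g, (x, y)) = (True, (fst g, e2), 0, k)"
    unfolding K label_under_def Let_def rr
    by (simp add: e2_def M_def k_def \<rho>_def phase_mod_def v_def under_phase_def)
  define \<tau> where "\<tau> = ((fst g, e2), (0::int, k))"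
  define x0 where "x0 = refl_if a (fst g) x"
  define y0 where "y0 = refl_if b e2 y + (if e2 then of_int k else - of_int k)"
  define \<omega> where "\<omega> = (snd g \<noteq> e2)"
  have z0: "sym_rep a b (sym_inv \<tau>) (g, (x, y)) = ((False, \<omega>), (x0, y0))"
    by (cases g) (auto simp: sym_rep_def sym_pt_def sym_inv_def \<tau>_def klein_mult_def x0_def y0_def refl_if_def \<omega>_def)
  have x0r: "of_int M < x0" "x0 < of_int M + a" using xi by (auto simp: M_def x0_def refl_if_def)
  have y0r: "of_int M * of_int pp + b < y0" "y0 < of_int M * of_int pp + 1"
    using yr by (auto simp: y0_def k_def refl_if_def algebra_simps)
  define R where "R = (if e2 then \<rho> - hgap else \<rho>)"
  have Rr: "0 < R" "R < hgap" using rho by (auto simp: R_def e2_def)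
  define v0 where "v0 = (if \<omega> then 2 * hgap - (y0 - of_int M * of_int pp - b) else y0 - of_int M * of_int pp - b) - s * (x0 - of_int M)"
  define F where "F = \<lfloor>v / (2 * hgap)\<rfloor>"
  have vF: "v = \<rho> + 2 * hgap * of_int F" by (simp add: \<rho>_def phase_mod_def F_def)
  have xM: "x0 - of_int M = (if fst g then a - (x - of_int i) else x - of_int i)"
    by (simp add: x0_def M_def refl_if_def)
  have "\<exists>N::int. v0 = R + 2 * hgap * of_int N"
  proof (cases e2)
    case False
    have "v0 = v" using False
      by (simp add: v0_def v_def under_phase_def xM \<omega>_def y0_def k_def refl_if_def algebra_simps)
    then show ?thesis using False vF by (auto simp: R_def)
  next
    case True
    show ?thesis
    proof (cases "snd g")
      case True
      have "v0 = v - hgap" using True \<open>e2\<close>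
        by (simp add: v0_def v_def under_phase_def xM \<omega>_def y0_def k_def refl_if_def hgap_def algebra_simps)
      then have "v0 = R + 2 * hgap * of_int F" using vF \<open>e2\<close> by (simp add: R_def)
      then show ?thesis by blast
    next
      case False
      have "v0 = v + hgap" using False \<open>e2\<close>
        by (simp add: v0_def v_def under_phase_def xM \<omega>_def y0_def k_def refl_if_def hgap_def algebra_simps)
      then have "v0 = R + 2 * hgap * of_int (F + 1)" using vF \<open>e2\<close> by (simp add: R_def algebra_simps)
      then show ?thesis by blast
    qed
  qed
  then obtain N :: int where N: "v0 = R + 2 * hgap * of_int N" by blast
  have Rd: "R = v0 - 2 * hgap * of_int \<lfloor>v0 / (2 * hgap)\<rfloor>"
    using mod_double_eq[OF hgap_pos less_imp_le[OF Rr(1)] _ N] Rr hgap_pos by simp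
  obtain xx where xx: "xx \<in> cor_width \<times> UNIV" "cor_map xx = wt_class a b ((False, \<omega>), (x0, y0))"
    using cor_map_onto_under[OF x0r y0r Rr Rd v0_def] by blast
  then have xx: "xx \<in> cor_width \<times> UNIV" "cor_map xx = wt_class a b (sym_rep a b (sym_inv \<tau>) (g, (x, y)))" using z0 by simp_all
  have "wt_class a b (g, (x, y)) \<in> strip_of (strip_label (g, (x, y)))"
    unfolding Kv strip_of_def cor_image_def using xx wt_class_via_sym[of "(g, (x, y))" \<tau>]
    by (auto simp: \<tau>_def intro!: image_eqI[of _ _ "cor_map xx"])
  then show ?thesis using Kv by (simp add: labels_def)
qed

lemma wt_class_corner: "is_corner a b p \<Longrightarrow> wt_class a b (g', p) = wt_class a b (g, p)"
  by (auto simp: wt_class_def wt_eq_def)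

lemma wt_class_vflip: "on_vside a b p \<Longrightarrow> wt_class a b ((\<not> fst g, snd g), p) = wt_class a b (g, p)"
proof -
  assume v: "on_vside a b p"
  then have nh: "\<not> on_hside a b p" "\<not> is_corner a b p"
    using in_slot_not_slot_end[OF a0 a1] in_slot_not_slot_end[OF b0 b1] by (auto simp: on_vside_iff on_hside_iff is_corner_iff)
  show ?thesis using v nh by (cases g) (auto simp: wt_class_def wt_eq_def)
qed

lemma wt_class_hflip: "on_hside a b p \<Longrightarrow> wt_class a b ((fst g, \<not> snd g), p) = wt_class a b (g, p)"
proof -
  assume v: "on_hside a b p"
  then have nh: "\<not> on_vside a b p" "\<not> is_corner a b p"
    using in_slot_not_slot_end[OF a0 a1] in_slot_not_slot_end[OF b0 b1] by (auto simp: on_vside_iff on_hside_iff is_corner_iff)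
  show ?thesis using v nh by (cases g) (auto simp: wt_class_def wt_eq_def)
qed

text \<open>The strip normal \<open>nrmv \<theta>\<close> read in copy \<open>g\<close>: rays in this direction cross the strips.\<close>

definition ray_dir :: "bool \<times> bool \<Rightarrow> real \<times> real" where
  "ray_dir g = (sgn_of (fst g) * (- (s * c)), sgn_of (snd g) * c)"

text \<open>At a point on a side the class has two representatives; \<open>entering_copy\<close> picks the one
  whose ray leaves the side into the table.\<close>

definition entering_copy :: "bool \<times> bool \<Rightarrow> real \<times> real \<Rightarrow> bool \<times> bool" where
  "entering_copy g p =
     (if slot_end a (fst p) \<and> (in_slot b (snd p) \<or> slot_end b (snd p)) then slot_upper_end a (fst p) else fst g,
      if slot_end b (snd p) \<and> (in_slot a (fst p) \<or> slot_end a (fst p)) then \<not> slot_upper_end b (snd p) else snd g)"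

lemma wt_class_entering_copy: "wt_class a b (entering_copy g p, p) = wt_class a b (g, p)"
proof -
  obtain x y where pxy: "p = (x, y)" by (cases p)
  define cx where "cx = (slot_end a x \<and> (in_slot b y \<or> slot_end b y))"
  define cy where "cy = (slot_end b y \<and> (in_slot a x \<or> slot_end a x))"
  define g' where "g' = entering_copy g p"
  have g'_alt: "g' = (if cx then slot_upper_end a x else fst g, if cy then \<not> slot_upper_end b y else snd g)"
    by (simp add: g'_def entering_copy_def cx_def cy_def pxy)
  have "wt_class a b (g', p) = wt_class a b (g, p)"
  proof (cases "is_corner a b p")
    case True then show ?thesis by (rule wt_class_corner)
  next
    case False
    have ncxy: "\<not> (cx \<and> cy)" using False by (auto simp: cx_def cy_def pxy is_corner_iff dest: in_slot_not_slot_end[OF a0 a1] in_slot_not_slot_end[OF b0 b1])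
    show ?thesis
    proof (cases cx)
      case True
      then have v: "on_vside a b p" using False by (auto simp: cx_def pxy on_vside_iff is_corner_iff)
      have g'e: "g' = (slot_upper_end a x, snd g)" using True ncxy by (simp add: g'_alt)
      show ?thesis
      proof (cases "slot_upper_end a x = fst g")
        case True then show ?thesis using g'e by (cases g) simp
      next
        case False
        then have "g' = (\<not> fst g, snd g)" using g'e by auto
        then show ?thesis using wt_class_vflip[OF v] by simp
      qed
    next
      case False
      show ?thesis
      proof (cases cy)
        case True
        then have v: "on_hside a b p" using \<open>\<not> is_corner a b p\<close> by (auto simp: cy_def pxy on_hside_iff is_corner_iff)
        have g'e: "g' = (fst g, \<not> slot_upper_end b y)" using True False by (simp add: g'_alt)
        show ?thesis
        proof (cases "(\<not> slot_upper_end b y) = snd g")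
          case True then show ?thesis using g'e by (cases g) simp
        next
          case False
          then have "g' = (fst g, \<not> snd g)" using g'e by auto
          then show ?thesis using wt_class_hflip[OF v] by simp
        qed
      next
        case False
        then show ?thesis using \<open>\<not> cx\<close> by (simp add: g'_alt)
      qed
    qed
  qed
  then show ?thesis by (simp add: g'_def)
qed

lemma entering_copy_ray:
  assumes p: "p \<in> table_cl a b"
  shows "\<not> (enters_slot a (fst p) (fst (ray_dir (entering_copy g p))) \<and>
           enters_slot b (snd p) (snd (ray_dir (entering_copy g p))))"
proof -
  obtain x y where pxy: "p = (x, y)" by (cases p)
  define cx where "cx = (slot_end a x \<and> (in_slot b y \<or> slot_end b y))"
  define cy where "cy = (slot_end b y \<and> (in_slot a x \<or> slot_end a x))"
  define g' where "g' = entering_copy g p"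
  have g'_alt: "g' = (if cx then slot_upper_end a x else fst g, if cy then \<not> slot_upper_end b y else snd g)"
    by (simp add: g'_def entering_copy_def cx_def cy_def pxy)
  have sc: "s * c > 0" using slope_pos c0 by simp
  have wx: "fst (ray_dir g') > 0 \<longleftrightarrow> fst g'" using sc by (auto simp: ray_dir_def sgn_of_def)
  have wx': "fst (ray_dir g') < 0 \<longleftrightarrow> \<not> fst g'" using sc by (auto simp: ray_dir_def sgn_of_def)
  have wy: "snd (ray_dir g') > 0 \<longleftrightarrow> \<not> snd g'" using c0 by (auto simp: ray_dir_def sgn_of_def)
  have wy': "snd (ray_dir g') < 0 \<longleftrightarrow> snd g'" using c0 by (auto simp: ray_dir_def sgn_of_def)
  have "enters_slot a x (fst (ray_dir g')) \<longrightarrow> enters_slot b y (snd (ray_dir g')) \<longrightarrow> False"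
  proof (intro impI)
    assume X: "enters_slot a x (fst (ray_dir g'))"
      and Y: "enters_slot b y (snd (ray_dir g'))"
    have yc: "in_slot b y \<or> slot_end b y" using Y unfolding enters_slot_def by (auto intro: slot_end_of_lower slot_end_of_upper)
    have xc: "in_slot a x \<or> slot_end a x" using X unfolding enters_slot_def by (auto intro: slot_end_of_lower slot_end_of_upper)
    show False
    proof (cases "slot_end a x")
      case True
      then have "cx" using yc by (simp add: cx_def)
      then have f: "fst g' = slot_upper_end a x" by (simp add: g'_alt)
      have "\<not> in_slot a x" using in_slot_not_slot_end[OF a0 a1] True by blast
      then show False using X f wx wx' slot_lower_not_upper[OF a0 a1] by (auto simp: enters_slot_def)
    next
      case False
      then have IIx: "in_slot a x" using xc by simp
      show False
      proof (cases "slot_end b y")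
        case True
        then have "cy" using IIx by (simp add: cy_def)
        then have f: "snd g' = (\<not> slot_upper_end b y)" by (simp add: g'_alt)
        have "\<not> in_slot b y" using in_slot_not_slot_end[OF b0 b1] True by blast
        then show False using Y f wy wy' slot_lower_not_upper[OF b0 b1] by (auto simp: enters_slot_def)
      next
        case False
        then have "in_slot b y" using yc by simp
        then show False using IIx p by (simp add: table_cl_def in_obst_iff pxy)
      qed
    qed
  qed
  then show ?thesis by (auto simp: g'_def pxy)
qed

lemma label_free_eq: "label_free g i (x - of_int i) y = (if col_level g i x y - of_int \<lfloor>col_level g i x y\<rfloor> < b
     then (False, (False, snd g), i, \<lfloor>col_level g i x y\<rfloor> mod (2 * pp))
     else (True, g, 0, \<lfloor>col_level g i x y\<rfloor> + (if snd g then 1 else 0) - (if fst g = snd g then 1 else -1) * i * pp))"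
  by (simp add: label_free_def col_level_def Let_def algebra_simps)

lemma label_under_eq: "\<lceil>y\<rceil> - 1 = r \<Longrightarrow> label_under g i (x - of_int i) y =
   (True, (fst g, hgap < phase_mod (under_phase g i r x y)), 0,
    if hgap < phase_mod (under_phase g i r x y) then r + 1 + (if fst g then - i else i) * pp else r - (if fst g then - i else i) * pp)"
  by (simp add: label_under_def under_phase_def phase_mod_def Let_def)

lemma col_level_ray: "col_level g i (x + fst (ray_dir g) * d) (y + snd (ray_dir g) * d) = col_level g i x y + sgn_of (snd g) * kappa * d"
proof -
  have "col_level g i (x + fst (ray_dir g) * d) (y + snd (ray_dir g) * d) = col_level g i x y + d * sgn_of (snd g) * c * (1 + s * s * (sgn_of (fst g) * sgn_of (fst g)))"
    by (simp add: col_level_def ray_dir_def algebra_simps)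
  then show ?thesis by (simp add: sgn_of_sq kappa_def algebra_simps)
qed

lemma under_phase_ray: "under_phase g i r (x + fst (ray_dir g) * d) (y + snd (ray_dir g) * d) = under_phase g i r x y + kappa * d"
proof -
  have "under_phase g i r (x + fst (ray_dir g) * d) (y + snd (ray_dir g) * d) = under_phase g i r x y + d * c * (sgn_of (snd g) * sgn_of (snd g) + s * s * (sgn_of (fst g) * sgn_of (fst g)))"
    by (cases "fst g"; cases "snd g") (simp_all add: under_phase_def ray_dir_def sgn_of_def algebra_simps)
  then show ?thesis by (simp add: sgn_of_sq kappa_def algebra_simps)
qed

definition ray_in_strip :: "bool \<times> bool \<Rightarrow> real \<times> real \<Rightarrow> bool \<times> (bool \<times> bool) \<times> int \<times> int \<Rightarrow> bool" where
  "ray_in_strip g p l \<longleftrightarrow> (\<exists>\<delta>0>0. \<forall>\<delta>. 0 < \<delta> \<and> \<delta> < \<delta>0 \<longrightarrow>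
     (fst p + fst (ray_dir g) * \<delta>, snd p + snd (ray_dir g) * \<delta>) \<in> table_cl a b \<and>
     wt_class a b (g, (fst p + fst (ray_dir g) * \<delta>, snd p + snd (ray_dir g) * \<delta>)) \<in> strip_of l)"

lemma ray_in_strip_free:
  assumes dx: "\<delta>x > 0"
    and "\<forall>\<delta>. 0 < \<delta> \<and> \<delta> < \<delta>x \<longrightarrow> of_int i + a < x + fst (ray_dir g') * \<delta> \<and> x + fst (ray_dir g') * \<delta> < of_int i + 1"
  shows "\<exists>l \<in> labels. ray_in_strip g' (x, y) l"
proof -
  define \<alpha> where "\<alpha> = fst (ray_dir g')"
  define \<beta> where "\<beta> = snd (ray_dir g')"
  have Xfree: "\<forall>\<delta>. 0 < \<delta> \<and> \<delta> < \<delta>x \<longrightarrow> of_int i + a < x + \<alpha> * \<delta> \<and> x + \<alpha> * \<delta> < of_int i + 1"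
    using assms(2) by (simp add: \<alpha>_def)
  define \<Lambda>0 where "\<Lambda>0 = col_level g' i x y"
  have sl: "sgn_of (snd g') * kappa \<noteq> 0" using kappa_pos by (simp add: sgn_of_def)
  obtain \<delta>L n where dL: "\<delta>L > 0" and LL: "((\<forall>\<delta>. 0 < \<delta> \<and> \<delta> < \<delta>L \<longrightarrow> of_int n < \<Lambda>0 + sgn_of (snd g') * kappa * \<delta> \<and> \<Lambda>0 + sgn_of (snd g') * kappa * \<delta> < of_int n + b) \<and> True)
    \<or> (\<forall>\<delta>. 0 < \<delta> \<and> \<delta> < \<delta>L \<longrightarrow> of_int n + b < \<Lambda>0 + sgn_of (snd g') * kappa * \<delta> \<and> \<Lambda>0 + sgn_of (snd g') * kappa * \<delta> < of_int n + 1)"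
    using ray_slot[OF b0 b1 sl, of \<Lambda>0] by blast
  define inL where "inL = (\<forall>\<delta>. 0 < \<delta> \<and> \<delta> < \<delta>L \<longrightarrow> of_int n < \<Lambda>0 + sgn_of (snd g') * kappa * \<delta> \<and> \<Lambda>0 + sgn_of (snd g') * kappa * \<delta> < of_int n + b)"
  define l where "l = (if inL then (False, (False, snd g'), i, n mod (2 * pp))
     else (True, g', 0, n + (if snd g' then 1 else 0) - (if fst g' = snd g' then 1 else -1) * i * pp))"
  define \<delta>0 where "\<delta>0 = min \<delta>x \<delta>L"
  have d0: "\<delta>0 > 0" using dx dL by (simp add: \<delta>0_def)
  have main: "(x + \<alpha> * \<delta>, y + \<beta> * \<delta>) \<in> table_cl a b \<and> strip_label (g', (x + \<alpha> * \<delta>, y + \<beta> * \<delta>)) \<in> labels \<and>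
      wt_class a b (g', (x + \<alpha> * \<delta>, y + \<beta> * \<delta>)) \<in> strip_of (strip_label (g', (x + \<alpha> * \<delta>, y + \<beta> * \<delta>))) \<and>
      strip_label (g', (x + \<alpha> * \<delta>, y + \<beta> * \<delta>)) = l" if d: "0 < \<delta>" "\<delta> < \<delta>0" for \<delta>
  proof -
    have xr: "of_int i + a < x + \<alpha> * \<delta>" "x + \<alpha> * \<delta> < of_int i + 1" using Xfree d by (auto simp: \<delta>0_def)
    have tb: "(x + \<alpha> * \<delta>, y + \<beta> * \<delta>) \<in> table_cl a b" using xr by (intro table_cl_column[of i]) auto
    have Lm: "col_level g' i (x + \<alpha> * \<delta>) (y + \<beta> * \<delta>) = \<Lambda>0 + sgn_of (snd g') * kappa * \<delta>"
      using col_level_ray[of g' i x \<delta> y] by (simp add: \<alpha>_def \<beta>_def \<Lambda>0_def mult.commute)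
    have Lr: "(of_int n < \<Lambda>0 + sgn_of (snd g') * kappa * \<delta> \<and> \<Lambda>0 + sgn_of (snd g') * kappa * \<delta> < of_int n + b \<and> inL) \<or>
              (of_int n + b < \<Lambda>0 + sgn_of (snd g') * kappa * \<delta> \<and> \<Lambda>0 + sgn_of (snd g') * kappa * \<delta> < of_int n + 1 \<and> \<not> inL)"
    proof (cases inL)
      case True
      then show ?thesis using d unfolding inL_def \<delta>0_def by auto
    next
      case False
      then have "\<forall>\<delta>. 0 < \<delta> \<and> \<delta> < \<delta>L \<longrightarrow> of_int n + b < \<Lambda>0 + sgn_of (snd g') * kappa * \<delta> \<and> \<Lambda>0 + sgn_of (snd g') * kappa * \<delta> < of_int n + 1"
        using LL unfolding inL_def by blast
      then show ?thesis using d False unfolding \<delta>0_def by auto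
    qed
    have fl: "\<lfloor>\<Lambda>0 + sgn_of (snd g') * kappa * \<delta>\<rfloor> = n" using Lr b0 b1 by (intro floor_unique) auto
    have gen: "generic_free i (g', (x + \<alpha> * \<delta>, y + \<beta> * \<delta>))"
      unfolding generic_free_def fst_conv snd_conv Lm fl using xr Lr b0 by auto
    have K: "strip_label (g', (x + \<alpha> * \<delta>, y + \<beta> * \<delta>)) = l"
      using strip_label_free[of i "x + \<alpha> * \<delta>" g' "y + \<beta> * \<delta>"] xr label_free_eq[of g' i "x + \<alpha> * \<delta>" "y + \<beta> * \<delta>"] Lm fl Lr
      by (auto simp: l_def)
    show ?thesis using generic_free_mem_strip[OF gen] tb K by simp
  qed
  have "l \<in> labels" using main[of "\<delta>0 / 2"] d0 by auto
  moreover have "ray_in_strip g' (x, y) l"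
    unfolding ray_in_strip_def fst_conv snd_conv \<alpha>_def[symmetric] \<beta>_def[symmetric]
    using d0 main by blast
  ultimately show ?thesis by blast
qed

lemma ray_in_strip_under:
  assumes dx: "\<delta>x > 0"
    and Xin: "\<forall>\<delta>. 0 < \<delta> \<and> \<delta> < \<delta>x \<longrightarrow> of_int i < x + fst (ray_dir g') * \<delta> \<and> x + fst (ray_dir g') * \<delta> < of_int i + a"
    and dy: "\<delta>y > 0"
    and Yout: "\<forall>\<delta>. 0 < \<delta> \<and> \<delta> < \<delta>y \<longrightarrow> of_int r + b < y + snd (ray_dir g') * \<delta> \<and> y + snd (ray_dir g') * \<delta> < of_int r + 1"
  shows "\<exists>l \<in> labels. ray_in_strip g' (x, y) l"
proof -
  define \<alpha> where "\<alpha> = fst (ray_dir g')"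
  define \<beta> where "\<beta> = snd (ray_dir g')"
  note Xin = Xin[folded \<alpha>_def] and Yout = Yout[folded \<beta>_def]
  define v0 where "v0 = under_phase g' i r x y"
  have sl: "kappa / (2 * hgap) \<noteq> 0" using kappa_pos hgap_pos by simp
  have half: "(0::real) < 1 / 2" "(1::real) / 2 < 1" by simp_all
  obtain \<delta>V N where dV: "\<delta>V > 0" and VV: "((\<forall>\<delta>. 0 < \<delta> \<and> \<delta> < \<delta>V \<longrightarrow> of_int N < v0 / (2 * hgap) + kappa / (2 * hgap) * \<delta> \<and> v0 / (2 * hgap) + kappa / (2 * hgap) * \<delta> < of_int N + 1 / 2) \<and> True)
    \<or> (\<forall>\<delta>. 0 < \<delta> \<and> \<delta> < \<delta>V \<longrightarrow> of_int N + 1 / 2 < v0 / (2 * hgap) + kappa / (2 * hgap) * \<delta> \<and> v0 / (2 * hgap) + kappa / (2 * hgap) * \<delta> < of_int N + 1)"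
    using ray_slot[OF half sl, of "v0 / (2 * hgap)"] by blast
  define inV where "inV = (\<forall>\<delta>. 0 < \<delta> \<and> \<delta> < \<delta>V \<longrightarrow> of_int N < v0 / (2 * hgap) + kappa / (2 * hgap) * \<delta> \<and> v0 / (2 * hgap) + kappa / (2 * hgap) * \<delta> < of_int N + 1 / 2)"
  define M where "M = (if fst g' then - i else i)"
  define l where "l = (True, (fst g', \<not> inV), (0::int), if \<not> inV then r + 1 + M * pp else r - M * pp)"
  define \<delta>0 where "\<delta>0 = min \<delta>x (min \<delta>y \<delta>V)"
  have d0: "\<delta>0 > 0" using dx dy dV by (simp add: \<delta>0_def)
  have main: "(x + \<alpha> * \<delta>, y + \<beta> * \<delta>) \<in> table_cl a b \<and> strip_label (g', (x + \<alpha> * \<delta>, y + \<beta> * \<delta>)) \<in> labels \<and>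
      wt_class a b (g', (x + \<alpha> * \<delta>, y + \<beta> * \<delta>)) \<in> strip_of (strip_label (g', (x + \<alpha> * \<delta>, y + \<beta> * \<delta>))) \<and>
      strip_label (g', (x + \<alpha> * \<delta>, y + \<beta> * \<delta>)) = l" if d: "0 < \<delta>" "\<delta> < \<delta>0" for \<delta>
  proof -
    have xr: "of_int i < x + \<alpha> * \<delta>" "x + \<alpha> * \<delta> < of_int i + a" using Xin d by (auto simp: \<delta>0_def)
    have yr: "of_int r + b < y + \<beta> * \<delta>" "y + \<beta> * \<delta> < of_int r + 1" using Yout d by (auto simp: \<delta>0_def)
    have tb: "(x + \<alpha> * \<delta>, y + \<beta> * \<delta>) \<in> table_cl a b" using yr by (intro table_cl_corridor[of r]) auto
    have vv: "under_phase g' i r (x + \<alpha> * \<delta>) (y + \<beta> * \<delta>) = v0 + kappa * \<delta>"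
      using under_phase_ray[of g' i r x \<delta> y] by (simp add: \<alpha>_def \<beta>_def v0_def mult.commute)
    have vq: "(v0 + kappa * \<delta>) / (2 * hgap) = v0 / (2 * hgap) + kappa / (2 * hgap) * \<delta>" by (simp add: add_divide_distrib)
    define w where "w = v0 / (2 * hgap) + kappa / (2 * hgap) * \<delta>"
    have Vr0: "(of_int N < w \<and> w < of_int N + 1 / 2 \<and> inV) \<or>
              (of_int N + 1 / 2 < w \<and> w < of_int N + 1 \<and> \<not> inV)"
    proof (cases inV)
      case True
      then show ?thesis using d unfolding inV_def \<delta>0_def w_def by auto
    next
      case False
      then have "\<forall>\<delta>. 0 < \<delta> \<and> \<delta> < \<delta>V \<longrightarrow> of_int N + 1 / 2 < v0 / (2 * hgap) + kappa / (2 * hgap) * \<delta> \<and> v0 / (2 * hgap) + kappa / (2 * hgap) * \<delta> < of_int N + 1"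
        using VV unfolding inV_def by blast
      then show ?thesis using d False unfolding \<delta>0_def w_def by auto
    qed
    have Vr: "(of_int N < (v0 + kappa * \<delta>) / (2 * hgap) \<and> (v0 + kappa * \<delta>) / (2 * hgap) < of_int N + 1 / 2 \<and> inV) \<or>
              (of_int N + 1 / 2 < (v0 + kappa * \<delta>) / (2 * hgap) \<and> (v0 + kappa * \<delta>) / (2 * hgap) < of_int N + 1 \<and> \<not> inV)"
      using Vr0 unfolding w_def vq[symmetric] .
    have fl: "\<lfloor>(v0 + kappa * \<delta>) / (2 * hgap)\<rfloor> = N" using Vr by (intro floor_unique) auto
    have h2: "2 * hgap > 0" using hgap_pos by simp
    have rho: "(0 < phase_mod (v0 + kappa * \<delta>) \<and> phase_mod (v0 + kappa * \<delta>) < hgap \<and> inV) \<or> (hgap < phase_mod (v0 + kappa * \<delta>) \<and> phase_mod (v0 + kappa * \<delta>) < 2 * hgap \<and> \<not> inV)"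
    proof -
      define u where "u = (v0 + kappa * \<delta>) / (2 * hgap)"
      define q where "q = u - of_int N"
      have vv2: "v0 + kappa * \<delta> = 2 * hgap * ((v0 + kappa * \<delta>) / (2 * hgap))" using hgap_pos by simp
      have e: "phase_mod (v0 + kappa * \<delta>) = 2 * hgap * q"
        unfolding phase_mod_def fl q_def u_def by (subst vv2) (simp add: algebra_simps)
      have Vr': "(of_int N < u \<and> u < of_int N + 1 / 2 \<and> inV) \<or> (of_int N + 1 / 2 < u \<and> u < of_int N + 1 \<and> \<not> inV)"
        using Vr unfolding u_def[symmetric] .
      have qr: "(0 < q \<and> q < 1 / 2 \<and> inV) \<or> (1 / 2 < q \<and> q < 1 \<and> \<not> inV)"
        using Vr' unfolding q_def by auto
      have m1: "2 * hgap * q < 2 * hgap * (1 / 2)" if "q < 1 / 2" using that h2 by (rule mult_strict_left_mono)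
      have m2: "2 * hgap * (1 / 2) < 2 * hgap * q" if "1 / 2 < q" using that h2 by (rule mult_strict_left_mono)
      have m3: "2 * hgap * q < 2 * hgap * 1" if "q < 1" using that h2 by (rule mult_strict_left_mono)
      have m4: "0 < 2 * hgap * q" if "0 < q" using that h2 by simp
      show ?thesis unfolding e using qr m1 m2 m3 m4 by auto
    qed
    have gen: "generic_under i r (g', (x + \<alpha> * \<delta>, y + \<beta> * \<delta>))"
      unfolding generic_under_def fst_conv snd_conv vv using xr yr rho by auto
    have rr: "\<lceil>y + \<beta> * \<delta>\<rceil> - 1 = r" using yr b0 by (intro ceiling_minus_one_eq) auto
    have K: "strip_label (g', (x + \<alpha> * \<delta>, y + \<beta> * \<delta>)) = l"
      using strip_label_under[of i "x + \<alpha> * \<delta>" g' "y + \<beta> * \<delta>"] xr label_under_eq[OF rr, of g' i "x + \<alpha> * \<delta>"] vv rho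
      by (auto simp: l_def M_def)
    show ?thesis using generic_under_mem_strip[OF gen] tb K by simp
  qed
  have "l \<in> labels" using main[of "\<delta>0 / 2"] d0 by auto
  moreover have "ray_in_strip g' (x, y) l"
    unfolding ray_in_strip_def fst_conv snd_conv \<alpha>_def[symmetric] \<beta>_def[symmetric]
    using d0 main by blast
  ultimately show ?thesis by blast
qed

lemma ray_into_strip:
  assumes p: "p \<in> table_cl a b"
  shows "\<exists>g'. wt_class a b (g', p) = wt_class a b (g, p) \<and> (\<exists>l \<in> labels. ray_in_strip g' p l)"
proof -
  obtain x y where pxy: "p = (x, y)" by (cases p)
  define g' where "g' = entering_copy g p"
  have cl: "wt_class a b (g', p) = wt_class a b (g, p)"
    by (simp add: g'_def wt_class_entering_copy)
  have av: "enters_slot a x (fst (ray_dir g')) \<Longrightarrow> enters_slot b y (snd (ray_dir g')) \<Longrightarrow> False"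
    using entering_copy_ray[OF p, of g] by (simp add: g'_def pxy)
  define \<alpha> where "\<alpha> = fst (ray_dir g')"
  define \<beta> where "\<beta> = snd (ray_dir g')"
  have al: "\<alpha> \<noteq> 0" using slope_pos c0 by (simp add: \<alpha>_def ray_dir_def sgn_of_def)
  have be: "\<beta> \<noteq> 0" using c0 by (simp add: \<beta>_def ray_dir_def sgn_of_def)
  obtain \<delta>x i where dx: "\<delta>x > 0" and X: "((\<forall>\<delta>. 0 < \<delta> \<and> \<delta> < \<delta>x \<longrightarrow> of_int i < x + \<alpha> * \<delta> \<and> x + \<alpha> * \<delta> < of_int i + a) \<and>
         (enters_slot a x \<alpha>))
   \<or> (\<forall>\<delta>. 0 < \<delta> \<and> \<delta> < \<delta>x \<longrightarrow> of_int i + a < x + \<alpha> * \<delta> \<and> x + \<alpha> * \<delta> < of_int i + 1)"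
    using ray_slot[OF a0 a1 al, of x] by blast
  obtain \<delta>y r where dy: "\<delta>y > 0" and Y: "((\<forall>\<delta>. 0 < \<delta> \<and> \<delta> < \<delta>y \<longrightarrow> of_int r < y + \<beta> * \<delta> \<and> y + \<beta> * \<delta> < of_int r + b) \<and>
         (enters_slot b y \<beta>))
   \<or> (\<forall>\<delta>. 0 < \<delta> \<and> \<delta> < \<delta>y \<longrightarrow> of_int r + b < y + \<beta> * \<delta> \<and> y + \<beta> * \<delta> < of_int r + 1)"
    using ray_slot[OF b0 b1 be, of y] by blast
  have "\<exists>l \<in> labels. ray_in_strip g' (x, y) l"
  proof (cases "\<forall>\<delta>. 0 < \<delta> \<and> \<delta> < \<delta>x \<longrightarrow> of_int i + a < x + \<alpha> * \<delta> \<and> x + \<alpha> * \<delta> < of_int i + 1")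
    case True
    then show ?thesis using ray_in_strip_free[OF dx] by (simp add: \<alpha>_def)
  next
    case False
    then have Xin: "\<forall>\<delta>. 0 < \<delta> \<and> \<delta> < \<delta>x \<longrightarrow> of_int i < x + \<alpha> * \<delta> \<and> x + \<alpha> * \<delta> < of_int i + a"
      and Xinfo: "enters_slot a x \<alpha>" using X by auto
    have Yout: "\<forall>\<delta>. 0 < \<delta> \<and> \<delta> < \<delta>y \<longrightarrow> of_int r + b < y + \<beta> * \<delta> \<and> y + \<beta> * \<delta> < of_int r + 1"
      using Y av Xinfo unfolding \<alpha>_def \<beta>_def by blast
    show ?thesis using ray_in_strip_under[OF dx _ dy] Xin Yout by (simp add: \<alpha>_def \<beta>_def)
  qed
  then show ?thesis using cl pxy by blast
qed

lemma ray_dir_norm: "sqrt ((fst (ray_dir g))^2 + (snd (ray_dir g))^2) = 1"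
proof -
  have "(fst (ray_dir g))^2 + (snd (ray_dir g))^2 = c * c * (1 + s * s) * (sgn_of (fst g) * sgn_of (fst g))"
    by (cases g) (auto simp: ray_dir_def sgn_of_def power2_eq_square algebra_simps)
  then show ?thesis using cs sgn_of_sq by simp
qed

lemma closure_cover: "z \<in> Xinf a b \<Longrightarrow> \<exists>S \<in> strip_of ` labels. z \<in> Xtop a b closure_of S"
proof -
  assume z: "z \<in> Xinf a b"
  then obtain g p where gp: "z = wt_class a b (g, p)" "p \<in> table_cl a b" by (auto simp: Xinf_def XR_def)
  obtain g' l where cl: "wt_class a b (g', p) = wt_class a b (g, p)" and l: "l \<in> labels"
    and "ray_in_strip g' p l"
    using ray_into_strip[OF gp(2), of g] by blast
  then obtain \<delta>0 where d0: "\<delta>0 > 0"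
    and R: "\<forall>\<delta>. 0 < \<delta> \<and> \<delta> < \<delta>0 \<longrightarrow> (fst p + fst (ray_dir g') * \<delta>, snd p + snd (ray_dir g') * \<delta>) \<in> table_cl a b \<and>
        wt_class a b (g', (fst p + fst (ray_dir g') * \<delta>, snd p + snd (ray_dir g') * \<delta>)) \<in> strip_of l"
    unfolding ray_in_strip_def by blast
  have "z \<in> Xtop a b closure_of strip_of l"
    unfolding in_closure_of
  proof (intro conjI allI impI)
    show "z \<in> topspace (Xtop a b)" using Xinf_topspace[OF z] .
    fix T assume T: "z \<in> T \<and> openin (Xtop a b) T"
    then have op: "openin (top_of_set (table_cl a b)) {p \<in> table_cl a b. wt_class a b (g', p) \<in> T}"
      unfolding openin_Xtop by blast
    have "p \<in> {p \<in> table_cl a b. wt_class a b (g', p) \<in> T}" using T gp cl by simp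
    then obtain e where e: "e > 0" "\<forall>x'\<in>table_cl a b. dist x' p < e \<longrightarrow> x' \<in> {p \<in> table_cl a b. wt_class a b (g', p) \<in> T}"
      using op unfolding openin_euclidean_subtopology_iff by blast
    define \<delta> where "\<delta> = min \<delta>0 e / 2"
    have d: "0 < \<delta>" "\<delta> < \<delta>0" "\<delta> < e" using d0 e by (auto simp: \<delta>_def)
    define q where "q = (fst p + fst (ray_dir g') * \<delta>, snd p + snd (ray_dir g') * \<delta>)"
    have dq: "dist q p = \<delta>"
    proof -
      have "dist q p = sqrt ((fst (ray_dir g') * \<delta>)^2 + (snd (ray_dir g') * \<delta>)^2)"
        by (cases p) (simp add: q_def dist_Pair_Pair dist_real_def)
      also have "\<dots> = sqrt (\<delta>^2 * ((fst (ray_dir g'))^2 + (snd (ray_dir g'))^2))" by (simp add: power_mult_distrib algebra_simps)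
      also have "\<dots> = \<delta> * sqrt ((fst (ray_dir g'))^2 + (snd (ray_dir g'))^2)" using d by (simp add: real_sqrt_mult)
      finally show ?thesis using ray_dir_norm by simp
    qed
    have qt: "q \<in> table_cl a b" "wt_class a b (g', q) \<in> strip_of l" using R d unfolding q_def by auto
    then have "wt_class a b (g', q) \<in> T" using e dq d by auto
    then show "\<exists>y. y \<in> strip_of l \<and> y \<in> T" using qt by blast
  qed
  then show ?thesis using l by blast
qed

lemma strip_decomp: "wt_strip_decomp a b th (strip_of ` labels)"
  unfolding wt_strip_decomp_def
proof (intro conjI ballI)
  show "\<And>S. S \<in> strip_of ` labels \<Longrightarrow> wt_strip a b th S" using wt_strip_strip_of by auto
  show "pairwise disjnt (strip_of ` labels)"
    unfolding pairwise_def disjnt_def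
  proof (intro ballI impI)
    fix S T assume S: "S \<in> strip_of ` labels" and T: "T \<in> strip_of ` labels" and ne: "S \<noteq> T"
    obtain l where l: "l \<in> labels" "S = strip_of l" using S by blast
    obtain l' where l': "l' \<in> labels" "T = strip_of l'" using T by blast
    show "S \<inter> T = {}"
    proof (rule ccontr)
      assume "S \<inter> T \<noteq> {}"
      then obtain C where "C \<in> strip_of l" "C \<in> strip_of l'" using l l' by blast
      then have "l = l'" using strip_of_disjoint l(1) l'(1) by blast
      then show False using ne l l' by simp
    qed
  qed
  show "\<And>z. z \<in> Xinf a b \<Longrightarrow> \<exists>S\<in>strip_of ` labels. z \<in> Xtop a b closure_of S" using closure_cover by blast
qed

end

section \<open>The direction exists\<close>

lemma wt_E_ratio_rational:
  assumes "(a, b) \<in> wt_E"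
  shows "a / ((1 - a) * (1 - b)) \<in> \<rat>"
proof -
  obtain x y :: real and D :: int where ab: "a < 1" "b < 1" and xy: "x \<in> \<rat>" "y \<in> \<rat>" "D > 0"
    and e1: "1 / (1 - a) = x + y * sqrt (of_int D)" and e2: "1 / (1 - b) = (1 - x) + y * sqrt (of_int D)"
    using assms unfolding wt_E_def by blast
  have "a / (1 - a) = 1 / (1 - a) - 1" using ab by (simp add: field_simps)
  then have ea: "a / (1 - a) = x - 1 + y * sqrt (of_int D)" using e1 by simp
  have "a / ((1 - a) * (1 - b)) = (a / (1 - a)) * (1 / (1 - b))" by simp
  also have "\<dots> = (x - 1 + y * sqrt (of_int D)) * ((1 - x) + y * sqrt (of_int D))" using ea e2 by simp
  also have "\<dots> = y^2 * (sqrt (of_int D))^2 - (x - 1)^2" by (simp add: power2_eq_square algebra_simps)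
  also have "\<dots> = y^2 * of_int D - (x - 1)^2" using xy by simp
  finally show ?thesis using xy by (simp add: Rats_diff Rats_mult Rats_power)
qed

lemma wind_tree_dir_exists:
  assumes ab: "0 < a" "a < 1" "0 < b" "b < 1" and rQ: "a / ((1 - a) * (1 - b)) \<in> \<rat>"
  shows "\<exists>s c pp qq. wind_tree_dir a b s c (arctan s) pp qq"
proof -
  define r where "r = a / ((1 - a) * (1 - b))"
  have a1: "1 - a \<noteq> 0" "1 - b \<noteq> 0" using ab by auto
  have r0: "r > 0" using ab by (simp add: r_def)
  obtain n d :: int where nd: "d > 0" "r = of_int n / of_int d" using Rats_cases'[OF rQ[folded r_def]] by metis
  have n0: "n > 0"
  proof -
    have dd: "(of_int d::real) > 0" using nd by simp
    have "of_int n = r * of_int d" using nd dd by simp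
    then have "(of_int n::real) > 0" using r0 dd by simp
    then show ?thesis by simp
  qed
  define pp where "pp = 2 * d"
  define qq where "qq = 2 * n"
  define s where "s = of_int pp / (1 - a)"
  define c where "c = 1 / sqrt (1 + s^2)"
  have sp: "s * (1 - a) = of_int pp" using a1 by (simp add: s_def)
  have sq: "s * a = of_int qq * (1 - b)"
  proof -
    have "s * a = of_int pp * (a / (1 - a))" by (simp add: s_def)
    also have "a / (1 - a) = r * (1 - b)" using a1 by (simp add: r_def)
    finally have "s * a = of_int pp * r * (1 - b)" by simp
    also have "of_int pp * r = of_int qq" using nd by (simp add: pp_def qq_def)
    finally show ?thesis .
  qed
  have pos: "1 + s^2 > 0" by (simp add: add_pos_nonneg)
  have "c * c = 1 / (1 + s^2)"
    using pos by (simp add: c_def power_divide flip: power2_eq_square)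
  then have cs: "c * c * (1 + s * s) = 1"
    using pos by (simp add: power2_eq_square)
  have "wind_tree_dir a b s c (arctan s) pp qq"
  proof
    show "0 < a" "a < 1" "0 < b" "b < 1" by (rule ab)+
    show "pp \<ge> 1" using nd by (simp add: pp_def)
    show "even qq" by (simp add: qq_def)
    show "qq > 0" using n0 by (simp add: qq_def)
    show "s * (1 - a) = of_int pp" by (rule sp)
    show "s * a = of_int qq * (1 - b)" by (rule sq)
    show "c > 0" using pos by (simp add: c_def)
    show "c * c * (1 + s * s) = 1" by (rule cs)
    show "cos (arctan s) = c" by (simp add: cos_arctan c_def)
    show "sin (arctan s) = s * c" by (simp add: sin_arctan c_def)
  qed
  then show ?thesis by blast
qed

theorem proposition5p6:
  fixes a b :: real
  assumes "(a, b) \<in> wt_E"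
  shows "\<exists>\<theta> :: real. \<exists>\<S>. wt_strip_decomp a b \<theta> \<S>"
proof -
  have "0 < a" "a < 1" "0 < b" "b < 1"
    using assms by (auto simp: wt_E_def)
  then obtain s c pp qq where "wind_tree_dir a b s c (arctan s) pp qq"
    using wind_tree_dir_exists wt_E_ratio_rational[OF assms] by blast
  then show ?thesis
    using wind_tree_dir.strip_decomp by blast
qed

end
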